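(* $\ddot{\varphi}(n): \ddot{H}\ddot{B}\rightarrow \ddot{B}\ddot{H}$ is a monoidal comonad distributive law on $\overline{\mathcal{H}}^{i,j}(Vec_\Bbbk)$ for any $n \in \mathbb{Z}$ if and only if $\varphi$ is a Hom-cotwistor and, for any $a,b \in B$, $h,g \in H$, satisfies (M5) $\sum h^\varphi g^\phi \otimes a^\varphi b^\phi = \sum (hg)^\varphi \otimes (ab)^\varphi$; (M6) $\sum {1_H}^\varphi \otimes {1_B}^\varphi = 1_H \otimes 1_B$.
   Context: $\Bbbk$ is a field of characteristic $0$; all spaces are finite dimensional. For integers $i,j$, $\overline{\mathcal{H}}^{i,j}(Vec_\Bbbk)$ is the monoidal category whose objects are pairs $(X,\alpha_X)$ with $X$ a finite dimensional $\Bbbk$-space and $\alpha_X$ a linear automorphism, morphisms are linear maps commuting with the $\alpha$'s, $(X,\alpha_X)\otimes(Y,\alpha_Y)=(X\otimes Y,\alpha_X\otimes\alpha_Y)$, unit $(\Bbbk,id)$, associativity constraint $a_{X,Y,Z}((x\otimes y)\otimes z)=\alpha_X^{i+1}(x)\otimes(y\otimes\alpha_Z^{-j-1}(z))$, unit constraints $l_X(\lambda\otimes x)=\lambda\alpha_X^{j+1}(x)$, $r_X(x\otimes\lambda)=\lambda\alpha_X^{i+1}(x)$. $(B,\alpha_B)$ and $(H,\alpha_H)$ are Hom-bialgebras over $\Bbbk$ with bijective structure maps. $\ddot{B}=\_\otimes B$, $\ddot{H}=\_\otimes H$ are comonads via $\delta_X(x\otimes h)=(\alpha_X(x)\otimes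 h_1)\otimes\alpha_H^{-1}(h_2)$, $\epsilon_X(x\otimes h)=\varepsilon_H(h)\alpha_X^{-1}(x)$, and monoidal functors via $\ddot{H}_2(X,Y)((x\otimes a)\otimes(y\otimes b))=(x\otimes y)\otimes\alpha_H^i(a)\alpha_H^j(b)$, $\ddot{H}_0(\lambda)=\lambda\otimes 1_H$ (similarly for $B$). $\varphi:B \otimes H\rightarrow H \otimes B$, $\varphi(b\otimes h)=\sum h^\varphi\otimes b^\varphi$, is $\Bbbk$-linear with $\varphi \circ (\alpha_B \otimes \alpha_H) = (\alpha_H \otimes \alpha_B) \circ \varphi$; $\phi$ denotes another copy of $\varphi$. For $n\in\mathbb{Z}$, $\ddot{\varphi}(n)_X((x \otimes b) \otimes h)= \sum (x \otimes {\alpha_H(h)}^\varphi) \otimes \alpha_B^{n}({\alpha_B^{-n-1}(b)}^\varphi)$. $\varphi$ is a Hom-cotwistor if for all $b,h$: (M1) $\sum {{\alpha_H(h)}^\varphi}^\phi \otimes {b_1}^\phi \otimes {b_2}^\varphi = \sum \alpha_H(h^\varphi) \otimes {b^\varphi}_1 \otimes {b^\varphi}_2$; (M2) $\sum {h_1}^\varphi \otimes {h_2}^\phi \otimes { {\alpha_B(b)}^\varphi}^\phi = \sum {h^\varphi}_1 \otimes {h^\varphi}_2 \otimes \alpha_B(b^\varphi)$; (M3) $\sum \varepsilon_H(h^\varphi) b^\varphi = \varepsilon_H(h) b$; (M4) $\sum \varepsilon_B(b^\varphi) h^\varphi = \varepsilon_B(b) h$. For comonads $(F,\Delta,\varepsilon)$,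 $(G,\delta,\epsilon)$ (here $F=\ddot H$, $G=\ddot B$), a comonad distributive law $\psi:FG\to GF$ satisfies $\delta F\circ\psi=G\psi\circ\psi G\circ F\delta$, $G\Delta\circ\psi=\psi F\circ F\psi\circ\Delta G$, $G\varepsilon\circ\psi=\varepsilon G$, $\epsilon F\circ\psi=F\epsilon$. It is a monoidal comonad distributive law if moreover $\psi_{M\otimes N}\circ F(G_2(M,N))\circ F_2(GM,GN) = G(F_2(M,N))\circ G_2(FM,FN)\circ (\psi_M \otimes \psi_N)$ for all $M,N$, and $\psi_I \circ F(G_0) \circ F_0 = G(F_0)\circ G_0$. *)

theory Defs
  imports Main
begin

text \<open>A finite dimensional space of dimension d is modelled as k^d, i.e. the set
  of coordinate vectors nat => k vanishing at indices >= d.  The tensor product k^d (x) k^e is k^(d*e),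
  with (v (x) w) at index p*e+q equal to v p * w q; in these coordinates the
  canonical reassociation X(x)(Y(x)Z) = (X(x)Y)(x)Z is the identity, and k (x) X
  = k^(1*d) = X (x) k = k^d.\<close>

type_synonym 'k vect = "nat \<Rightarrow> 'k"
type_synonym 'k lmap = "'k vect \<Rightarrow> 'k vect"
type_synonym 'k object = "nat \<times> 'k lmap"

definition vsp :: "nat \<Rightarrow> ('k::zero) vect set" where
  "vsp d = {v. \<forall>p\<ge>d. v p = 0}"

definition ebasis :: "nat \<Rightarrow> ('k::{zero,one}) vect" where
  "ebasis i = (\<lambda>p. if p = i then 1 else 0)"

definition tv :: "nat \<Rightarrow> ('k::times) vect \<Rightarrow> 'k vect \<Rightarrow> 'k vect" where
  "tv e v w = (\<lambda>p. v (p div e) * w (p mod e))"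

text \<open>tensor product f (x) g of linear maps f : k^d1 -> k^e1, g : k^d2 -> k^e2\<close>
definition tmap :: "nat \<Rightarrow> nat \<Rightarrow> nat \<Rightarrow> ('k::comm_semiring_1) lmap \<Rightarrow> 'k lmap \<Rightarrow> 'k lmap" where
  "tmap d1 d2 e2 f g u = (\<lambda>p. \<Sum>q<d1*d2.
      u q * f (ebasis (q div d2)) (p div e2) * g (ebasis (q mod d2)) (p mod e2))"

definition lin :: "nat \<Rightarrow> nat \<Rightarrow> ('k::semiring_1) lmap \<Rightarrow> bool" where
  "lin d e f \<longleftrightarrow> (\<forall>v\<in>vsp d. f v \<in> vsp e)
     \<and> (\<forall>u\<in>vsp d. \<forall>v\<in>vsp d. f (\<lambda>p. u p + v p) = (\<lambda>p. f u p + f v p))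
     \<and> (\<forall>c. \<forall>v\<in>vsp d. f (\<lambda>p. c * v p) = (\<lambda>p. c * f v p))"

definition linf :: "nat \<Rightarrow> (('k::semiring_1) vect \<Rightarrow> 'k) \<Rightarrow> bool" where
  "linf d c \<longleftrightarrow> (\<forall>u\<in>vsp d. \<forall>v\<in>vsp d. c (\<lambda>p. u p + v p) = c u + c v)
     \<and> (\<forall>a. \<forall>v\<in>vsp d. c (\<lambda>p. a * v p) = a * c v)"

text \<open>a linear functional viewed as a linear map into k = k^1\<close>
definition eps1 :: "(('k::zero) vect \<Rightarrow> 'k) \<Rightarrow> 'k lmap" where
  "eps1 c = (\<lambda>v p. if p = 0 then c v else 0)"

definition mapeq :: "nat \<Rightarrow> ('k::zero) lmap \<Rightarrow> 'k lmap \<Rightarrow> bool" where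
  "mapeq d f g \<longleftrightarrow> (\<forall>v\<in>vsp d. f v = g v)"

definition zpow :: "nat \<Rightarrow> ('k::zero) lmap \<Rightarrow> int \<Rightarrow> 'k lmap" where
  "zpow d f i = (if 0 \<le> i then f ^^ nat i else (inv_into (vsp d) f) ^^ nat (- i))"

text \<open>the middle swap (X1(x)X2)(x)(X3(x)X4) -> (X1(x)X3)(x)(X2(x)X4)\<close>
definition sw :: "nat \<Rightarrow> nat \<Rightarrow> nat \<Rightarrow> nat \<Rightarrow> ('k::zero) lmap" where
  "sw d1 d2 d3 d4 u = (\<lambda>p. if p < d1*d3*(d2*d4) then
     u (((p div (d2*d4)) div d3 * d2 + (p mod (d2*d4)) div d4) * (d3*d4)
        + ((p div (d2*d4)) mod d3 * d4 + (p mod (d2*d4)) mod d4)) else 0)"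

text \<open>product in the tensor product A1 (x) A2 of two algebras:
  (a1 (x) a2)(b1 (x) b2) = a1 b1 (x) a2 b2, extended bilinearly\<close>
definition tprod :: "nat \<Rightarrow> ('k::comm_semiring_1) lmap \<Rightarrow> nat \<Rightarrow> 'k lmap \<Rightarrow> 'k vect \<Rightarrow> 'k vect \<Rightarrow> 'k vect" where
  "tprod d1 m1 d2 m2 x y = (\<lambda>p. \<Sum>q<d1*d2. \<Sum>r<d1*d2. x q * y r *
      tv d2 (m1 (tv d1 (ebasis (q div d2)) (ebasis (r div d2))))
            (m2 (tv d2 (ebasis (q mod d2)) (ebasis (r mod d2)))) p)"

record 'k hbialg =
  hdim :: nat
  hmul :: "'k lmap"          \<comment> \<open>A (x) A -> A\<close>
  hone :: "'k vect"
  hcomul :: "'k lmap"        \<comment> \<open>A -> A (x) A\<close>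
  hcounit :: "'k vect \<Rightarrow> 'k"
  halpha :: "'k lmap"

definition hom_bialgebra :: "('k::field) hbialg \<Rightarrow> bool" where
  "hom_bialgebra A \<longleftrightarrow>
    (let d = hdim A; m = hmul A; u = hone A; c = hcomul A; e = hcounit A; al = halpha A;
         mul = (\<lambda>a b. m (tv d a b)) in
     lin (d*d) d m \<and> u \<in> vsp d \<and> lin d (d*d) c \<and> linf d e \<and> lin d d al
     \<and> bij_betw al (vsp d) (vsp d)
     \<comment> \<open>Hom-associativity and Hom-unitality\<close>
     \<and> (\<forall>a\<in>vsp d. \<forall>b\<in>vsp d. \<forall>x\<in>vsp d. mul (al a) (mul b x) = mul (mul a b) (al x))
     \<and> (\<forall>a\<in>vsp d. mul u a = al a \<and> mul a u = al a)
     \<comment> \<open>Hom-coassociativity and Hom-counitality\<close>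
     \<and> (\<forall>a\<in>vsp d. tmap d d (d*d) al c (c a) = tmap d d d c al (c a))
     \<and> (\<forall>a\<in>vsp d. tmap d d 1 id (eps1 e) (c a) = al a \<and> tmap d d d (eps1 e) id (c a) = al a)
     \<comment> \<open>alpha is a morphism of the structure\<close>
     \<and> (\<forall>a\<in>vsp d. \<forall>b\<in>vsp d. al (mul a b) = mul (al a) (al b)) \<and> al u = u
     \<and> (\<forall>a\<in>vsp d. c (al a) = tmap d d d al al (c a)) \<and> (\<forall>a\<in>vsp d. e (al a) = e a)
     \<comment> \<open>comultiplication and counit are algebra maps\<close>
     \<and> (\<forall>a\<in>vsp d. \<forall>b\<in>vsp d. c (mul a b) = tprod d m d m (c a) (c b)) \<and> c u = tv d u u
     \<and> (\<forall>a\<in>vsp d. \<forall>b\<in>vsp d. e (mul a b) = e a * e b) \<and> e u = 1)"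

definition obj :: "('k::field) object \<Rightarrow> bool" where
  "obj X \<longleftrightarrow> lin (fst X) (fst X) (snd X) \<and> bij_betw (snd X) (vsp (fst X)) (vsp (fst X))"

definition mor :: "('k::field) object \<Rightarrow> 'k object \<Rightarrow> 'k lmap \<Rightarrow> bool" where
  "mor X Y f \<longleftrightarrow> lin (fst X) (fst Y) f \<and> (\<forall>v\<in>vsp (fst X). f (snd X v) = snd Y (f v))"

definition unit_obj :: "('k::field) object" where
  "unit_obj = (1, id)"

definition otens :: "('k::field) object \<Rightarrow> 'k object \<Rightarrow> 'k object" where
  "otens X Y = (fst X * fst Y, tmap (fst X) (fst Y) (fst Y) (snd X) (snd Y))"

text \<open>the functor _ (x) A on objects and on morphisms (d = dimension of the source)\<close>
definition fobj :: "('k::field) hbialg \<Rightarrow> 'k object \<Rightarrow> 'k object" where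
  "fobj A X = (fst X * hdim A, tmap (fst X) (hdim A) (hdim A) (snd X) (halpha A))"

definition fmor :: "('k::field) hbialg \<Rightarrow> nat \<Rightarrow> 'k lmap \<Rightarrow> 'k lmap" where
  "fmor A d f = tmap d (hdim A) (hdim A) f id"

text \<open>comultiplication delta_X(x (x) h) = (alpha_X x (x) h_1) (x) alpha^-1 h_2\<close>
definition cdelta :: "('k::field) hbialg \<Rightarrow> 'k object \<Rightarrow> 'k lmap" where
  "cdelta A X = tmap (fst X) (hdim A) (hdim A * hdim A) (snd X)
     (\<lambda>h. tmap (hdim A) (hdim A) (hdim A) id (inv_into (vsp (hdim A)) (halpha A)) (hcomul A h))"

text \<open>counit epsilon_X(x (x) h) = eps(h) alpha_X^-1 x\<close>
definition cepsilon :: "('k::field) hbialg \<Rightarrow> 'k object \<Rightarrow> 'k lmap" where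
  "cepsilon A X = tmap (fst X) (hdim A) 1 (inv_into (vsp (fst X)) (snd X)) (eps1 (hcounit A))"

text \<open>monoidal structure A_2(X,Y)((x (x) a) (x) (y (x) b)) = (x (x) y) (x) alpha^i(a) alpha^j(b)\<close>
definition mon2 :: "int \<Rightarrow> int \<Rightarrow> ('k::field) hbialg \<Rightarrow> 'k object \<Rightarrow> 'k object \<Rightarrow> 'k lmap" where
  "mon2 i j A X Y = tmap (fst X * fst Y) (hdim A * hdim A) (hdim A) id
      (\<lambda>c. hmul A (tmap (hdim A) (hdim A) (hdim A)
                     (zpow (hdim A) (halpha A) i) (zpow (hdim A) (halpha A) j) c))
    \<circ> sw (fst X) (hdim A) (fst Y) (hdim A)"

definition mon0 :: "('k::field) hbialg \<Rightarrow> 'k lmap" where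
  "mon0 A u = tv (hdim A) u (hone A)"

text \<open>Monoidal comonad distributive law psi : F G -> G F with F = H.. (comultiplication
  Delta = cdelta H, counit cepsilon H) and G = B.. (delta = cdelta B, counit cepsilon B).
  psi is a family of linear maps indexed by the objects.\<close>
definition mon_comonad_distr_law ::
  "int \<Rightarrow> int \<Rightarrow> ('k::field) hbialg \<Rightarrow> 'k hbialg \<Rightarrow> ('k object \<Rightarrow> 'k lmap) \<Rightarrow> bool" where
  "mon_comonad_distr_law i j (B::'k hbialg) H psi \<longleftrightarrow>
    (let F = fobj H; G = fobj B; Fm = fmor H; Gm = fmor B in
     \<comment> \<open>psi is a natural transformation F G -> G F\<close>
     (\<forall>X::'k object. obj X \<longrightarrow> mor (F (G X)) (G (F X)) (psi X))
     \<and> (\<forall>(X::'k object) (Y::'k object) (f::'k lmap). obj X \<longrightarrow> obj Y \<longrightarrow> mor X Y f \<longrightarrow>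
          mapeq (fst (F (G X))) (psi Y \<circ> Fm (fst (G X)) (Gm (fst X) f))
                                (Gm (fst (F X)) (Fm (fst X) f) \<circ> psi X))
     \<comment> \<open>comonad distributive law axioms\<close>
     \<and> (\<forall>X::'k object. obj X \<longrightarrow>
          mapeq (fst (F (G X))) (cdelta B (F X) \<circ> psi X)
            (Gm (fst (F (G X))) (psi X) \<circ> psi (G X) \<circ> Fm (fst (G X)) (cdelta B X)))
     \<and> (\<forall>X::'k object. obj X \<longrightarrow>
          mapeq (fst (F (G X))) (Gm (fst (F X)) (cdelta H X) \<circ> psi X)
            (psi (F X) \<circ> Fm (fst (F (G X))) (psi X) \<circ> cdelta H (G X)))
     \<and> (\<forall>X::'k object. obj X \<longrightarrow>
          mapeq (fst (F (G X))) (Gm (fst (F X)) (cepsilon H X) \<circ> psi X) (cepsilon H (G X)))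
     \<and> (\<forall>X::'k object. obj X \<longrightarrow>
          mapeq (fst (F (G X))) (cepsilon B (F X) \<circ> psi X) (Fm (fst (G X)) (cepsilon B X)))
     \<comment> \<open>monoidality\<close>
     \<and> (\<forall>(M::'k object) (N::'k object). obj M \<longrightarrow> obj N \<longrightarrow>
          mapeq (fst (otens (F (G M)) (F (G N))))
            (psi (otens M N) \<circ> Fm (fst (otens (G M) (G N))) (mon2 i j B M N)
               \<circ> mon2 i j H (G M) (G N))
            (Gm (fst (otens (F M) (F N))) (mon2 i j H M N) \<circ> mon2 i j B (F M) (F N)
               \<circ> tmap (fst (F (G M))) (fst (F (G N))) (fst (G (F N))) (psi M) (psi N)))
     \<and> mapeq 1 (psi unit_obj \<circ> Fm (fst (unit_obj::'k object)) (mon0 B) \<circ> mon0 H)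
               (Gm (fst (unit_obj::'k object)) (mon0 H) \<circ> mon0 B))"

text \<open>phi : B (x) H -> H (x) B, a linear map k^(dB*dH) -> k^(dH*dB)\<close>
definition ddphi :: "int \<Rightarrow> ('k::field) hbialg \<Rightarrow> 'k hbialg \<Rightarrow> 'k lmap \<Rightarrow> 'k object \<Rightarrow> 'k lmap" where
  "ddphi n B H phi X = tmap (fst X) (hdim B * hdim H) (hdim H * hdim B) id
     (tmap (hdim H) (hdim B) (hdim B) id (zpow (hdim B) (halpha B) n)
       \<circ> phi \<circ> tmap (hdim B) (hdim H) (hdim H) (zpow (hdim B) (halpha B) (- n - 1)) (halpha H))"

definition hom_cotwistor :: "('k::field) hbialg \<Rightarrow> 'k hbialg \<Rightarrow> 'k lmap \<Rightarrow> bool" where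
  "hom_cotwistor B H phi \<longleftrightarrow>
    (let dB = hdim B; dH = hdim H in
     \<comment> \<open>(M1)\<close>
     (\<forall>b\<in>vsp dB. \<forall>h\<in>vsp dH.
        tmap (dB*dH) dB dB phi id
          (tmap dB (dB*dH) (dH*dB) id phi (tv dH (hcomul B b) (halpha H h)))
        = tmap dH dB (dB*dB) (halpha H) (hcomul B) (phi (tv dH b h)))
     \<comment> \<open>(M2)\<close>
     \<and> (\<forall>b\<in>vsp dB. \<forall>h\<in>vsp dH.
        tmap dH (dB*dH) (dH*dB) id phi
          (tmap (dB*dH) dH dH phi id (tv (dH*dH) (halpha B b) (hcomul H h)))
        = tmap dH dB dB (hcomul H) (halpha B) (phi (tv dH b h)))
     \<comment> \<open>(M3)\<close>
     \<and> (\<forall>b\<in>vsp dB. \<forall>h\<in>vsp dH.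
        tmap dH dB dB (eps1 (hcounit H)) id (phi (tv dH b h)) = (\<lambda>p. hcounit H h * b p))
     \<comment> \<open>(M4)\<close>
     \<and> (\<forall>b\<in>vsp dB. \<forall>h\<in>vsp dH.
        tmap dH dB 1 id (eps1 (hcounit B)) (phi (tv dH b h)) = (\<lambda>p. hcounit B b * h p)))"

definition cond_M5 :: "('k::field) hbialg \<Rightarrow> 'k hbialg \<Rightarrow> 'k lmap \<Rightarrow> bool" where
  "cond_M5 B H phi \<longleftrightarrow>
    (let dB = hdim B; dH = hdim H in
     \<forall>a\<in>vsp dB. \<forall>b\<in>vsp dB. \<forall>h\<in>vsp dH. \<forall>g\<in>vsp dH.
       tprod dH (hmul H) dB (hmul B) (phi (tv dH a h)) (phi (tv dH b g))
       = phi (tv dH (hmul B (tv dB a b)) (hmul H (tv dH h g))))"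

definition cond_M6 :: "('k::field) hbialg \<Rightarrow> 'k hbialg \<Rightarrow> 'k lmap \<Rightarrow> bool" where
  "cond_M6 B H phi \<longleftrightarrow> phi (tv (hdim H) (hone B) (hone H)) = tv (hdim B) (hone H) (hone B)"

end

theory Submission
  imports Defs
begin

text \<open>
  Evaluated on X (x) (B (x) H), both sides of each axiom of a monoidal comonad distributive law
  factor as a map on X (the identity, alpha_X or its inverse) tensored with a map on B (x) H built
  from the unit component psi = (id (x) alpha_B^n) o phi o (alpha_B^(-n-1) (x) alpha_H) of
  ddphi n.  Hence each axiom holds for all objects iff it holds at the unit object, and naturality
  is automatic.  At the unit object the powers of alpha are pushed through phi (which commutes
  with alpha_B (x) alpha_H) and through the Hom-bialgebra structure maps (which commute with
  alpha); what remains is one of the conditions (M1)-(M6) composed with an invertible map built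
  from powers of alpha.
\<close>

lemma div_mod_less_mult: "(q::nat) < d1*d2 \<Longrightarrow> q div d2 < d1 \<and> q mod d2 < d2"
  by (metis less_mult_imp_div_less mod_less_divisor mult_0_right neq0_conv not_less0)

lemma sum_lessThan_mult:
  fixes F :: "nat \<Rightarrow> 'a::comm_monoid_add"
  shows "(\<Sum>q<m*d. F q) = (\<Sum>a<m. \<Sum>b<d. F (a*d+b))"
proof (induction m)
  case 0 then show ?case by simp
next
  case (Suc m)
  have e: "{..<Suc m * d} = {..<m*d} \<union> {m*d..<m*d+d}" by auto
  have r: "(\<Sum>q\<in>{m*d..<m*d+d}. F q) = (\<Sum>b<d. F (m*d+b))"
    by (rule sum.reindex_bij_witness[where i="\<lambda>b. m*d+b" and j="\<lambda>q. q - m*d"]) auto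
  have "(\<Sum>q<Suc m*d. F q) = (\<Sum>q<m*d. F q) + (\<Sum>q\<in>{m*d..<m*d+d}. F q)"
    unfolding e by (rule sum.union_disjoint) auto
  then show ?case using Suc r by simp
qed

lemma vsp_zero[simp]: "(\<lambda>p. 0) \<in> vsp d" by (simp add: vsp_def)

lemma vsp_add: "(u::'k::field vect) \<in> vsp d \<Longrightarrow> v \<in> vsp d \<Longrightarrow> (\<lambda>p. u p + v p) \<in> vsp d"
  by (simp add: vsp_def)

lemma vsp_smult: "v \<in> vsp d \<Longrightarrow> (\<lambda>p. (c::'k::field) * v p) \<in> vsp d"
  by (simp add: vsp_def)

lemma vspD: "v \<in> vsp d \<Longrightarrow> d \<le> p \<Longrightarrow> v p = 0" by (simp add: vsp_def)

lemma vspI: "(\<And>p. d \<le> p \<Longrightarrow> v p = 0) \<Longrightarrow> v \<in> vsp d" by (simp add: vsp_def)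

lemma vsp_sum: "(\<And>q. q \<in> S \<Longrightarrow> w q \<in> vsp d) \<Longrightarrow> (\<lambda>p. \<Sum>q\<in>S. (c q::'k::field) * w q p) \<in> vsp d"
  by (simp add: vsp_def)

lemma ebasis_vsp[simp]: "i < d \<Longrightarrow> ebasis i \<in> vsp d" by (simp add: vsp_def ebasis_def)

lemma lin_vsp: "lin d e f \<Longrightarrow> v \<in> vsp d \<Longrightarrow> f v \<in> vsp e" by (simp add: lin_def)

lemma lin_add: "lin d e f \<Longrightarrow> u \<in> vsp d \<Longrightarrow> v \<in> vsp d \<Longrightarrow> f (\<lambda>p. u p + v p) = (\<lambda>p. f u p + f v p)"
  by (simp add: lin_def)

lemma lin_smult: "lin d e f \<Longrightarrow> v \<in> vsp d \<Longrightarrow> f (\<lambda>p. c * v p) = (\<lambda>p. c * f v p)"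
  by (simp add: lin_def)

lemma lin_zero:
  assumes "lin d e (f::'k::field lmap)" shows "f (\<lambda>p. 0) = (\<lambda>p. 0)"
  using lin_smult[OF assms vsp_zero[of d], of 0] by simp

lemma lin_sum:
  fixes f :: "'k::field lmap"
  assumes "lin d e f" "finite S" "\<And>q. q \<in> S \<Longrightarrow> w q \<in> vsp d"
  shows "f (\<lambda>p. \<Sum>q\<in>S. c q * w q p) = (\<lambda>p. \<Sum>q\<in>S. c q * f (w q) p)"
  using assms(2,3)
proof (induction S rule: finite_induct)
  case empty then show ?case using lin_zero[OF assms(1)] by simp
next
  case (insert x F)
  have "f (\<lambda>p. \<Sum>q\<in>insert x F. c q * w q p) = f (\<lambda>p. c x * w x p + (\<Sum>q\<in>F. c q * w q p))"
    using insert by simp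
  also have "\<dots> = (\<lambda>p. f (\<lambda>p. c x * w x p) p + f (\<lambda>p. \<Sum>q\<in>F. c q * w q p) p)"
    by (rule lin_add[OF assms(1)]) (use insert in \<open>auto intro: vsp_smult vsp_sum\<close>)
  also have "\<dots> = (\<lambda>p. \<Sum>q\<in>insert x F. c q * f (w q) p)"
    using insert lin_smult[OF assms(1), of "w x" "c x"] by simp
  finally show ?case .
qed

lemma vsp_expand:
  assumes "v \<in> vsp d" shows "v = (\<lambda>p. \<Sum>q<d. v q * (ebasis q p::'k::field))"
proof
  fix p show "v p = (\<Sum>q<d. v q * ebasis q p)"
  proof (cases "p < d")
    case True
    then have "(\<Sum>q<d. v q * ebasis q p) = (\<Sum>q\<in>{p}. v q * ebasis q p)"
      by (intro sum.mono_neutral_right) (auto simp: ebasis_def)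
    then show ?thesis by (simp add: ebasis_def)
  next
    case False then show ?thesis using assms by (auto simp: vsp_def ebasis_def)
  qed
qed

lemma lin_expand:
  assumes "lin d e (f::'k::field lmap)" "v \<in> vsp d"
  shows "f v = (\<lambda>p. \<Sum>q<d. v q * f (ebasis q) p)"
proof -
  have "f v = f (\<lambda>p. \<Sum>q<d. v q * ebasis q p)" using vsp_expand[OF assms(2)] by simp
  also have "\<dots> = (\<lambda>p. \<Sum>q<d. v q * f (ebasis q) p)" by (rule lin_sum[OF assms(1)]) auto
  finally show ?thesis .
qed

lemma lin_ext:
  assumes "lin d e (f::'k::field lmap)" "lin d e' g" "\<And>q. q < d \<Longrightarrow> f (ebasis q) = g (ebasis q)"
  shows "mapeq d f g"
  unfolding mapeq_def
proof
  fix v :: "'k vect" assume v: "v \<in> vsp d"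
  have "f v = (\<lambda>p. \<Sum>q<d. v q * f (ebasis q) p)" by (rule lin_expand[OF assms(1) v])
  also have "\<dots> = (\<lambda>p. \<Sum>q<d. v q * g (ebasis q) p)" using assms(3) by simp
  also have "\<dots> = g v" by (rule lin_expand[OF assms(2) v, symmetric])
  finally show "f v = g v" .
qed

lemma mapeq_1_iff:
  assumes "lin 1 e (f::'k::field lmap)" "lin 1 e' g"
  shows "mapeq 1 f g \<longleftrightarrow> f (ebasis 0) = g (ebasis 0)"
  using lin_ext[OF assms] by (auto simp: mapeq_def)

lemma mapeq_refl[simp]: "mapeq d f f" by (simp add: mapeq_def)

lemma mapeq_sym: "mapeq d f g \<Longrightarrow> mapeq d g f" by (simp add: mapeq_def)

lemma mapeq_trans[trans]: "mapeq d f g \<Longrightarrow> mapeq d g h \<Longrightarrow> mapeq d f h" by (simp add: mapeq_def)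

lemma mapeqD: "mapeq d f g \<Longrightarrow> v \<in> vsp d \<Longrightarrow> f v = g v" by (simp add: mapeq_def)

lemma lin_comp: "lin d e f \<Longrightarrow> lin e e' g \<Longrightarrow> lin d e' (g \<circ> f)"
  unfolding lin_def by (auto simp: vsp_smult)

lemma lin_id[simp]: "lin d d id" by (simp add: lin_def)

lemma lin_compI: "lin d e f \<Longrightarrow> lin e' e'' g \<Longrightarrow> e = e' \<Longrightarrow> lin d e'' (g \<circ> f)"
  using lin_comp by blast

lemma lin_dims: "lin d e f \<Longrightarrow> d = d' \<Longrightarrow> e = e' \<Longrightarrow> lin d' e' f" by simp

lemma tv_vsp:
  assumes "(a::'k::field vect) \<in> vsp d1" "b \<in> vsp d2" shows "tv d2 a b \<in> vsp (d1*d2)"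
proof (rule vspI)
  fix p assume p: "d1*d2 \<le> p"
  show "tv d2 a b p = 0"
  proof (cases "d2 = 0")
    case True then show ?thesis using assms(2) by (simp add: tv_def vsp_def)
  next
    case False
    then have "d1 \<le> p div d2" using p by (metis div_le_mono div_mult_self_is_m neq0_conv)
    then show ?thesis using assms(1) by (simp add: tv_def vsp_def)
  qed
qed

lemma tv_ebasis: assumes b: "b < d2" shows "tv d2 (ebasis a) (ebasis b) = (ebasis (a*d2+b) :: 'k::field vect)"
proof
  fix p
  have iff: "(p div d2 = a \<and> p mod d2 = b) \<longleftrightarrow> p = a*d2+b"
  proof
    assume "p div d2 = a \<and> p mod d2 = b"
    then show "p = a*d2+b" by (metis div_mult_mod_eq)
  next
    assume "p = a*d2+b" then show "p div d2 = a \<and> p mod d2 = b" using b by simp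
  qed
  have "tv d2 (ebasis a) (ebasis b) p = (if p div d2 = a \<and> p mod d2 = b then 1 else (0::'k))"
    by (simp add: tv_def ebasis_def)
  also have "\<dots> = (if p = a*d2+b then 1 else 0)" using iff by simp
  also have "\<dots> = ebasis (a*d2+b) p" by (simp add: ebasis_def)
  finally show "tv d2 (ebasis a) (ebasis b) p = (ebasis (a*d2+b) :: 'k vect) p" .
qed

lemma ebasis_split: "q < d1*d2 \<Longrightarrow> (ebasis q :: 'k::field vect) = tv d2 (ebasis (q div d2)) (ebasis (q mod d2))"
  using div_mod_less_mult[of q d1 d2] by (subst tv_ebasis) (auto simp: mult.commute)

lemma tv_addL: "tv e (\<lambda>p. (u::'k::field vect) p + v p) w = (\<lambda>p. tv e u w p + tv e v w p)"
  by (simp add: tv_def fun_eq_iff algebra_simps)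

lemma tv_addR: "tv e w (\<lambda>p. (u::'k::field vect) p + v p) = (\<lambda>p. tv e w u p + tv e w v p)"
  by (simp add: tv_def fun_eq_iff algebra_simps)

lemma tv_smultL: "tv e (\<lambda>p. c * u p) w = (\<lambda>p. (c::'k::field) * tv e u w p)"
  by (simp add: tv_def fun_eq_iff algebra_simps)

lemma tv_smultR: "tv e w (\<lambda>p. c * u p) = (\<lambda>p. (c::'k::field) * tv e w u p)"
  by (simp add: tv_def fun_eq_iff algebra_simps)

lemma tmap_alt: "tmap d1 d2 e2 f g u = (\<lambda>p. \<Sum>q<d1*d2. u q * tv e2 (f (ebasis (q div d2))) (g (ebasis (q mod d2))) p)"
  by (simp add: tmap_def tv_def mult.assoc)

lemma tmap_tv:
  fixes f g :: "'k::field lmap"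
  assumes f: "lin d1 e1 f" and g: "lin d2 e2 g" and u: "u \<in> vsp d1" and w: "w \<in> vsp d2"
  shows "tmap d1 d2 e2 f g (tv d2 u w) = tv e2 (f u) (g w)"
proof
  fix p
  have "tmap d1 d2 e2 f g (tv d2 u w) p =
     (\<Sum>a<d1. \<Sum>b<d2. (u a * f (ebasis a) (p div e2)) * (w b * g (ebasis b) (p mod e2)))"
    unfolding tmap_def sum_lessThan_mult
    by (intro sum.cong refl) (simp add: tv_def ac_simps)
  also have "\<dots> = (\<Sum>a<d1. u a * f (ebasis a) (p div e2)) * (\<Sum>b<d2. w b * g (ebasis b) (p mod e2))"
    by (simp add: sum_product)
  also have "\<dots> = f u (p div e2) * g w (p mod e2)"
    using lin_expand[OF f u] lin_expand[OF g w] by simp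
  finally show "tmap d1 d2 e2 f g (tv d2 u w) p = tv e2 (f u) (g w) p" by (simp add: tv_def)
qed

lemma tmap_lin:
  fixes f g :: "'k::field lmap"
  assumes f: "lin d1 e1 f" and g: "lin d2 e2 g"
  shows "lin (d1*d2) (e1*e2) (tmap d1 d2 e2 f g)"
  unfolding lin_def
proof (intro conjI ballI allI)
  fix v :: "'k vect" assume v: "v \<in> vsp (d1*d2)"
  show "tmap d1 d2 e2 f g v \<in> vsp (e1*e2)"
    unfolding tmap_alt
  proof (rule vsp_sum)
    fix q assume "q \<in> {..<d1*d2}"
    then have "q div d2 < d1" "q mod d2 < d2" using div_mod_less_mult by auto
    then show "tv e2 (f (ebasis (q div d2))) (g (ebasis (q mod d2))) \<in> vsp (e1*e2)"
      using f g by (intro tv_vsp) (auto intro: lin_vsp)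
  qed
next
  fix u v :: "'k vect"
  show "tmap d1 d2 e2 f g (\<lambda>p. u p + v p) = (\<lambda>p. tmap d1 d2 e2 f g u p + tmap d1 d2 e2 f g v p)"
    by (simp add: tmap_alt sum.distrib algebra_simps)
next
  fix c :: 'k and v :: "'k vect"
  show "tmap d1 d2 e2 f g (\<lambda>p. c * v p) = (\<lambda>p. c * tmap d1 d2 e2 f g v p)"
    by (simp add: tmap_alt sum_distrib_left algebra_simps)
qed

lemma tmap_cong:
  assumes "mapeq d1 f f'" "mapeq d2 g g'"
  shows "tmap d1 d2 e2 f g = tmap d1 d2 e2 f' g'"
proof -
  have "\<And>q. q < d1*d2 \<Longrightarrow> q div d2 < d1 \<and> q mod d2 < d2" using div_mod_less_mult by auto
  then show ?thesis using assms unfolding tmap_def mapeq_def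
    by (intro ext sum.cong refl) (auto)
qed

lemma tensor_ext:
  fixes F G :: "'k::field lmap"
  assumes F: "lin (d1*d2) e F" and G: "lin (d1*d2) e' G"
    and eq: "\<And>u w. u \<in> vsp d1 \<Longrightarrow> w \<in> vsp d2 \<Longrightarrow> F (tv d2 u w) = G (tv d2 u w)"
  shows "mapeq (d1*d2) F G"
proof (rule lin_ext[OF F G])
  fix q assume q: "q < d1*d2"
  then have "q div d2 < d1" "q mod d2 < d2" using div_mod_less_mult by auto
  then show "F (ebasis q) = G (ebasis q)" using eq[OF ebasis_vsp ebasis_vsp] ebasis_split[OF q] by metis
qed

lemma lin_tvL: "w \<in> vsp d2 \<Longrightarrow> lin d1 (d1*d2) (\<lambda>u. tv d2 u (w::'k::field vect))"
  unfolding lin_def by (auto simp: tv_vsp tv_addL tv_smultL)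

lemma lin_tvR: "u \<in> vsp d1 \<Longrightarrow> lin d2 (d1*d2) (\<lambda>w. tv d2 (u::'k::field vect) w)"
  unfolding lin_def by (auto simp: tv_vsp tv_addR tv_smultR)

lemma tv_assoc:
  assumes v: "(v::'k::field vect) \<in> vsp b" and w: "w \<in> vsp c"
  shows "tv c (tv b u v) w = tv (b*c) u (tv c v w)"
proof
  fix p
  show "tv c (tv b u v) w p = tv (b*c) u (tv c v w) p"
  proof (cases "c = 0")
    case True then show ?thesis using w by (simp add: tv_def vsp_def)
  next
    case c: False
    show ?thesis
    proof (cases "b = 0")
      case True then show ?thesis using v by (simp add: tv_def vsp_def)
    next
      case b: False
      have 1: "p div (b*c) = p div c div b" by (metis div_mult2_eq mult.commute)
      have "p mod (b*c) = c*(p div c mod b) + p mod c" by (metis mod_mult2_eq mult.commute)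
      then have 2: "p mod (b*c) div c = p div c mod b"
        using c by simp
      have 3: "p mod (b*c) mod c = p mod c" by (simp add: mod_mod_cancel)
      show ?thesis by (simp add: tv_def 1 2 3 mult.assoc)
    qed
  qed
qed

lemma tv_unitL: "(u::'k::field vect) \<in> vsp d \<Longrightarrow> tv d (ebasis 0) u = u"
proof
  fix p assume u: "u \<in> vsp d"
  show "tv d (ebasis 0) u p = u p"
  proof (cases "p < d")
    case True then show ?thesis by (simp add: tv_def ebasis_def)
  next
    case False
    then have "u p = 0" using u by (simp add: vsp_def)
    moreover have "d = 0 \<or> p div d \<noteq> 0" using False by (auto simp: div_eq_0_iff)
    ultimately show ?thesis using u by (auto simp: tv_def ebasis_def vsp_def)
  qed
qed

lemma tv_unitR: "tv 1 (u::'k::field vect) (ebasis 0) = u"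
  by (simp add: tv_def ebasis_def)

lemma tensor_ext3:
  fixes F G :: "'k::field lmap"
  assumes F: "lin (d1*d2*d3) e F" and G: "lin (d1*d2*d3) e' G"
    and eq: "\<And>a b c :: 'k::field vect. a \<in> vsp d1 \<Longrightarrow> b \<in> vsp d2 \<Longrightarrow> c \<in> vsp d3 \<Longrightarrow> F (tv d3 (tv d2 a b) c) = G (tv d3 (tv d2 a b) c)"
  shows "mapeq (d1*d2*d3) F G"
proof (rule tensor_ext[OF F G])
  fix u w :: "'k vect" assume u: "u \<in> vsp (d1*d2)" and w: "w \<in> vsp d3"
  have "mapeq (d1*d2) (F \<circ> (\<lambda>u. tv d3 u w)) (G \<circ> (\<lambda>u. tv d3 u w))"
    by (rule tensor_ext[OF lin_comp[OF lin_tvL[OF w] F] lin_comp[OF lin_tvL[OF w] G]])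
       (simp add: eq w)
  then show "F (tv d3 u w) = G (tv d3 u w)" using u by (simp add: mapeq_def)
qed

lemma tmap_comp:
  fixes f g f' g' :: "'k::field lmap"
  assumes f: "lin d1 e1 f" and g: "lin d2 e2 g" and f': "lin e1 e1' f'" and g': "lin e2 e2' g'"
  shows "mapeq (d1*d2) (tmap e1 e2 e2' f' g' \<circ> tmap d1 d2 e2 f g) (tmap d1 d2 e2' (f' \<circ> f) (g' \<circ> g))"
  by (rule tensor_ext[OF lin_comp[OF tmap_lin[OF f g] tmap_lin[OF f' g']] tmap_lin[OF lin_comp[OF f f'] lin_comp[OF g g']]])
     (simp add: tmap_tv[OF f g] tmap_tv[OF f' g'] tmap_tv[OF lin_comp[OF f f'] lin_comp[OF g g']] lin_vsp[OF f] lin_vsp[OF g])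

lemma tmap_assoc:
  fixes f g h :: "'k::field lmap"
  assumes f: "lin d1 e1 f" and g: "lin d2 e2 g" and h: "lin d3 e3 h"
  shows "mapeq (d1*d2*d3) (tmap (d1*d2) d3 e3 (tmap d1 d2 e2 f g) h) (tmap d1 (d2*d3) (e2*e3) f (tmap d2 d3 e3 g h))"
proof (rule tensor_ext3)
  show "lin (d1*d2*d3) (e1*e2*e3) (tmap (d1*d2) d3 e3 (tmap d1 d2 e2 f g) h)"
    by (rule tmap_lin[OF tmap_lin[OF f g] h])
  show "lin (d1*d2*d3) (e1*(e2*e3)) (tmap d1 (d2*d3) (e2*e3) f (tmap d2 d3 e3 g h))"
    using tmap_lin[OF f tmap_lin[OF g h]] by (simp add: mult.assoc)
  fix a b c :: "'k vect" assume a: "a \<in> vsp d1" and b: "b \<in> vsp d2" and c: "c \<in> vsp d3"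
  show "tmap (d1*d2) d3 e3 (tmap d1 d2 e2 f g) h (tv d3 (tv d2 a b) c) = tmap d1 (d2*d3) (e2*e3) f (tmap d2 d3 e3 g h) (tv d3 (tv d2 a b) c)"
  proof -
    have "tmap (d1*d2) d3 e3 (tmap d1 d2 e2 f g) h (tv d3 (tv d2 a b) c) = tv e3 (tv e2 (f a) (g b)) (h c)"
      by (simp add: tmap_tv[OF tmap_lin[OF f g] h] tmap_tv[OF f g] tv_vsp a b c)
    also have "\<dots> = tv (e2*e3) (f a) (tv e3 (g b) (h c))" by (rule tv_assoc[OF lin_vsp[OF g b] lin_vsp[OF h c]])
    also have "\<dots> = tmap d1 (d2*d3) (e2*e3) f (tmap d2 d3 e3 g h) (tv (d2*d3) a (tv d3 b c))"
      by (simp add: tmap_tv[OF f tmap_lin[OF g h]] tmap_tv[OF g h] tv_vsp a b c)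
    also have "\<dots> = tmap d1 (d2*d3) (e2*e3) f (tmap d2 d3 e3 g h) (tv d3 (tv d2 a b) c)"
      by (simp add: tv_assoc[OF b c])
    finally show ?thesis .
  qed
qed

lemma tmap_unitL:
  assumes g: "lin d e (g::'k::field lmap)" shows "mapeq d (tmap 1 d e id g) g"
  unfolding mapeq_def
proof
  fix u :: "'k vect" assume u: "u \<in> vsp d"
  have "tmap 1 d e id g u = tmap 1 d e id g (tv d (ebasis 0) u)" using tv_unitL[OF u] by simp
  also have "\<dots> = tv e (id (ebasis 0)) (g u)" by (rule tmap_tv[OF lin_id g ebasis_vsp u]) simp
  also have "\<dots> = g u" by (simp add: tv_unitL lin_vsp[OF g u])
  finally show "tmap 1 d e id g u = g u" .
qed

lemma tmap_unitR:
  assumes f: "lin d e (f::'k::field lmap)" shows "mapeq d (tmap d 1 1 f id) f"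
  unfolding mapeq_def
proof
  fix u :: "'k vect" assume u: "u \<in> vsp d"
  have "tmap d 1 1 f id u = tmap d 1 1 f id (tv 1 u (ebasis 0))" using tv_unitR[of u] by simp
  also have "\<dots> = tv 1 (f u) (id (ebasis 0))" by (rule tmap_tv[OF f lin_id u ebasis_vsp]) simp
  also have "\<dots> = f u" by (simp only: id_apply tv_unitR)
  finally show "tmap d 1 1 f id u = f u" .
qed

lemma lin_eps1: "linf d (e::'k::field vect \<Rightarrow> 'k::field) \<Longrightarrow> lin d 1 (eps1 e)"
  unfolding lin_def linf_def eps1_def vsp_def by (auto simp: fun_eq_iff)

lemma tmap_tmap_apply:
  fixes f g f' g' :: "'k::field lmap"
  assumes "lin d1 e1 f" "lin d2 e2 g" "lin e1 e1' f'" "lin e2 e2' g'" "v \<in> vsp (d1*d2)"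
    "mapeq d1 (f' \<circ> f) F" "mapeq d2 (g' \<circ> g) G"
  shows "tmap e1 e2 e2' f' g' (tmap d1 d2 e2 f g v) = tmap d1 d2 e2' F G v"
  using mapeqD[OF tmap_comp[OF assms(1-4)] assms(5)] tmap_cong[OF assms(6,7), of e2'] by simp

lemma tmap_assoc_apply:
  fixes f g h :: "'k::field lmap"
  assumes "lin d1 e1 f" "lin d2 e2 g" "lin d3 e3 h" "v \<in> vsp (d1*d2*d3)"
  shows "tmap (d1*d2) d3 e3 (tmap d1 d2 e2 f g) h v = tmap d1 (d2*d3) (e2*e3) f (tmap d2 d3 e3 g h) v"
  using mapeqD[OF tmap_assoc[OF assms(1-3)] assms(4)] .

lemma tmap_assoc_tv:
  fixes f g h :: "'k::field lmap"
  assumes "lin d1 e1 f" "lin d2 e2 g" "lin d3 e3 h" "w \<in> vsp d1" "V \<in> vsp (d2*d3)"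
  shows "tmap (d1*d2) d3 e3 (tmap d1 d2 e2 f g) h (tv (d2*d3) w V) = tv (e2*e3) (f w) (tmap d2 d3 e3 g h V)"
proof -
  have "tv (d2*d3) w V \<in> vsp (d1*d2*d3)" using tv_vsp[OF assms(4,5)] by (simp add: mult.assoc)
  then show ?thesis
    by (simp add: tmap_assoc_apply[OF assms(1-3)] tmap_tv[OF assms(1) tmap_lin[OF assms(2,3)] assms(4,5)])
qed

lemma tmap_id: "mapeq (d1*d2) (tmap d1 d2 d2 id id) (id::'k::field lmap)"
  by (rule tensor_ext[OF tmap_lin[OF lin_id lin_id] lin_id]) (simp add: tmap_tv[OF lin_id lin_id])

lemma tmap_id_split: "tmap (d1*d2) d3 e3 id h = tmap (d1*d2) d3 e3 (tmap d1 d2 d2 id id) (h::'k::field lmap)"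
  by (rule tmap_cong[OF mapeq_sym[OF tmap_id] mapeq_refl])

lemma tmap_id_assoc_tv:
  fixes h :: "'k::field lmap"
  assumes "lin d3 e3 h" "w \<in> vsp d1" "V \<in> vsp (d2*d3)"
  shows "tmap (d1*d2) d3 e3 id h (tv (d2*d3) w V) = tv (d2*e3) w (tmap d2 d3 e3 id h V)"
  apply (subst tmap_id_split[of d1 d2 d3 e3 h])
  using tmap_assoc_tv[OF lin_id lin_id assms] by simp

lemma divmod_eq: "(r::nat) < n \<Longrightarrow> (X*n + r) div n = X \<and> (X*n + r) mod n = r"
proof -
  assume r: "r < n"
  then have "n \<noteq> 0" by auto
  then show ?thesis using r by (simp add: add.commute)
qed

lemma sw_tv:
  fixes x1 x2 x3 x4 :: "'k::field vect"
  assumes x1: "x1 \<in> vsp d1" and x2: "x2 \<in> vsp d2" and x3: "x3 \<in> vsp d3" and x4: "x4 \<in> vsp d4"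
  shows "sw d1 d2 d3 d4 (tv (d3*d4) (tv d2 x1 x2) (tv d4 x3 x4)) = tv (d2*d4) (tv d3 x1 x3) (tv d4 x2 x4)"
proof
  fix p
  have R: "tv (d2*d4) (tv d3 x1 x3) (tv d4 x2 x4) \<in> vsp (d1*d3*(d2*d4))"
    by (intro tv_vsp x1 x2 x3 x4)
  show "sw d1 d2 d3 d4 (tv (d3*d4) (tv d2 x1 x2) (tv d4 x3 x4)) p = tv (d2*d4) (tv d3 x1 x3) (tv d4 x2 x4) p"
  proof (cases "p < d1*d3*(d2*d4)")
    case False
    then show ?thesis using vspD[OF R] by (simp add: sw_def)
  next
    case True
    then have "0 < d1*d3*(d2*d4)" by linarith
    then have pos: "0 < d2" "0 < d4" "0 < d3" by auto
    define A where "A = p div (d2*d4) div d3"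
    define Bb where "Bb = p mod (d2*d4) div d4"
    define C where "C = p div (d2*d4) mod d3"
    define D where "D = p mod (d2*d4) mod d4"
    have Bb: "Bb < d2" unfolding Bb_def using pos
      by (metis less_mult_imp_div_less mod_less_divisor mult_pos_pos)
    have D: "D < d4" unfolding D_def using pos by simp
    have C: "C < d3" unfolding C_def using pos by simp
    have CD: "C*d4 + D < d3*d4"
    proof -
      have "C*d4 + D < C*d4 + d4" using D by simp
      also have "\<dots> = (C+1)*d4" by simp
      also have "\<dots> \<le> d3*d4" using C by (intro mult_right_mono) auto
      finally show ?thesis .
    qed
    define q where "q = (A*d2 + Bb)*(d3*d4) + (C*d4 + D)"
    have q1: "q div (d3*d4) = A*d2 + Bb" unfolding q_def using divmod_eq[OF CD] by blast
    have q2: "q mod (d3*d4) = C*d4 + D" unfolding q_def using divmod_eq[OF CD] by blast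
    have q3: "(A*d2 + Bb) div d2 = A" "(A*d2 + Bb) mod d2 = Bb" using Bb by simp_all
    have q4: "(C*d4 + D) div d4 = C" "(C*d4 + D) mod d4 = D" using D by simp_all
    have "sw d1 d2 d3 d4 (tv (d3*d4) (tv d2 x1 x2) (tv d4 x3 x4)) p = tv (d3*d4) (tv d2 x1 x2) (tv d4 x3 x4) q"
      using True unfolding sw_def q_def A_def Bb_def C_def D_def by simp
    also have "\<dots> = x1 A * x2 Bb * (x3 C * x4 D)"
      unfolding tv_def q1 q2 q3 q4 ..
    also have "\<dots> = tv (d2*d4) (tv d3 x1 x3) (tv d4 x2 x4) p"
      unfolding tv_def A_def Bb_def C_def D_def by (simp add: ac_simps)
    finally show ?thesis .
  qed
qed

lemma lin_sw: "lin (d1*d2*(d3*d4)) (d1*d3*(d2*d4)) (sw d1 d2 d3 d4 :: 'k::field lmap)"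
  unfolding lin_def by (auto simp: sw_def vsp_def fun_eq_iff)

lemma tensor_ext_pair3:
  fixes F G :: "'k::field lmap"
  assumes F: "lin (a1*a2*a3*(b1*b2*b3)) e F" and G: "lin (a1*a2*a3*(b1*b2*b3)) e' G"
    and eq: "\<And>x1 x2 x3 y1 y2 y3 :: 'k::field vect. x1 \<in> vsp a1 \<Longrightarrow> x2 \<in> vsp a2 \<Longrightarrow> x3 \<in> vsp a3 \<Longrightarrow>
       y1 \<in> vsp b1 \<Longrightarrow> y2 \<in> vsp b2 \<Longrightarrow> y3 \<in> vsp b3 \<Longrightarrow>
       F (tv (b1*b2*b3) (tv a3 (tv a2 x1 x2) x3) (tv b3 (tv b2 y1 y2) y3)) = G (tv (b1*b2*b3) (tv a3 (tv a2 x1 x2) x3) (tv b3 (tv b2 y1 y2) y3))"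
  shows "mapeq (a1*a2*a3*(b1*b2*b3)) F G"
proof (rule tensor_ext[OF F G])
  fix x y :: "'k vect" assume x: "x \<in> vsp (a1*a2*a3)" and y: "y \<in> vsp (b1*b2*b3)"
  have "mapeq (a1*a2*a3) (F \<circ> (\<lambda>x. tv (b1*b2*b3) x y)) (G \<circ> (\<lambda>x. tv (b1*b2*b3) x y))"
  proof (rule tensor_ext3[OF lin_comp[OF lin_tvL[OF y] F] lin_comp[OF lin_tvL[OF y] G]])
    fix x1 x2 x3 :: "'k vect" assume x1: "x1 \<in> vsp a1" and x2: "x2 \<in> vsp a2" and x3: "x3 \<in> vsp a3"
    have xx: "tv a3 (tv a2 x1 x2) x3 \<in> vsp (a1*a2*a3)" by (intro tv_vsp x1 x2 x3)
    have "mapeq (b1*b2*b3) (F \<circ> (\<lambda>y. tv (b1*b2*b3) (tv a3 (tv a2 x1 x2) x3) y)) (G \<circ> (\<lambda>y. tv (b1*b2*b3) (tv a3 (tv a2 x1 x2) x3) y))"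
      by (rule tensor_ext3[OF lin_comp[OF lin_tvR[OF xx] F] lin_comp[OF lin_tvR[OF xx] G]]) (simp add: eq x1 x2 x3)
    then show "(F \<circ> (\<lambda>x. tv (b1*b2*b3) x y)) (tv a3 (tv a2 x1 x2) x3) = (G \<circ> (\<lambda>x. tv (b1*b2*b3) x y)) (tv a3 (tv a2 x1 x2) x3)"
      using y by (simp add: mapeq_def)
  qed
  then show "F (tv (b1*b2*b3) x y) = G (tv (b1*b2*b3) x y)" using x by (simp add: mapeq_def)
qed

lemma bilin_ext:
  fixes F G :: "'k::field vect \<Rightarrow> 'k::field vect \<Rightarrow> 'k::field vect"
  assumes FL: "\<And>V. V \<in> vsp (c1*c2) \<Longrightarrow> lin (a1*a2) e (\<lambda>U. F U V)" and FR: "\<And>U. U \<in> vsp (a1*a2) \<Longrightarrow> lin (c1*c2) e (F U)"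
    and GL: "\<And>V. V \<in> vsp (c1*c2) \<Longrightarrow> lin (a1*a2) e' (\<lambda>U. G U V)" and GR: "\<And>U. U \<in> vsp (a1*a2) \<Longrightarrow> lin (c1*c2) e' (G U)"
    and eq: "\<And>u1 u2 v1 v2. u1 \<in> vsp a1 \<Longrightarrow> u2 \<in> vsp a2 \<Longrightarrow> v1 \<in> vsp c1 \<Longrightarrow> v2 \<in> vsp c2 \<Longrightarrow>
       F (tv a2 u1 u2) (tv c2 v1 v2) = G (tv a2 u1 u2) (tv c2 v1 v2)"
    and U: "U \<in> vsp (a1*a2)" and V: "V \<in> vsp (c1*c2)"
  shows "F U V = G U V"
proof -
  have "mapeq (c1*c2) (F U) (G U)"
  proof (rule tensor_ext[OF FR[OF U] GR[OF U]])
    fix v1 v2 :: "'k vect" assume v1: "v1 \<in> vsp c1" and v2: "v2 \<in> vsp c2"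
    have vv: "tv c2 v1 v2 \<in> vsp (c1*c2)" using tv_vsp[OF v1 v2] .
    have "mapeq (a1*a2) (\<lambda>U. F U (tv c2 v1 v2)) (\<lambda>U. G U (tv c2 v1 v2))"
      by (rule tensor_ext[OF FL[OF vv] GL[OF vv]]) (simp add: eq v1 v2)
    then show "F U (tv c2 v1 v2) = G U (tv c2 v1 v2)" using U by (simp add: mapeq_def)
  qed
  then show ?thesis using V by (simp add: mapeq_def)
qed

lemma lin_expand_tv:
  assumes m: "lin (d*d) e (f::'k::field lmap)" and x: "x \<in> vsp d" and y: "y \<in> vsp d"
  shows "f (tv d x y) p = (\<Sum>a<d. \<Sum>b<d. x a * y b * f (tv d (ebasis a) (ebasis b)) p)"
proof -
  have "f (tv d x y) p = (\<Sum>q<d*d. tv d x y q * f (ebasis q) p)"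
    using lin_expand[OF m tv_vsp[OF x y]] by simp
  also have "\<dots> = (\<Sum>a<d. \<Sum>b<d. tv d x y (a*d+b) * f (ebasis (a*d+b)) p)" by (rule sum_lessThan_mult)
  also have "\<dots> = (\<Sum>a<d. \<Sum>b<d. x a * y b * f (tv d (ebasis a) (ebasis b)) p)"
  proof (intro sum.cong refl)
    fix a b assume "b \<in> {..<d}"
    then have b: "b < d" by simp
    have "tv d x y (a*d+b) = x a * y b" using b by (simp add: tv_def)
    then show "tv d x y (a*d+b) * f (ebasis (a*d+b)) p = x a * y b * f (tv d (ebasis a) (ebasis b)) p"
      by (simp add: tv_ebasis[OF b])
  qed
  finally show ?thesis .
qed

lemma tprod_tv:
  fixes m1 m2 :: "'k::field lmap"
  assumes m1: "lin (d1*d1) e1 m1" and m2: "lin (d2*d2) e2 m2"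
    and x1: "x1 \<in> vsp d1" and x2: "x2 \<in> vsp d2" and y1: "y1 \<in> vsp d1" and y2: "y2 \<in> vsp d2"
  shows "tprod d1 m1 d2 m2 (tv d2 x1 x2) (tv d2 y1 y2) = tv d2 (m1 (tv d1 x1 y1)) (m2 (tv d2 x2 y2))"
proof
  fix p
  let ?P = "p div d2" and ?Q = "p mod d2"
  let ?f = "\<lambda>a1 b1. m1 (tv d1 (ebasis a1) (ebasis b1)) ?P"
  let ?g = "\<lambda>a2 b2. m2 (tv d2 (ebasis a2) (ebasis b2)) ?Q"
  have "tprod d1 m1 d2 m2 (tv d2 x1 x2) (tv d2 y1 y2) p
      = (\<Sum>a1<d1. \<Sum>a2<d2. \<Sum>b1<d1. \<Sum>b2<d2. (x1 a1 * y1 b1 * ?f a1 b1) * (x2 a2 * y2 b2 * ?g a2 b2))"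
    unfolding tprod_def sum_lessThan_mult
    by (intro sum.cong refl) (simp add: tv_def ac_simps)
  also have "\<dots> = (\<Sum>a1<d1. \<Sum>b1<d1. x1 a1 * y1 b1 * ?f a1 b1) * (\<Sum>a2<d2. \<Sum>b2<d2. x2 a2 * y2 b2 * ?g a2 b2)"
    by (simp only: sum_product)
  also have "\<dots> = m1 (tv d1 x1 y1) ?P * m2 (tv d2 x2 y2) ?Q"
    by (simp add: lin_expand_tv[OF m1 x1 y1] lin_expand_tv[OF m2 x2 y2])
  finally show "tprod d1 m1 d2 m2 (tv d2 x1 x2) (tv d2 y1 y2) p = tv d2 (m1 (tv d1 x1 y1)) (m2 (tv d2 x2 y2)) p"
    by (simp add: tv_def)
qed

lemma tprod_vsp:
  fixes m1 m2 :: "'k::field lmap"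
  assumes m1: "lin (d1*d1) d1 m1" and m2: "lin (d2*d2) d2 m2"
  shows "tprod d1 m1 d2 m2 x y \<in> vsp (d1*d2)"
  unfolding tprod_def
proof (intro vspI sum.neutral ballI)
  fix p q r assume p: "d1*d2 \<le> p" and q: "q \<in> {..<d1*d2}" and r: "r \<in> {..<d1*d2}"
  have "q div d2 < d1" "r div d2 < d1" "q mod d2 < d2" "r mod d2 < d2" using q r div_mod_less_mult by auto
  then have "tv d2 (m1 (tv d1 (ebasis (q div d2)) (ebasis (r div d2)))) (m2 (tv d2 (ebasis (q mod d2)) (ebasis (r mod d2)))) \<in> vsp (d1*d2)"
    by (intro tv_vsp lin_vsp[OF m1] lin_vsp[OF m2] tv_vsp ebasis_vsp)
  then show "x q * y r * tv d2 (m1 (tv d1 (ebasis (q div d2)) (ebasis (r div d2)))) (m2 (tv d2 (ebasis (q mod d2)) (ebasis (r mod d2)))) p = 0"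
    using p by (simp add: vsp_def)
qed

lemma tprod_addL: "tprod d1 m1 d2 m2 (\<lambda>p. (u::'k::field vect) p + v p) y = (\<lambda>p. tprod d1 m1 d2 m2 u y p + tprod d1 m1 d2 m2 v y p)"
  by (simp add: tprod_def distrib_right sum.distrib fun_eq_iff)

lemma tprod_addR: "tprod d1 m1 d2 m2 y (\<lambda>p. (u::'k::field vect) p + v p) = (\<lambda>p. tprod d1 m1 d2 m2 y u p + tprod d1 m1 d2 m2 y v p)"
  by (simp add: tprod_def distrib_right distrib_left sum.distrib fun_eq_iff)

lemma tprod_smultL: "tprod d1 m1 d2 m2 (\<lambda>p. c * (u::'k::field vect) p) y = (\<lambda>p. c * tprod d1 m1 d2 m2 u y p)"
  by (simp add: tprod_def sum_distrib_left mult.assoc fun_eq_iff)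

lemma tprod_smultR: "tprod d1 m1 d2 m2 y (\<lambda>p. c * (u::'k::field vect) p) = (\<lambda>p. c * tprod d1 m1 d2 m2 y u p)"
  by (simp add: tprod_def sum_distrib_left mult.left_commute mult.assoc fun_eq_iff)

lemma tprod_linL:
  fixes m1 m2 :: "'k::field lmap"
  assumes m1: "lin (d1*d1) d1 m1" and m2: "lin (d2*d2) d2 m2"
  shows "lin (d1*d2) (d1*d2) (\<lambda>x. tprod d1 m1 d2 m2 x y)"
  unfolding lin_def using tprod_vsp[OF m1 m2] by (simp add: tprod_addL tprod_smultL)

lemma tprod_linR:
  fixes m1 m2 :: "'k::field lmap"
  assumes m1: "lin (d1*d1) d1 m1" and m2: "lin (d2*d2) d2 m2"
  shows "lin (d1*d2) (d1*d2) (tprod d1 m1 d2 m2 x)"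
  unfolding lin_def using tprod_vsp[OF m1 m2] by (simp add: tprod_addR tprod_smultR)

lemma tv_eps_R: "tv 1 v (eps1 e h) = (\<lambda>p. e h * (v::'k::field vect) p)"
  by (simp add: tv_def eps1_def fun_eq_iff mult.commute)

lemma tv_eps_L: "(h::'k::field vect) \<in> vsp d \<Longrightarrow> tv d (eps1 e v) h = (\<lambda>p. e v * h p)"
proof
  fix p assume h: "h \<in> vsp d"
  show "tv d (eps1 e v) h p = e v * h p"
  proof (cases "p < d")
    case True then show ?thesis by (simp add: tv_def eps1_def)
  next
    case False
    then have "h p = 0" using h by (simp add: vsp_def)
    moreover have "d = 0 \<or> p div d \<noteq> 0" using False by (auto simp: div_eq_0_iff)
    ultimately show ?thesis using h by (auto simp: tv_def eps1_def vsp_def)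
  qed
qed

section \<open>Invertible linear maps and their integer powers\<close>

definition blin :: "nat \<Rightarrow> 'k::field lmap \<Rightarrow> bool" where
  "blin d f \<longleftrightarrow> lin d d f \<and> bij_betw f (vsp d) (vsp d)"

abbreviation iv :: "nat \<Rightarrow> 'k::field lmap \<Rightarrow> 'k::field lmap" where
  "iv d f \<equiv> inv_into (vsp d) f"

lemma blin_lin: "blin d f \<Longrightarrow> lin d d f" by (simp add: blin_def)

lemma blin_vsp: "blin d (f::'k::field lmap) \<Longrightarrow> v \<in> vsp d \<Longrightarrow> f v \<in> vsp d" unfolding blin_def using lin_vsp by blast

lemma iv_left: "blin d f \<Longrightarrow> v \<in> vsp d \<Longrightarrow> iv d f (f v) = v"
  by (simp add: blin_def bij_betw_def inv_into_f_f)

lemma iv_right: "blin d f \<Longrightarrow> v \<in> vsp d \<Longrightarrow> f (iv d f v) = v"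
  by (simp add: blin_def bij_betw_def f_inv_into_f)

lemma iv_vsp: "blin d f \<Longrightarrow> v \<in> vsp d \<Longrightarrow> iv d f v \<in> vsp d"
  by (simp add: blin_def bij_betw_def inv_into_into)

lemma iv_blin: assumes f: "blin d (f::'k::field lmap)" shows "blin d (iv d f)"
proof -
  have lin: "lin d d (iv d f)"
    unfolding lin_def
  proof (intro conjI ballI allI)
    fix v :: "'k vect" assume "v \<in> vsp d" then show "iv d f v \<in> vsp d" by (rule iv_vsp[OF f])
  next
    fix u v :: "'k vect" assume u: "u \<in> vsp d" and v: "v \<in> vsp d"
    have "(\<lambda>p. u p + v p) = f (\<lambda>p. iv d f u p + iv d f v p)"
      using lin_add[OF blin_lin[OF f] iv_vsp[OF f u] iv_vsp[OF f v]] iv_right[OF f u] iv_right[OF f v] by simp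
    then show "iv d f (\<lambda>p. u p + v p) = (\<lambda>p. iv d f u p + iv d f v p)"
      using iv_left[OF f vsp_add[OF iv_vsp[OF f u] iv_vsp[OF f v]]] by simp
  next
    fix c :: 'k and v :: "'k vect" assume v: "v \<in> vsp d"
    have "(\<lambda>p. c * v p) = f (\<lambda>p. c * iv d f v p)"
      using lin_smult[OF blin_lin[OF f] iv_vsp[OF f v]] iv_right[OF f v] by simp
    then show "iv d f (\<lambda>p. c * v p) = (\<lambda>p. c * iv d f v p)"
      using iv_left[OF f vsp_smult[OF iv_vsp[OF f v]]] by simp
  qed
  have "bij_betw (iv d f) (vsp d) (vsp d)"
    using f by (simp add: blin_def bij_betw_inv_into)
  then show ?thesis using lin by (simp add: blin_def)
qed

lemma blin_id[simp]: "blin d id" by (simp add: blin_def)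

lemma iv_id [simp]: "v \<in> vsp d \<Longrightarrow> iv d id v = v"
  using iv_left[OF blin_id, of v d] by simp

lemma blin_comp: "blin d f \<Longrightarrow> blin d g \<Longrightarrow> blin d (g \<circ> f)"
  unfolding blin_def by (auto intro: lin_comp bij_betw_trans)

lemma blin_funpow: "blin d f \<Longrightarrow> blin d (f ^^ m)"
  by (induction m) (auto simp: blin_comp simp del: comp_apply)

lemma blin_of_inverse:
  assumes f: "lin d d (f::'k::field lmap)" and g: "lin d d g" and gf: "\<And>v. v \<in> vsp d \<Longrightarrow> g (f v) = v"
    and fg: "\<And>v. v \<in> vsp d \<Longrightarrow> f (g v) = v"
  shows "blin d f" "mapeq d (iv d f) g"
proof -
  have "bij_betw f (vsp d) (vsp d)"
    by (rule bij_betw_byWitness[where f'=g]) (auto simp: gf fg lin_vsp[OF f] lin_vsp[OF g])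
  then show bf: "blin d f" using f by (simp add: blin_def)
  show "mapeq d (iv d f) g"
    unfolding mapeq_def
  proof
    fix v :: "'k vect" assume v: "v \<in> vsp d"
    have "iv d f v = iv d f (f (g v))" using fg[OF v] by simp
    also have "\<dots> = g v" by (rule iv_left[OF bf lin_vsp[OF g v]])
    finally show "iv d f v = g v" .
  qed
qed

lemma zpow_blin: "blin d f \<Longrightarrow> blin d (zpow d f k)"
  by (simp add: zpow_def blin_funpow iv_blin)

lemma zpow_vsp: "blin d f \<Longrightarrow> v \<in> vsp d \<Longrightarrow> zpow d f k v \<in> vsp d"
  using zpow_blin blin_vsp by blast

lemma zpow_0[simp]: "zpow d f 0 = id" by (simp add: zpow_def)

lemma zpow_m1: "zpow d f (-1) = iv d f" by (simp add: zpow_def)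

lemma funpow_vsp: "blin d f \<Longrightarrow> v \<in> vsp d \<Longrightarrow> (f ^^ m) v \<in> vsp d"
  using blin_funpow blin_vsp by blast

lemma zpow_succ:
  assumes f: "blin d f" and v: "v \<in> vsp d"
  shows "zpow d f (k+1) v = f (zpow d f k v)" "zpow d f (k+1) v = zpow d f k (f v)"
proof -
  have "zpow d f (k+1) v = f (zpow d f k v) \<and> zpow d f (k+1) v = zpow d f k (f v)"
  proof (cases "0 \<le> k")
    case True
    then have "nat (k+1) = Suc (nat k)" by simp
    then show ?thesis using True by (simp add: zpow_def funpow_Suc_right funpow_swap1 del: funpow.simps)
  next
    case False
    have m0: "nat (-k) = Suc (nat (-(k+1)))" using False by linarith
    obtain m where m: "nat (-k) = Suc m" "nat (-(k+1)) = m" using m0 by blast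
    show ?thesis
    proof (cases "k = -1")
      case True then show ?thesis using f v by (simp add: zpow_m1 iv_right iv_left)
    next
      case False2: False
      then have "\<not> 0 \<le> k+1" using False by simp
      then have z1: "zpow d f (k+1) v = (iv d f ^^ m) v" and z2: "zpow d f k = iv d f ^^ Suc m"
        using False m by (simp_all add: zpow_def)
      have "(iv d f ^^ Suc m) v = iv d f ((iv d f ^^ m) v)" by simp
      then have A: "f ((iv d f ^^ Suc m) v) = (iv d f ^^ m) v"
        by (simp add: iv_right[OF f] funpow_vsp[OF iv_blin[OF f] v])
      have B: "(iv d f ^^ Suc m) (f v) = (iv d f ^^ m) v"
        by (simp only: funpow_Suc_right comp_apply iv_left[OF f v])
      show ?thesis using A B z1 z2 by simp
    qed
  qed
  then show "zpow d f (k+1) v = f (zpow d f k v)" "zpow d f (k+1) v = zpow d f k (f v)" by auto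
qed

lemma zpow_pred:
  assumes f: "blin d f" and v: "v \<in> vsp d"
  shows "zpow d f (k-1) v = iv d f (zpow d f k v)" "zpow d f (k-1) v = zpow d f k (iv d f v)"
proof -
  have "zpow d f k v = f (zpow d f (k-1) v)" using zpow_succ(1)[OF f v, of "k-1"] by simp
  then show "zpow d f (k-1) v = iv d f (zpow d f k v)" by (simp add: iv_left[OF f zpow_vsp[OF f v]])
  have "zpow d f k (iv d f v) = zpow d f (k-1) (f (iv d f v))" using zpow_succ(2)[OF f iv_vsp[OF f v], of "k-1"] by simp
  then show "zpow d f (k-1) v = zpow d f k (iv d f v)" by (simp add: iv_right[OF f v])
qed

lemma zpow_add:
  assumes f: "blin d f"
  shows "v \<in> vsp d \<Longrightarrow> zpow d f (k+l) v = zpow d f k (zpow d f l v)"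
proof (induction l arbitrary: k v rule: int_induct[where k=0])
  case base then show ?case by simp
next
  case (step1 i)
  have "zpow d f (k+(i+1)) v = zpow d f ((k+1)+i) v" by (simp add: ac_simps)
  also have "\<dots> = zpow d f (k+1) (zpow d f i v)" using step1 by simp
  also have "\<dots> = zpow d f k (f (zpow d f i v))" by (rule zpow_succ(2)[OF f zpow_vsp[OF f step1.prems]])
  also have "\<dots> = zpow d f k (zpow d f (i+1) v)" by (simp add: zpow_succ(1)[OF f step1.prems])
  finally show ?case .
next
  case (step2 i)
  have "zpow d f (k+(i-1)) v = zpow d f ((k-1)+i) v" using arg_cong[of "k+(i-1)" "(k-1)+i" "\<lambda>j. zpow d f j v"] by simp
  also have "\<dots> = zpow d f (k-1) (zpow d f i v)" using step2 by simp
  also have "\<dots> = zpow d f k (iv d f (zpow d f i v))" by (rule zpow_pred(2)[OF f zpow_vsp[OF f step2.prems]])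
  also have "\<dots> = zpow d f k (zpow d f (i-1) v)" by (simp add: zpow_pred(1)[OF f step2.prems])
  finally show ?case .
qed

lemma zpow_inv: "blin d f \<Longrightarrow> v \<in> vsp d \<Longrightarrow> zpow d f (-k) (zpow d f k v) = v"
  using zpow_add[of d f v "-k" k] by simp

lemma zpow_intertwine:
  assumes a: "blin d a" and b: "blin d' b" and g: "\<And>v. v \<in> vsp d \<Longrightarrow> g v \<in> vsp d'"
    and c: "\<And>v. v \<in> vsp d \<Longrightarrow> g (a v) = b (g v)"
  shows "v \<in> vsp d \<Longrightarrow> g (zpow d a k v) = zpow d' b k (g v)"
proof (induction k arbitrary: v rule: int_induct[where k=0])
  case base then show ?case by simp
next
  case (step1 i)
  then show ?case by (simp add: zpow_succ(1)[OF a] zpow_succ(1)[OF b] g c zpow_vsp[OF a])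
next
  case (step2 i)
  have ivc: "g (iv d a w) = iv d' b (g w)" if w: "w \<in> vsp d" for w
  proof -
    have "b (g (iv d a w)) = g w" using c[OF iv_vsp[OF a w]] iv_right[OF a w] by simp
    then show ?thesis using iv_left[OF b g[OF iv_vsp[OF a w]]] by metis
  qed
  then show ?case using step2 by (simp add: zpow_pred(1)[OF a] zpow_pred(1)[OF b] g zpow_vsp[OF a])
qed

lemma zpow_invariant:
  assumes a: "blin d a" and c: "\<And>v. v \<in> vsp d \<Longrightarrow> e (a v) = e v"
  shows "v \<in> vsp d \<Longrightarrow> e (zpow d a k v) = e v"
proof (induction k arbitrary: v rule: int_induct[where k=0])
  case base then show ?case by simp
next
  case (step1 i)
  then show ?case by (simp add: zpow_succ(1)[OF a] c zpow_vsp[OF a])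
next
  case (step2 i)
  have "e (iv d a w) = e w" if w: "w \<in> vsp d" for w
    using c[OF iv_vsp[OF a w]] iv_right[OF a w] by simp
  then show ?case using step2 by (simp add: zpow_pred(1)[OF a] zpow_vsp[OF a])
qed

lemma blin_tmap:
  assumes a: "blin d1 (a::'k::field lmap)" and b: "blin d2 b"
  shows "blin (d1*d2) (tmap d1 d2 d2 a b)" "mapeq (d1*d2) (iv (d1*d2) (tmap d1 d2 d2 a b)) (tmap d1 d2 d2 (iv d1 a) (iv d2 b))"
proof -
  have la: "lin d1 d1 a" "lin d1 d1 (iv d1 a)" and lb: "lin d2 d2 b" "lin d2 d2 (iv d2 b)"
    using a b by (auto simp: blin_lin iv_blin)
  have e1: "mapeq d1 (iv d1 a \<circ> a) id" "mapeq d1 (a \<circ> iv d1 a) id"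
    using a by (auto simp: mapeq_def iv_left iv_right)
  have e2: "mapeq d2 (iv d2 b \<circ> b) id" "mapeq d2 (b \<circ> iv d2 b) id"
    using b by (auto simp: mapeq_def iv_left iv_right)
  have t1: "mapeq (d1*d2) (tmap d1 d2 d2 (iv d1 a) (iv d2 b) \<circ> tmap d1 d2 d2 a b) (tmap d1 d2 d2 id id)"
    using tmap_comp[OF la(1) lb(1) la(2) lb(2)] tmap_cong[OF e1(1) e2(1)] by simp
  have t2: "mapeq (d1*d2) (tmap d1 d2 d2 a b \<circ> tmap d1 d2 d2 (iv d1 a) (iv d2 b)) (tmap d1 d2 d2 id id)"
    using tmap_comp[OF la(2) lb(2) la(1) lb(1)] tmap_cong[OF e1(2) e2(2)] by simp
  have idt: "mapeq (d1*d2) (tmap d1 d2 d2 id id) (id::'k lmap)" by (rule tmap_id)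
  note bi = blin_of_inverse[OF tmap_lin[OF la(1) lb(1)] tmap_lin[OF la(2) lb(2)]]
  have g1: "\<And>v. v \<in> vsp (d1*d2) \<Longrightarrow> tmap d1 d2 d2 (iv d1 a) (iv d2 b) (tmap d1 d2 d2 a b v) = v"
    using mapeq_trans[OF t1 idt] by (simp add: mapeq_def)
  have g2: "\<And>v. v \<in> vsp (d1*d2) \<Longrightarrow> tmap d1 d2 d2 a b (tmap d1 d2 d2 (iv d1 a) (iv d2 b) v) = v"
    using mapeq_trans[OF t2 idt] by (simp add: mapeq_def)
  show "blin (d1*d2) (tmap d1 d2 d2 a b)" by (rule bi(1)[OF g1 g2])
  show "mapeq (d1*d2) (iv (d1*d2) (tmap d1 d2 d2 a b)) (tmap d1 d2 d2 (iv d1 a) (iv d2 b))" by (rule bi(2)[OF g1 g2])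
qed

lemma zpow_tmap:
  assumes a: "blin d1 (a::'k::field lmap)" and b: "blin d2 b"
  shows "mapeq (d1*d2) (zpow (d1*d2) (tmap d1 d2 d2 a b) k) (tmap d1 d2 d2 (zpow d1 a k) (zpow d2 b k))"
proof (induction k rule: int_induct[where k=0])
  case base
  show ?case by (simp only: zpow_0) (rule mapeq_sym[OF tmap_id])
next
  case (step1 i)
  note T = blin_tmap[OF a b]
  have l: "lin d1 d1 (zpow d1 a i)" "lin d2 d2 (zpow d2 b i)" using a b by (auto simp: blin_lin zpow_blin)
  have c1: "mapeq d1 (a \<circ> zpow d1 a i) (zpow d1 a (i+1))" using a by (simp add: mapeq_def zpow_succ(1))
  have c2: "mapeq d2 (b \<circ> zpow d2 b i) (zpow d2 b (i+1))" using b by (simp add: mapeq_def zpow_succ(1))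
  have C: "mapeq (d1*d2) (tmap d1 d2 d2 a b \<circ> tmap d1 d2 d2 (zpow d1 a i) (zpow d2 b i)) (tmap d1 d2 d2 (zpow d1 a (i+1)) (zpow d2 b (i+1)))"
    using tmap_comp[OF l blin_lin[OF a] blin_lin[OF b]] tmap_cong[OF c1 c2] by simp
  show ?case unfolding mapeq_def
  proof
    fix v :: "'k vect" assume v: "v \<in> vsp (d1*d2)"
    have "zpow (d1*d2) (tmap d1 d2 d2 a b) (i+1) v = tmap d1 d2 d2 a b (zpow (d1*d2) (tmap d1 d2 d2 a b) i v)"
      by (rule zpow_succ(1)[OF T(1) v])
    also have "\<dots> = tmap d1 d2 d2 a b (tmap d1 d2 d2 (zpow d1 a i) (zpow d2 b i) v)"
      using step1.IH v by (simp add: mapeq_def)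
    also have "\<dots> = tmap d1 d2 d2 (zpow d1 a (i+1)) (zpow d2 b (i+1)) v" using C v by (simp add: mapeq_def)
    finally show "zpow (d1*d2) (tmap d1 d2 d2 a b) (i+1) v = tmap d1 d2 d2 (zpow d1 a (i+1)) (zpow d2 b (i+1)) v" .
  qed
next
  case (step2 i)
  note T = blin_tmap[OF a b]
  have l: "lin d1 d1 (zpow d1 a (i-1))" "lin d2 d2 (zpow d2 b (i-1))" using a b by (auto simp: blin_lin zpow_blin)
  have c1: "mapeq d1 (a \<circ> zpow d1 a (i-1)) (zpow d1 a i)" using a zpow_succ(1)[OF a, of _ "i-1"] by (simp add: mapeq_def)
  have c2: "mapeq d2 (b \<circ> zpow d2 b (i-1)) (zpow d2 b i)" using b zpow_succ(1)[OF b, of _ "i-1"] by (simp add: mapeq_def)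
  have C: "mapeq (d1*d2) (tmap d1 d2 d2 a b \<circ> tmap d1 d2 d2 (zpow d1 a (i-1)) (zpow d2 b (i-1))) (tmap d1 d2 d2 (zpow d1 a i) (zpow d2 b i))"
    using tmap_comp[OF l blin_lin[OF a] blin_lin[OF b]] tmap_cong[OF c1 c2] by simp
  have lt: "lin (d1*d2) (d1*d2) (tmap d1 d2 d2 (zpow d1 a (i-1)) (zpow d2 b (i-1)))" by (rule tmap_lin[OF l])
  show ?case unfolding mapeq_def
  proof
    fix v :: "'k vect" assume v: "v \<in> vsp (d1*d2)"
    have "zpow (d1*d2) (tmap d1 d2 d2 a b) (i-1) v = iv (d1*d2) (tmap d1 d2 d2 a b) (zpow (d1*d2) (tmap d1 d2 d2 a b) i v)"
      by (rule zpow_pred(1)[OF T(1) v])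
    also have "\<dots> = iv (d1*d2) (tmap d1 d2 d2 a b) (tmap d1 d2 d2 (zpow d1 a i) (zpow d2 b i) v)"
      using step2.IH v by (simp add: mapeq_def)
    also have "\<dots> = iv (d1*d2) (tmap d1 d2 d2 a b) (tmap d1 d2 d2 a b (tmap d1 d2 d2 (zpow d1 a (i-1)) (zpow d2 b (i-1)) v))"
      using C v by (simp add: mapeq_def)
    also have "\<dots> = tmap d1 d2 d2 (zpow d1 a (i-1)) (zpow d2 b (i-1)) v"
      by (rule iv_left[OF T(1) lin_vsp[OF lt v]])
    finally show "zpow (d1*d2) (tmap d1 d2 d2 a b) (i-1) v = tmap d1 d2 d2 (zpow d1 a (i-1)) (zpow d2 b (i-1)) v" .
  qed
qed

lemma hom_bialgebraD:
  assumes "hom_bialgebra A"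
  shows "lin (hdim A * hdim A) (hdim A) (hmul A)" "hone A \<in> vsp (hdim A)"
    "lin (hdim A) (hdim A * hdim A) (hcomul A)" "linf (hdim A) (hcounit A)"
    "blin (hdim A) (halpha A)" "lin (hdim A) 1 (eps1 (hcounit A))"
proof -
  show "lin (hdim A * hdim A) (hdim A) (hmul A)" "hone A \<in> vsp (hdim A)"
    "lin (hdim A) (hdim A * hdim A) (hcomul A)" "linf (hdim A) (hcounit A)"
    "blin (hdim A) (halpha A)"
    using assms by (auto simp: hom_bialgebra_def Let_def blin_def)
  then show "lin (hdim A) 1 (eps1 (hcounit A))" by (intro lin_eps1)
qed

lemma hom_bialgebra_alphaD:
  assumes "hom_bialgebra A"
  shows "\<And>a b. a \<in> vsp (hdim A) \<Longrightarrow> b \<in> vsp (hdim A) \<Longrightarrow> halpha A (hmul A (tv (hdim A) a b)) = hmul A (tv (hdim A) (halpha A a) (halpha A b))"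
    "halpha A (hone A) = hone A"
    "\<And>a. a \<in> vsp (hdim A) \<Longrightarrow> hcomul A (halpha A a) = tmap (hdim A) (hdim A) (hdim A) (halpha A) (halpha A) (hcomul A a)"
    "\<And>a. a \<in> vsp (hdim A) \<Longrightarrow> hcounit A (halpha A a) = hcounit A a"
  using assms by (auto simp: hom_bialgebra_def Let_def)

lemma hom_bialgebra_alpha_mul:
  assumes A: "hom_bialgebra A" and v: "v \<in> vsp (hdim A * hdim A)"
  shows "halpha A (hmul A v) = hmul A (tmap (hdim A) (hdim A) (hdim A) (halpha A) (halpha A) v)"
proof -
  note b = hom_bialgebraD[OF A]
  have "mapeq (hdim A * hdim A) (halpha A \<circ> hmul A) (hmul A \<circ> tmap (hdim A) (hdim A) (hdim A) (halpha A) (halpha A))"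
    by (rule tensor_ext[OF lin_comp[OF b(1) blin_lin[OF b(5)]] lin_comp[OF tmap_lin[OF blin_lin[OF b(5)] blin_lin[OF b(5)]] b(1)]])
       (simp add: hom_bialgebra_alphaD(1)[OF A] tmap_tv[OF blin_lin[OF b(5)] blin_lin[OF b(5)]])
  then show ?thesis using v by (simp add: mapeq_def)
qed

lemma hom_bialgebra_zpow:
  assumes A: "hom_bialgebra A"
  shows "\<And>v. v \<in> vsp (hdim A * hdim A) \<Longrightarrow> zpow (hdim A) (halpha A) k (hmul A v) = hmul A (tmap (hdim A) (hdim A) (hdim A) (zpow (hdim A) (halpha A) k) (zpow (hdim A) (halpha A) k) v)"
    "zpow (hdim A) (halpha A) k (hone A) = hone A"
    "\<And>a. a \<in> vsp (hdim A) \<Longrightarrow> hcomul A (zpow (hdim A) (halpha A) k a) = tmap (hdim A) (hdim A) (hdim A) (zpow (hdim A) (halpha A) k) (zpow (hdim A) (halpha A) k) (hcomul A a)"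
    "\<And>a. a \<in> vsp (hdim A) \<Longrightarrow> hcounit A (zpow (hdim A) (halpha A) k a) = hcounit A a"
proof -
  note b = hom_bialgebraD[OF A]
  let ?d = "hdim A" and ?a = "halpha A"
  note T = blin_tmap[OF b(5) b(5)]
  show "\<And>v. v \<in> vsp (?d * ?d) \<Longrightarrow> zpow ?d ?a k (hmul A v) = hmul A (tmap ?d ?d ?d (zpow ?d ?a k) (zpow ?d ?a k) v)"
  proof -
    fix v :: "'a vect" assume v: "v \<in> vsp (?d*?d)"
    have "hmul A (zpow (?d*?d) (tmap ?d ?d ?d ?a ?a) k v) = zpow ?d ?a k (hmul A v)"
      by (rule zpow_intertwine[OF T(1) b(5) lin_vsp[OF b(1)] _ v]) (simp_all add: hom_bialgebra_alpha_mul[OF A])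
    then show "zpow ?d ?a k (hmul A v) = hmul A (tmap ?d ?d ?d (zpow ?d ?a k) (zpow ?d ?a k) v)"
      using mapeqD[OF zpow_tmap[OF b(5) b(5)] v] by simp
  qed
  show "zpow ?d ?a k (hone A) = hone A"
  proof (induction k rule: int_induct[where k=0])
    case base then show ?case by simp
  next
    case (step1 i) then show ?case by (simp add: zpow_succ(1)[OF b(5) b(2)] hom_bialgebra_alphaD(2)[OF A])
  next
    case (step2 i)
    have "iv ?d ?a (hone A) = hone A" using iv_left[OF b(5) b(2)] hom_bialgebra_alphaD(2)[OF A] by simp
    then show ?case using step2 by (simp add: zpow_pred(1)[OF b(5) b(2)])
  qed
  show "\<And>a. a \<in> vsp ?d \<Longrightarrow> hcomul A (zpow ?d ?a k a) = tmap ?d ?d ?d (zpow ?d ?a k) (zpow ?d ?a k) (hcomul A a)"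
  proof -
    fix a :: "'a vect" assume a: "a \<in> vsp ?d"
    have "hcomul A (zpow ?d ?a k a) = zpow (?d*?d) (tmap ?d ?d ?d ?a ?a) k (hcomul A a)"
      by (rule zpow_intertwine[OF b(5) T(1) lin_vsp[OF b(3)] _ a]) (simp_all add: hom_bialgebra_alphaD(3)[OF A])
    then show "hcomul A (zpow ?d ?a k a) = tmap ?d ?d ?d (zpow ?d ?a k) (zpow ?d ?a k) (hcomul A a)"
      using mapeqD[OF zpow_tmap[OF b(5) b(5)] lin_vsp[OF b(3) a]] by simp
  qed
  show "\<And>a. a \<in> vsp ?d \<Longrightarrow> hcounit A (zpow ?d ?a k a) = hcounit A a"
    by (rule zpow_invariant[OF b(5)]) (simp_all add: hom_bialgebra_alphaD(4)[OF A])
qed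

lemma lin_twisted_mul:
  assumes A: "hom_bialgebra A"
  shows "lin (hdim A * hdim A) (hdim A) (\<lambda>c. hmul A (tmap (hdim A) (hdim A) (hdim A) (zpow (hdim A) (halpha A) i) (zpow (hdim A) (halpha A) j) c))"
  using lin_comp[OF tmap_lin[OF blin_lin[OF zpow_blin[OF hom_bialgebraD(5)[OF A]]] blin_lin[OF zpow_blin[OF hom_bialgebraD(5)[OF A]]]] hom_bialgebraD(1)[OF A]]
  by (simp add: comp_def)

lemma lin_mon2:
  assumes A: "hom_bialgebra A"
  shows "lin (fst X * hdim A * (fst Y * hdim A)) (fst X * fst Y * hdim A) (mon2 i j A X Y)"
  unfolding mon2_def by (rule lin_comp[OF lin_sw tmap_lin[OF lin_id lin_twisted_mul[OF A]]])

lemma mon2_tv: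
  assumes A: "hom_bialgebra A" and x: "x \<in> vsp (fst X)" and y: "y \<in> vsp (fst Y)"
    and a: "a \<in> vsp (hdim A)" and b: "b \<in> vsp (hdim A)"
  shows "mon2 i j A X Y (tv (fst Y * hdim A) (tv (hdim A) x a) (tv (hdim A) y b))
     = tv (hdim A) (tv (fst Y) x y) (hmul A (tv (hdim A) (zpow (hdim A) (halpha A) i a) (zpow (hdim A) (halpha A) j b)))"
proof -
  note z = blin_lin[OF zpow_blin[OF hom_bialgebraD(5)[OF A]]]
  show ?thesis
    unfolding mon2_def comp_def
    by (simp add: sw_tv x y a b tmap_tv[OF lin_id lin_twisted_mul[OF A]] tv_vsp tmap_tv[OF z z a b])
qed

lemma lin_mon0: "hom_bialgebra A \<Longrightarrow> lin 1 (1 * hdim A) (mon0 A)"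
proof -
  assume A: "hom_bialgebra A"
  have "mon0 A = (\<lambda>u. tv (hdim A) u (hone A))" by (simp add: mon0_def fun_eq_iff)
  then show ?thesis using lin_tvL[OF hom_bialgebraD(2)[OF A], of 1] by simp
qed

lemma mon0_unit: "hom_bialgebra A \<Longrightarrow> mon0 A (ebasis 0) = hone A"
  by (simp add: mon0_def tv_unitL hom_bialgebraD(2))

section \<open>Reduction to the unit object\<close>

lemma obj_blin: "obj X \<Longrightarrow> blin (fst X) (snd X)" by (simp add: obj_def blin_def)

lemma obj_unit: "obj (unit_obj :: 'k::field object)"
  by (simp add: obj_def unit_obj_def bij_betw_def)

lemma unit_obj_simps [simp]: "fst (unit_obj::'k::field object) = 1" "snd (unit_obj::'k::field object) = id"
  by (simp_all add: unit_obj_def)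

lemma mapeq_tensor_factor:
  fixes L R PL PR \<gamma> :: "'k::field lmap"
  assumes L: "lin (x*D) e L" and R: "lin (x*D) e' R"
    and eL: "\<And>w U. w \<in> vsp x \<Longrightarrow> U \<in> vsp D \<Longrightarrow> L (tv D w U) = tv E (\<gamma> w) (PL U)"
    and eR: "\<And>w U. w \<in> vsp x \<Longrightarrow> U \<in> vsp D \<Longrightarrow> R (tv D w U) = tv E (\<gamma> w) (PR U)"
    and P: "mapeq D PL PR"
  shows "mapeq (x*D) L R"
  by (rule tensor_ext[OF L R]) (simp add: eL eR mapeqD[OF P])

lemma mapeq_all_objects_iff:
  fixes L R \<gamma> :: "'k::field object \<Rightarrow> 'k lmap" and PL PR :: "'k lmap"
  assumes dim: "\<And>X. dimX X = fst X * D"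
    and L: "\<And>X. obj X \<Longrightarrow> lin (fst X * D) (fst X * E) (L X)"
    and R: "\<And>X. obj X \<Longrightarrow> lin (fst X * D) (fst X * E) (R X)"
    and L_tv: "\<And>X w U. obj X \<Longrightarrow> w \<in> vsp (fst X) \<Longrightarrow> U \<in> vsp D \<Longrightarrow> L X (tv D w U) = tv E (\<gamma> X w) (PL U)"
    and R_tv: "\<And>X w U. obj X \<Longrightarrow> w \<in> vsp (fst X) \<Longrightarrow> U \<in> vsp D \<Longrightarrow> R X (tv D w U) = tv E (\<gamma> X w) (PR U)"
    and \<gamma>: "\<gamma> unit_obj (ebasis 0) = ebasis 0"
    and PL: "lin D E PL" and PR: "lin D E PR"
  shows "(\<forall>X. obj X \<longrightarrow> mapeq (dimX X) (L X) (R X)) \<longleftrightarrow> mapeq D PL PR"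
proof
  assume "\<forall>X. obj X \<longrightarrow> mapeq (dimX X) (L X) (R X)"
  then have "mapeq (dimX unit_obj) (L unit_obj) (R unit_obj)" using obj_unit by blast
  then have unit: "mapeq D (L unit_obj) (R unit_obj)" using dim[of unit_obj] by simp
  show "mapeq D PL PR"
    unfolding mapeq_def
  proof
    fix U :: "'k vect" assume U: "U \<in> vsp D"
    have "PL U = L unit_obj (tv D (ebasis 0) U)"
      using L_tv[OF obj_unit _ U, of "ebasis 0"] tv_unitL[OF lin_vsp[OF PL U]] \<gamma> by simp
    also have "\<dots> = R unit_obj (tv D (ebasis 0) U)"
      using mapeqD[OF unit, of "tv D (ebasis 0) U"] tv_vsp[OF ebasis_vsp[of 0 1] U] by simp
    also have "\<dots> = PR U"
      using R_tv[OF obj_unit _ U, of "ebasis 0"] tv_unitL[OF lin_vsp[OF PR U]] \<gamma> by simp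
    finally show "PL U = PR U" .
  qed
next
  assume "mapeq D PL PR"
  then show "\<forall>X. obj X \<longrightarrow> mapeq (dimX X) (L X) (R X)"
    unfolding dim using mapeq_tensor_factor[OF L R L_tv R_tv] by blast
qed

section \<open>The unit component \<open>\<psi>\<close> and naturality\<close>

locale hom_twist =
  fixes B H :: "'k::field hbialg" and phi :: "'k lmap"
  assumes hB: "hom_bialgebra B" and hH: "hom_bialgebra H"
    and lphi: "lin (hdim B * hdim H) (hdim H * hdim B) phi"
    and cphi: "\<forall>u\<in>vsp (hdim B * hdim H).
           phi (tmap (hdim B) (hdim H) (hdim H) (halpha B) (halpha H) u)
           = tmap (hdim H) (hdim B) (hdim B) (halpha H) (halpha B) (phi u)"
begin

abbreviation "dB \<equiv> hdim B"
abbreviation "dH \<equiv> hdim H"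
abbreviation "aB \<equiv> halpha B"
abbreviation "aH \<equiv> halpha H"
abbreviation "Z k \<equiv> zpow dB aB k"
abbreviation "Z' k \<equiv> zpow dH aH k"

definition psi :: "int \<Rightarrow> 'k::field lmap" where
  "psi n = tmap dH dB dB id (Z n) \<circ> phi \<circ> tmap dB dH dH (Z (-n-1)) aH"

definition deltaB :: "'k::field lmap" where "deltaB = (\<lambda>h. tmap dB dB dB id (iv dB aB) (hcomul B h))"

definition deltaH :: "'k::field lmap" where "deltaH = (\<lambda>h. tmap dH dH dH id (iv dH aH) (hcomul H h))"

lemmas lin_mulB = hom_bialgebraD(1)[OF hB] and one_vspB = hom_bialgebraD(2)[OF hB]
  and lin_comulB = hom_bialgebraD(3)[OF hB] and blin_alphaB = hom_bialgebraD(5)[OF hB]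
  and lin_counitB = hom_bialgebraD(6)[OF hB]

lemmas lin_mulH = hom_bialgebraD(1)[OF hH] and one_vspH = hom_bialgebraD(2)[OF hH]
  and lin_comulH = hom_bialgebraD(3)[OF hH] and blin_alphaH = hom_bialgebraD(5)[OF hH]
  and lin_counitH = hom_bialgebraD(6)[OF hH]

lemma lin_aB: "lin dB dB aB" using blin_lin[OF blin_alphaB] .

lemma lin_aH: "lin dH dH aH" using blin_lin[OF blin_alphaH] .

lemma lin_Z: "lin dB dB (Z k)" using blin_lin[OF zpow_blin[OF blin_alphaB]] .

lemma lin_Z': "lin dH dH (Z' k)" using blin_lin[OF zpow_blin[OF blin_alphaH]] .

lemma lin_ivB: "lin dB dB (iv dB aB)" using blin_lin[OF iv_blin[OF blin_alphaB]] .

lemma lin_ivH: "lin dH dH (iv dH aH)" using blin_lin[OF iv_blin[OF blin_alphaH]] .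

lemma lin_psi: "lin (dB*dH) (dH*dB) (psi n)"
  unfolding psi_def
  by (rule lin_comp[OF tmap_lin[OF lin_Z lin_aH] lin_comp[OF lphi tmap_lin[OF lin_id lin_Z]]])

lemma psi_vsp: "U \<in> vsp (dB*dH) \<Longrightarrow> psi n U \<in> vsp (dH*dB)" using lin_vsp[OF lin_psi] .

lemma lin_deltaB: "lin dB (dB*dB) deltaB"
  unfolding deltaB_def using lin_comp[OF lin_comulB tmap_lin[OF lin_id lin_ivB]] by (simp add: comp_def)

lemma lin_deltaH: "lin dH (dH*dH) deltaH"
  unfolding deltaH_def using lin_comp[OF lin_comulH tmap_lin[OF lin_id lin_ivH]] by (simp add: comp_def)

lemma ddphi_eq: "ddphi n B H phi X = tmap (fst X) (dB*dH) (dH*dB) id (psi n)"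
  by (simp add: ddphi_def psi_def)

lemma ddphi_tv: "w \<in> vsp (fst X) \<Longrightarrow> U \<in> vsp (dB*dH) \<Longrightarrow> ddphi n B H phi X (tv (dB*dH) w U) = tv (dH*dB) w (psi n U)"
  unfolding ddphi_eq by (simp add: tmap_tv[OF lin_id lin_psi])

lemma lin_ddphi: "lin (fst X * (dB*dH)) (fst X * (dH*dB)) (ddphi n B H phi X)"
  unfolding ddphi_eq by (rule tmap_lin[OF lin_id lin_psi])

lemma Z_add: "v \<in> vsp dB \<Longrightarrow> Z k (Z l v) = Z (k+l) v" using zpow_add[OF blin_alphaB] by simp

lemma Z'_add: "v \<in> vsp dH \<Longrightarrow> Z' k (Z' l v) = Z' (k+l) v" using zpow_add[OF blin_alphaH] by simp

lemma Z_vsp: "v \<in> vsp dB \<Longrightarrow> Z k v \<in> vsp dB" using zpow_vsp[OF blin_alphaB] .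

lemma Z'_vsp: "v \<in> vsp dH \<Longrightarrow> Z' k v \<in> vsp dH" using zpow_vsp[OF blin_alphaH] .

lemma aH_iv: "v \<in> vsp dH \<Longrightarrow> aH (iv dH aH v) = v" using iv_right[OF blin_alphaH] .

lemma iv_aH: "v \<in> vsp dH \<Longrightarrow> iv dH aH (aH v) = v" using iv_left[OF blin_alphaH] .

lemma aH_vsp: "v \<in> vsp dH \<Longrightarrow> aH v \<in> vsp dH" using lin_vsp[OF lin_aH] .

lemma ivH_vsp: "v \<in> vsp dH \<Longrightarrow> iv dH aH v \<in> vsp dH" using iv_vsp[OF blin_alphaH] .

lemma Z_smult: "v \<in> vsp dB \<Longrightarrow> Z k (\<lambda>p. c * v p) = (\<lambda>p. c * Z k v p)" using lin_smult[OF lin_Z] .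

lemma ivH_smult: "v \<in> vsp dH \<Longrightarrow> iv dH aH (\<lambda>p. c * v p) = (\<lambda>p. c * iv dH aH v p)" using lin_smult[OF lin_ivH] .

lemma Z_inj: "u \<in> vsp dB \<Longrightarrow> v \<in> vsp dB \<Longrightarrow> Z k u = Z k v \<Longrightarrow> u = v"
  by (metis zpow_inv[OF blin_alphaB] minus_minus)

lemma ivH_inj: "u \<in> vsp dH \<Longrightarrow> v \<in> vsp dH \<Longrightarrow> iv dH aH u = iv dH aH v \<Longrightarrow> u = v"
  by (metis aH_iv)

lemma Z'm1_aH[simp]: "v \<in> vsp dH \<Longrightarrow> Z' (-1) (aH v) = v" by (simp add: zpow_m1 iv_aH)

lemma aH_Z'm1[simp]: "v \<in> vsp dH \<Longrightarrow> aH (Z' (-1) v) = v" by (simp add: zpow_m1 aH_iv)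

lemma aH_Z': "v \<in> vsp dH \<Longrightarrow> aH (Z' k v) = Z' (k+1) v" using zpow_succ(1)[OF blin_alphaH, of v k] by simp

lemma Z_aB: "v \<in> vsp dB \<Longrightarrow> Z k (aB v) = Z (k+1) v" using zpow_succ(2)[OF blin_alphaB, of v k] by simp

lemma Z_Z: "v \<in> vsp dB \<Longrightarrow> k + l = m \<Longrightarrow> Z k (Z l v) = Z m v" using Z_add by simp

lemma Z'_Z': "v \<in> vsp dH \<Longrightarrow> k + l = m \<Longrightarrow> Z' k (Z' l v) = Z' m v" using Z'_add by simp

lemma Z_mul: "x \<in> vsp dB \<Longrightarrow> y \<in> vsp dB \<Longrightarrow> Z k (hmul B (tv dB x y)) = hmul B (tv dB (Z k x) (Z k y))"
  using hom_bialgebra_zpow(1)[OF hB tv_vsp, of x y k] tmap_tv[OF lin_Z lin_Z, of x y k k] by simp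

lemma aH_mul: "x \<in> vsp dH \<Longrightarrow> y \<in> vsp dH \<Longrightarrow> aH (hmul H (tv dH x y)) = hmul H (tv dH (aH x) (aH y))"
  using hom_bialgebra_alphaD(1)[OF hH] by simp

lemma phi_tv_vsp: "b \<in> vsp dB \<Longrightarrow> h \<in> vsp dH \<Longrightarrow> phi (tv dH b h) \<in> vsp (dH*dB)"
  using lin_vsp[OF lphi tv_vsp] by blast

lemma blin_aB_aH: "blin (dB*dH) (tmap dB dH dH aB aH)" using blin_tmap(1)[OF blin_alphaB blin_alphaH] .

lemma blin_aH_aB: "blin (dH*dB) (tmap dH dB dB aH aB)" using blin_tmap(1)[OF blin_alphaH blin_alphaB] .

lemma phi_zpow:
  assumes u: "u \<in> vsp (dB*dH)"
  shows "phi (tmap dB dH dH (Z k) (Z' k) u) = tmap dH dB dB (Z' k) (Z k) (phi u)"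
proof -
  have "phi (zpow (dB*dH) (tmap dB dH dH aB aH) k u) = zpow (dH*dB) (tmap dH dB dB aH aB) k (phi u)"
    by (rule zpow_intertwine[OF blin_aB_aH blin_aH_aB lin_vsp[OF lphi] _ u]) (simp_all add: cphi)
  then show ?thesis
    using mapeqD[OF zpow_tmap[OF blin_alphaB blin_alphaH] u] mapeqD[OF zpow_tmap[OF blin_alphaH blin_alphaB] lin_vsp[OF lphi u]] by simp
qed

lemma phi_zpow_tv:
  assumes c: "c \<in> vsp dB" and y: "y \<in> vsp dH"
  shows "phi (tv dH (Z k c) (Z' k y)) = tmap dH dB dB (Z' k) (Z k) (phi (tv dH c y))"
  using phi_zpow[OF tv_vsp[OF c y], of k] by (simp add: tmap_tv[OF lin_Z lin_Z' c y])

lemma psi_tv: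
  assumes b: "b \<in> vsp dB" and h: "h \<in> vsp dH"
  shows "psi n (tv dH b h) = tmap dH dB dB id (Z n) (phi (tv dH (Z (-n-1) b) (aH h)))"
  by (simp add: psi_def tmap_tv[OF lin_Z lin_aH b h])

lemma Z_aB_comm: "v \<in> vsp dB \<Longrightarrow> Z k (aB v) = aB (Z k v)"
  using zpow_succ[OF blin_alphaB, of v k] by simp

lemma Z'_aH_comm: "v \<in> vsp dH \<Longrightarrow> Z' k (aH v) = aH (Z' k v)"
  using zpow_succ[OF blin_alphaH, of v k] by simp

lemma tv_aB_aH: "c \<in> vsp dB \<Longrightarrow> k \<in> vsp dH \<Longrightarrow> tv dH (aB c) (aH k) = tmap dB dH dH aB aH (tv dH c k)"
  by (simp add: tmap_tv[OF lin_aB lin_aH])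

lemma psi_alpha:
  assumes U: "U \<in> vsp (dB*dH)"
  shows "psi n (tmap dB dH dH aB aH U) = tmap dH dB dB aH aB (psi n U)"
proof -
  have "mapeq (dB*dH) (psi n \<circ> tmap dB dH dH aB aH) (tmap dH dB dB aH aB \<circ> psi n)"
  proof (rule tensor_ext[OF lin_comp[OF tmap_lin[OF lin_aB lin_aH] lin_psi] lin_comp[OF lin_psi tmap_lin[OF lin_aH lin_aB]]])
    fix b h :: "'k vect" assume b: "b \<in> vsp dB" and h: "h \<in> vsp dH"
    let ?c = "Z (-n-1) b"
    have c: "?c \<in> vsp dB" using zpow_vsp[OF blin_alphaB b] .
    have Y: "phi (tv dH ?c (aH h)) \<in> vsp (dH*dB)" using lin_vsp[OF lphi tv_vsp[OF c lin_vsp[OF lin_aH h]]] .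
    have e1: "mapeq dB (Z n \<circ> aB) (aB \<circ> Z n)" by (simp add: mapeq_def Z_aB_comm)
    have "(psi n \<circ> tmap dB dH dH aB aH) (tv dH b h) = psi n (tv dH (aB b) (aH h))"
      by (simp add: tmap_tv[OF lin_aB lin_aH b h])
    also have "\<dots> = tmap dH dB dB id (Z n) (phi (tv dH (aB ?c) (aH (aH h))))"
      by (simp add: psi_tv lin_vsp[OF lin_aB b] lin_vsp[OF lin_aH h] Z_aB_comm b)
    also have "\<dots> = tmap dH dB dB id (Z n) (tmap dH dB dB aH aB (phi (tv dH ?c (aH h))))"
      by (simp add: tv_aB_aH c lin_vsp[OF lin_aH h] cphi tv_vsp)
    also have "\<dots> = tmap dH dB dB aH (Z n \<circ> aB) (phi (tv dH ?c (aH h)))"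
      by (rule tmap_tmap_apply[OF lin_aH lin_aB lin_id lin_Z Y]) simp_all
    also have "\<dots> = tmap dH dB dB aH (aB \<circ> Z n) (phi (tv dH ?c (aH h)))"
      by (simp only: tmap_cong[OF mapeq_refl e1])
    also have "\<dots> = tmap dH dB dB aH aB (tmap dH dB dB id (Z n) (phi (tv dH ?c (aH h))))"
      by (rule tmap_tmap_apply[OF lin_id lin_Z lin_aH lin_aB Y, symmetric]) simp_all
    also have "\<dots> = (tmap dH dB dB aH aB \<circ> psi n) (tv dH b h)" by (simp add: psi_tv b h)
    finally show "(psi n \<circ> tmap dB dH dH aB aH) (tv dH b h) = (tmap dH dB dB aH aB \<circ> psi n) (tv dH b h)" .
  qed
  then show ?thesis using U by (simp add: mapeq_def)
qed

lemma ddphi_mor: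
  assumes X: "obj X"
  shows "mor (fobj H (fobj B X)) (fobj B (fobj H X)) (ddphi n B H phi X)"
proof -
  note aX = blin_lin[OF obj_blin[OF X]]
  have l: "lin (fst X * (dB*dH)) (fst X * (dH*dB)) (ddphi n B H phi X)" by (rule lin_ddphi)
  have la1: "lin (fst X * dB * dH) (fst X * dB * dH) (tmap (fst X * dB) dH dH (tmap (fst X) dB dB (snd X) aB) aH)"
    by (rule tmap_lin[OF tmap_lin[OF aX lin_aB] lin_aH])
  have la2: "lin (fst X * dH * dB) (fst X * dH * dB) (tmap (fst X * dH) dB dB (tmap (fst X) dH dH (snd X) aH) aB)"
    by (rule tmap_lin[OF tmap_lin[OF aX lin_aH] lin_aB])
  have L: "lin (fst X * (dB*dH)) (fst X * (dH*dB)) (ddphi n B H phi X \<circ> tmap (fst X * dB) dH dH (tmap (fst X) dB dB (snd X) aB) aH)"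
    by (rule lin_dims[OF lin_compI[OF la1 l]]) (simp_all add: ac_simps)
  have R: "lin (fst X * (dB*dH)) (fst X * (dH*dB)) (tmap (fst X * dH) dB dB (tmap (fst X) dH dH (snd X) aH) aB \<circ> ddphi n B H phi X)"
    by (rule lin_dims[OF lin_compI[OF l la2]]) (simp_all add: ac_simps)
  have "mapeq (fst X * (dB*dH)) (ddphi n B H phi X \<circ> tmap (fst X * dB) dH dH (tmap (fst X) dB dB (snd X) aB) aH)
     (tmap (fst X * dH) dB dB (tmap (fst X) dH dH (snd X) aH) aB \<circ> ddphi n B H phi X)"
  proof (rule mapeq_tensor_factor[OF L R, where \<gamma>="snd X" and E="dH*dB" and PL="psi n \<circ> tmap dB dH dH aB aH" and PR="tmap dH dB dB aH aB \<circ> psi n"])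
    fix w U :: "'k vect" assume w: "w \<in> vsp (fst X)" and U: "U \<in> vsp (dB*dH)"
    show "(ddphi n B H phi X \<circ> tmap (fst X * dB) dH dH (tmap (fst X) dB dB (snd X) aB) aH) (tv (dB*dH) w U)
        = tv (dH*dB) (snd X w) ((psi n \<circ> tmap dB dH dH aB aH) U)"
      by (simp add: tmap_assoc_tv[OF aX lin_aB lin_aH w U] ddphi_tv[OF lin_vsp[OF aX w] lin_vsp[OF tmap_lin[OF lin_aB lin_aH] U]])
    show "(tmap (fst X * dH) dB dB (tmap (fst X) dH dH (snd X) aH) aB \<circ> ddphi n B H phi X) (tv (dB*dH) w U)
        = tv (dH*dB) (snd X w) ((tmap dH dB dB aH aB \<circ> psi n) U)"
      by (simp add: ddphi_tv[OF w U] tmap_assoc_tv[OF aX lin_aH lin_aB w psi_vsp[OF U]])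
  next
    show "mapeq (dB*dH) (psi n \<circ> tmap dB dH dH aB aH) (tmap dH dB dB aH aB \<circ> psi n)"
      by (simp add: mapeq_def psi_alpha)
  qed
  then show ?thesis
    using l by (simp add: mor_def mapeq_def fobj_def mult.assoc)
qed

lemma ddphi_natural:
  assumes X: "obj X" and Y: "obj Y" and f: "mor X Y f"
  shows "mapeq (fst (fobj H (fobj B X))) (ddphi n B H phi Y \<circ> fmor H (fst (fobj B X)) (fmor B (fst X) f))
           (fmor B (fst (fobj H X)) (fmor H (fst X) f) \<circ> ddphi n B H phi X)"
proof -
  have lf: "lin (fst X) (fst Y) f" using f by (simp add: mor_def)
  have l1: "lin (fst X * dB * dH) (fst Y * dB * dH) (fmor H (fst (fobj B X)) (fmor B (fst X) f))"
    unfolding fmor_def fobj_def fst_conv by (rule tmap_lin[OF tmap_lin[OF lf lin_id] lin_id])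
  have l2: "lin (fst X * dH * dB) (fst Y * dH * dB) (fmor B (fst (fobj H X)) (fmor H (fst X) f))"
    unfolding fmor_def fobj_def fst_conv by (rule tmap_lin[OF tmap_lin[OF lf lin_id] lin_id])
  have L: "lin (fst X * (dB*dH)) (fst Y * (dH*dB)) (ddphi n B H phi Y \<circ> fmor H (fst (fobj B X)) (fmor B (fst X) f))"
    by (rule lin_dims[OF lin_compI[OF l1 lin_ddphi]]) (simp_all add: ac_simps)
  have R: "lin (fst X * (dB*dH)) (fst Y * (dH*dB)) (fmor B (fst (fobj H X)) (fmor H (fst X) f) \<circ> ddphi n B H phi X)"
    by (rule lin_dims[OF lin_compI[OF lin_ddphi l2]]) (simp_all add: ac_simps)
  have idB: "\<And>U. U \<in> vsp (dB*dH) \<Longrightarrow> tmap dB dH dH id id U = (U::'k vect)" using mapeqD[OF tmap_id[of dB dH]] by simp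
  have idH: "\<And>U. U \<in> vsp (dH*dB) \<Longrightarrow> tmap dH dB dB id id U = (U::'k vect)" using mapeqD[OF tmap_id[of dH dB]] by simp
  have "mapeq (fst X * (dB*dH)) (ddphi n B H phi Y \<circ> fmor H (fst (fobj B X)) (fmor B (fst X) f))
           (fmor B (fst (fobj H X)) (fmor H (fst X) f) \<circ> ddphi n B H phi X)"
  proof (rule mapeq_tensor_factor[OF L R, where \<gamma>="f" and E="dH*dB" and PL="psi n" and PR="psi n"])
    fix w U :: "'k vect" assume w: "w \<in> vsp (fst X)" and U: "U \<in> vsp (dB*dH)"
    show "(ddphi n B H phi Y \<circ> fmor H (fst (fobj B X)) (fmor B (fst X) f)) (tv (dB*dH) w U) = tv (dH*dB) (f w) (psi n U)"
      by (simp add: fmor_def fobj_def tmap_assoc_tv[OF lf lin_id lin_id w U] idB U ddphi_tv[OF lin_vsp[OF lf w] U])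
    show "(fmor B (fst (fobj H X)) (fmor H (fst X) f) \<circ> ddphi n B H phi X) (tv (dB*dH) w U) = tv (dH*dB) (f w) (psi n U)"
      by (simp add: fmor_def fobj_def ddphi_tv[OF w U] tmap_assoc_tv[OF lf lin_id lin_id w psi_vsp[OF U]] idH psi_vsp[OF U])
  qed simp
  then show ?thesis by (simp add: fobj_def mult.assoc)
qed

end

section \<open>Compatibility with the comultiplication of B: condition (M1)\<close>

context hom_twist
begin

definition "deltaB_lhs n = tmap dH dB (dB*dB) aH deltaB \<circ> psi n"

definition "deltaB_rhs n = tmap (dB*dH) dB dB (psi n) id \<circ> tmap dB (dB*dH) (dH*dB) id (psi n) \<circ> tmap dB dH dH deltaB id"

lemma deltaB_law_lhs_tv:
  assumes X: "obj X" and w: "w \<in> vsp (fst X)" and U: "U \<in> vsp (dB*dH)"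
  shows "(cdelta B (fobj H X) \<circ> ddphi n B H phi X) (tv (dB*dH) w U) = tv (dH*(dB*dB)) (snd X w) (deltaB_lhs n U)"
proof -
  have cdelta_eq: "cdelta B (fobj H X) = tmap (fst X * dH) dB (dB*dB) (tmap (fst X) dH dH (snd X) aH) deltaB"
    by (simp add: cdelta_def fobj_def deltaB_def)
  show ?thesis
    by (simp add: ddphi_tv[OF w U] cdelta_eq tmap_assoc_tv[OF blin_lin[OF obj_blin[OF X]] lin_aH lin_deltaB w psi_vsp[OF U]] deltaB_lhs_def)
qed

lemma deltaB_law_rhs_tv:
  assumes X: "obj X" and w: "w \<in> vsp (fst X)" and U: "U \<in> vsp (dB*dH)"
  shows "(fmor B (fst (fobj H (fobj B X))) (ddphi n B H phi X) \<circ> ddphi n B H phi (fobj B X) \<circ> fmor H (fst (fobj B X)) (cdelta B X)) (tv (dB*dH) w U)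
     = tv (dH*(dB*dB)) (snd X w) (deltaB_rhs n U)"
proof -
  let ?x = "fst X" and ?a = "snd X"
  note aX = blin_lin[OF obj_blin[OF X]]
  have W: "tmap dB dH dH deltaB id U \<in> vsp (dB*dB*dH)" using lin_vsp[OF tmap_lin[OF lin_deltaB lin_id] U] .
  have W2: "tmap dB (dB*dH) (dH*dB) id (psi n) (tmap dB dH dH deltaB id U) \<in> vsp (dB*(dH*dB))"
    using lin_vsp[OF tmap_lin[OF lin_id lin_psi]] W by (simp add: mult.assoc)
  have aw: "?a w \<in> vsp ?x" using lin_vsp[OF aX w] .
  have s1: "fmor H (fst (fobj B X)) (cdelta B X) (tv (dB*dH) w U) = tv (dB*dB*dH) (?a w) (tmap dB dH dH deltaB id U)"
    unfolding fmor_def fobj_def cdelta_def deltaB_def[symmetric] fst_conv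
    by (rule tmap_assoc_tv[OF aX lin_deltaB lin_id w U])
  have s2: "ddphi n B H phi (fobj B X) (tv (dB*(dB*dH)) (?a w) (tmap dB dH dH deltaB id U))
      = tv (dB*(dH*dB)) (?a w) (tmap dB (dB*dH) (dH*dB) id (psi n) (tmap dB dH dH deltaB id U))"
    unfolding ddphi_eq fobj_def fst_conv
    by (rule tmap_id_assoc_tv[OF lin_psi aw]) (use W in \<open>simp add: mult.assoc\<close>)
  have s3: "tmap (?x*(dB*dH)) dB dB (tmap ?x (dB*dH) (dH*dB) id (psi n)) id
        (tv ((dB*dH)*dB) (?a w) (tmap dB (dB*dH) (dH*dB) id (psi n) (tmap dB dH dH deltaB id U)))
      = tv ((dH*dB)*dB) (?a w) (tmap (dB*dH) dB dB (psi n) id (tmap dB (dB*dH) (dH*dB) id (psi n) (tmap dB dH dH deltaB id U)))"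
    using tmap_assoc_tv[OF lin_id lin_psi lin_id aw, of "tmap dB (dB*dH) (dH*dB) id (psi n) (tmap dB dH dH deltaB id U)"] W2
    by (simp add: mult.assoc)
  show ?thesis
    using s1 s2 s3 unfolding deltaB_rhs_def fmor_def ddphi_eq fobj_def fst_conv comp_def
    by (simp add: mult.assoc)
qed

lemma lin_deltaB_law:
  assumes X: "obj X"
  shows "lin (fst X * (dB*dH)) (fst X * (dH*(dB*dB))) (cdelta B (fobj H X) \<circ> ddphi n B H phi X)"
      (is ?lhs)
    and "lin (fst X * (dB*dH)) (fst X * (dH*(dB*dB)))
      (fmor B (fst (fobj H (fobj B X))) (ddphi n B H phi X) \<circ> ddphi n B H phi (fobj B X) \<circ> fmor H (fst (fobj B X)) (cdelta B X))"
      (is ?rhs)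
proof -
  note aX = blin_lin[OF obj_blin[OF X]]
  have "lin (fst X * dH * dB) (fst X * (dH * (dB * dB))) (cdelta B (fobj H X))"
    using tmap_lin[OF tmap_lin[OF aX lin_aH] lin_deltaB] by (simp add: cdelta_def fobj_def deltaB_def mult.assoc)
  then show ?lhs by (rule lin_compI[OF lin_ddphi]) (simp add: ac_simps)
  have c: "lin (fst X * (dB * dH)) (fst X * (dB * (dB * dH))) (fmor H (fst (fobj B X)) (cdelta B X))"
    using tmap_lin[OF tmap_lin[OF aX lin_deltaB] lin_id, of dH]
    by (simp add: cdelta_def fobj_def deltaB_def fmor_def mult.assoc)
  have p1: "lin (fst X * (dB * (dB * dH))) (fst X * (dB * (dH * dB))) (ddphi n B H phi (fobj B X))"
    using lin_ddphi[of "fobj B X" n] by (simp add: fobj_def mult.assoc)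
  have p2: "lin (fst X * (dB * (dH * dB))) (fst X * (dH * (dB * dB))) (fmor B (fst (fobj H (fobj B X))) (ddphi n B H phi X))"
    unfolding fmor_def fobj_def using tmap_lin[OF lin_ddphi[of X n] lin_id[of dB]] by (simp add: mult.assoc)
  show ?rhs by (rule lin_compI[OF c lin_compI[OF p1 p2]]) (simp_all add: ac_simps)
qed

lemma lin_deltaB_lhs: "lin (dB*dH) (dH*(dB*dB)) (deltaB_lhs n)"
  unfolding deltaB_lhs_def by (rule lin_dims[OF lin_compI[OF lin_psi tmap_lin[OF lin_aH lin_deltaB]]]) simp_all

lemma lin_deltaB_rhs: "lin (dB*dH) (dH*(dB*dB)) (deltaB_rhs n)"
  unfolding deltaB_rhs_def
  by (rule lin_dims[OF lin_compI[OF tmap_lin[OF lin_deltaB lin_id] lin_compI[OF tmap_lin[OF lin_id lin_psi] tmap_lin[OF lin_psi lin_id]]]]) (simp_all add: ac_simps)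

lemma deltaB_zpow:
  assumes v: "v \<in> vsp dB"
  shows "deltaB (Z k v) = tmap dB dB dB (Z k) (Z (k-1)) (hcomul B v)"
proof -
  have e: "mapeq dB (iv dB aB \<circ> Z k) (Z (k-1))" by (simp add: mapeq_def zpow_pred(1)[OF blin_alphaB] zpow_m1)
  have "deltaB (Z k v) = tmap dB dB dB id (iv dB aB) (tmap dB dB dB (Z k) (Z k) (hcomul B v))"
    by (simp add: deltaB_def hom_bialgebra_zpow(3)[OF hB v])
  also have "\<dots> = tmap dB dB dB (Z k) (Z (k-1)) (hcomul B v)"
    by (rule tmap_tmap_apply[OF lin_Z lin_Z lin_id lin_ivB lin_vsp[OF lin_comulB v]]) (simp_all add: e)
  finally show ?thesis .
qed

definition "M1_twist2 n = tmap dB dB dB (Z n) (Z (n-1))"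

definition "M1_twist n = tmap dH (dB*dB) (dB*dB) id (M1_twist2 n)"

definition "M1L c k = tmap (dB*dH) dB dB phi id (tmap dB (dB*dH) (dH*dB) id phi (tv dH (hcomul B c) (aH k)))"

definition "M1R c k = tmap dH dB (dB*dB) aH (hcomul B) (phi (tv dH c k))"

lemma lin_M1_twist2: "lin (dB*dB) (dB*dB) (M1_twist2 n)" unfolding M1_twist2_def by (rule tmap_lin[OF lin_Z lin_Z])

lemma blin_M1_twist: "blin (dH*(dB*dB)) (M1_twist n)"
  unfolding M1_twist_def M1_twist2_def by (rule blin_tmap(1)[OF blin_id blin_tmap(1)[OF zpow_blin[OF blin_alphaB] zpow_blin[OF blin_alphaB]]])

lemma deltaB_lhs_tv:
  assumes b: "b \<in> vsp dB" and h: "h \<in> vsp dH"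
  shows "deltaB_lhs n (tv dH b h) = M1_twist n (M1R (Z (-n-1) b) (aH h))"
proof -
  let ?Y = "phi (tv dH (Z (-n-1) b) (aH h))"
  have Y: "?Y \<in> vsp (dH*dB)" using phi_tv_vsp[OF Z_vsp[OF b] aH_vsp[OF h]] .
  have e: "mapeq dB (deltaB \<circ> Z n) (M1_twist2 n \<circ> hcomul B)" by (simp add: mapeq_def deltaB_zpow M1_twist2_def)
  have "deltaB_lhs n (tv dH b h) = tmap dH dB (dB*dB) aH deltaB (tmap dH dB dB id (Z n) ?Y)"
    by (simp add: deltaB_lhs_def psi_tv b h)
  also have "\<dots> = tmap dH dB (dB*dB) aH (M1_twist2 n \<circ> hcomul B) ?Y"
    by (rule tmap_tmap_apply[OF lin_id lin_Z lin_aH lin_deltaB Y]) (simp_all add: e)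
  also have "\<dots> = M1_twist n (M1R (Z (-n-1) b) (aH h))"
    unfolding M1_twist_def M1R_def by (rule tmap_tmap_apply[OF lin_aH lin_comulB lin_id lin_M1_twist2 Y, symmetric]) simp_all
  finally show ?thesis .
qed

lemma psi_Z_ivH:
  "mapeq (dB*dH) (psi n \<circ> tmap dB dH dH (Z n) (iv dH aH))
      (tmap dH dB dB (Z' (-1)) (Z (n-1)) \<circ> phi \<circ> tmap dB dH dH id aH)"
proof (rule tensor_ext)
  show "lin (dB*dH) (dH*dB) (psi n \<circ> tmap dB dH dH (Z n) (iv dH aH))"
    by (rule lin_comp[OF tmap_lin[OF lin_Z lin_ivH] lin_psi])
  show "lin (dB*dH) (dH*dB) (tmap dH dB dB (Z' (-1)) (Z (n-1)) \<circ> phi \<circ> tmap dB dH dH id aH)"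
    by (rule lin_comp[OF tmap_lin[OF lin_id lin_aH] lin_comp[OF lphi tmap_lin[OF lin_Z' lin_Z]]])
  fix x y :: "'k vect" assume x: "x \<in> vsp dB" and y: "y \<in> vsp dH"
  have Y: "phi (tv dH x (aH y)) \<in> vsp (dH*dB)" using phi_tv_vsp[OF x aH_vsp[OF y]] .
  have "(psi n \<circ> tmap dB dH dH (Z n) (iv dH aH)) (tv dH x y) = tmap dH dB dB id (Z n) (phi (tv dH (Z (-1) x) (Z' (-1) (aH y))))"
    by (simp add: tmap_tv[OF lin_Z lin_ivH x y] psi_tv Z_vsp x ivH_vsp y Z_add aH_iv iv_aH)
  also have "\<dots> = tmap dH dB dB id (Z n) (tmap dH dB dB (Z' (-1)) (Z (-1)) (phi (tv dH x (aH y))))"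
    by (simp only: phi_zpow_tv[OF x aH_vsp[OF y]])
  also have "\<dots> = tmap dH dB dB (Z' (-1)) (Z (n-1)) (phi (tv dH x (aH y)))"
    by (rule tmap_tmap_apply[OF lin_Z' lin_Z lin_id lin_Z Y]) (simp_all add: mapeq_def Z_add)
  also have "\<dots> = (tmap dH dB dB (Z' (-1)) (Z (n-1)) \<circ> phi \<circ> tmap dB dH dH id aH) (tv dH x y)"
    by (simp add: tmap_tv[OF lin_id lin_aH x y])
  finally show "(psi n \<circ> tmap dB dH dH (Z n) (iv dH aH)) (tv dH x y) = (tmap dH dB dB (Z' (-1)) (Z (n-1)) \<circ> phi \<circ> tmap dB dH dH id aH) (tv dH x y)" .
qed

lemma psi_Z_Z'm1:
  "mapeq (dB*dH) (psi n \<circ> tmap dB dH dH (Z (n+1)) (Z' (-1))) (tmap dH dB dB id (Z n) \<circ> phi)"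
proof (rule tensor_ext)
  show "lin (dB*dH) (dH*dB) (psi n \<circ> tmap dB dH dH (Z (n+1)) (Z' (-1)))"
    by (rule lin_comp[OF tmap_lin[OF lin_Z lin_Z'] lin_psi])
  show "lin (dB*dH) (dH*dB) (tmap dH dB dB id (Z n) \<circ> phi)"
    by (rule lin_comp[OF lphi tmap_lin[OF lin_id lin_Z]])
  fix x y :: "'k vect" assume x: "x \<in> vsp dB" and y: "y \<in> vsp dH"
  show "(psi n \<circ> tmap dB dH dH (Z (n+1)) (Z' (-1))) (tv dH x y) = (tmap dH dB dB id (Z n) \<circ> phi) (tv dH x y)"
    by (simp add: tmap_tv[OF lin_Z lin_Z' x y] psi_tv Z_vsp x Z'_vsp y Z_add aH_iv)
qed

lemma deltaB_rhs_tv: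
  assumes b: "b \<in> vsp dB" and h: "h \<in> vsp dH"
  shows "deltaB_rhs n (tv dH b h) = M1_twist n (M1L (Z (-n-1) b) (aH h))"
proof -
  let ?c = "Z (-n-1) b" and ?k = "aH h"
  have c: "?c \<in> vsp dB" using Z_vsp[OF b] .
  have k: "?k \<in> vsp dH" using aH_vsp[OF h] .
  have bc: "b = Z (n+1) ?c" using b by (simp add: Z_add)
  have hk: "h = iv dH aH ?k" using h by (simp add: iv_aH)
  have cc: "hcomul B ?c \<in> vsp (dB*dB)" using lin_vsp[OF lin_comulB c] .
  let ?V = "tv dH (hcomul B ?c) ?k"
  have V: "?V \<in> vsp (dB*(dB*dH))" using tv_vsp[OF cc k] by (simp add: mult.assoc)
  let ?W = "tmap dB (dB*dH) (dH*dB) id phi (tv dH (hcomul B ?c) (aH ?k))"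
  have W: "?W \<in> vsp (dB*dH*dB)"
    using lin_vsp[OF tmap_lin[OF lin_id lphi]] tv_vsp[OF cc aH_vsp[OF k]] by (simp add: mult.assoc)
  have lJ2': "lin (dB*dB) (dB*dB) (tmap dB dB dB (Z (n+1)) (Z n))" by (rule tmap_lin[OF lin_Z lin_Z])
  have s1: "tmap dB dH dH deltaB id (tv dH b h) = tmap dB (dB*dH) (dB*dH) (Z (n+1)) (tmap dB dH dH (Z n) (iv dH aH)) ?V"
  proof -
    have "tmap dB dH dH deltaB id (tv dH b h) = tv dH (deltaB b) h" using tmap_tv[OF lin_deltaB lin_id b h] by simp
    also have "\<dots> = tv dH (tmap dB dB dB (Z (n+1)) (Z n) (hcomul B ?c)) (iv dH aH ?k)"
      using deltaB_zpow[OF c, of "n+1"] bc hk by simp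
    also have "\<dots> = tmap (dB*dB) dH dH (tmap dB dB dB (Z (n+1)) (Z n)) (iv dH aH) ?V"
      by (rule tmap_tv[OF lJ2' lin_ivH cc k, symmetric])
    also have "\<dots> = tmap dB (dB*dH) (dB*dH) (Z (n+1)) (tmap dB dH dH (Z n) (iv dH aH)) ?V"
      using tmap_assoc_apply[OF lin_Z lin_Z lin_ivH] V by (simp add: mult.assoc)
    finally show ?thesis .
  qed
  have idV: "tmap dB (dB*dH) (dB*dH) id (tmap dB dH dH id aH) ?V = tv dH (hcomul B ?c) (aH ?k)"
  proof -
    have "tmap dB (dB*dH) (dB*dH) id (tmap dB dH dH id aH) ?V = tmap (dB*dB) dH dH (tmap dB dB dB id id) aH ?V"
      using tmap_assoc_apply[OF lin_id lin_id lin_aH] V by (simp add: mult.assoc)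
    also have "\<dots> = tmap (dB*dB) dH dH id aH ?V" by (simp only: tmap_id_split[symmetric])
    also have "\<dots> = tv dH (hcomul B ?c) (aH ?k)" using tmap_tv[OF lin_id lin_aH cc k] by simp
    finally show ?thesis .
  qed
  have s2: "tmap dB (dB*dH) (dH*dB) id (psi n) (tmap dB dH dH deltaB id (tv dH b h))
      = tmap dB (dH*dB) (dH*dB) (Z (n+1)) (tmap dH dB dB (Z' (-1)) (Z (n-1))) ?W"
  proof -
    have V': "tmap dB (dB*dH) (dB*dH) id (tmap dB dH dH id aH) ?V \<in> vsp (dB*(dB*dH))"
      using lin_vsp[OF tmap_lin[OF lin_id tmap_lin[OF lin_id lin_aH]] V] .
    have "tmap dB (dB*dH) (dH*dB) id (psi n) (tmap dB (dB*dH) (dB*dH) (Z (n+1)) (tmap dB dH dH (Z n) (iv dH aH)) ?V)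
        = tmap dB (dB*dH) (dH*dB) (Z (n+1)) (tmap dH dB dB (Z' (-1)) (Z (n-1)) \<circ> phi \<circ> tmap dB dH dH id aH) ?V"
      by (rule tmap_tmap_apply[OF lin_Z tmap_lin[OF lin_Z lin_ivH] lin_id lin_psi V]) (simp_all add: psi_Z_ivH)
    also have "\<dots> = tmap dB (dB*dH) (dH*dB) (Z (n+1)) (tmap dH dB dB (Z' (-1)) (Z (n-1)) \<circ> phi) (tmap dB (dB*dH) (dB*dH) id (tmap dB dH dH id aH) ?V)"
      by (rule tmap_tmap_apply[OF lin_id tmap_lin[OF lin_id lin_aH] lin_Z lin_comp[OF lphi tmap_lin[OF lin_Z' lin_Z]] V, symmetric]) simp_all
    also have "\<dots> = tmap dB (dH*dB) (dH*dB) (Z (n+1)) (tmap dH dB dB (Z' (-1)) (Z (n-1))) ?W"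
      unfolding idV
      by (rule tmap_tmap_apply[OF lin_id lphi lin_Z tmap_lin[OF lin_Z' lin_Z], symmetric]) (use tv_vsp[OF cc aH_vsp[OF k]] in \<open>simp_all add: mult.assoc\<close>)
    finally show ?thesis using s1 by simp
  qed
  have s3: "tmap (dB*dH) dB dB (psi n) id (tmap dB (dH*dB) (dH*dB) (Z (n+1)) (tmap dH dB dB (Z' (-1)) (Z (n-1))) ?W)
      = M1_twist n (M1L ?c ?k)"
  proof -
    have "tmap dB (dH*dB) (dH*dB) (Z (n+1)) (tmap dH dB dB (Z' (-1)) (Z (n-1))) ?W
        = tmap (dB*dH) dB dB (tmap dB dH dH (Z (n+1)) (Z' (-1))) (Z (n-1)) ?W"
      using tmap_assoc_apply[OF lin_Z lin_Z' lin_Z W] by simp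
    then have "tmap (dB*dH) dB dB (psi n) id (tmap dB (dH*dB) (dH*dB) (Z (n+1)) (tmap dH dB dB (Z' (-1)) (Z (n-1))) ?W)
        = tmap (dB*dH) dB dB (psi n) id (tmap (dB*dH) dB dB (tmap dB dH dH (Z (n+1)) (Z' (-1))) (Z (n-1)) ?W)" by simp
    also have "\<dots> = tmap (dB*dH) dB dB (tmap dH dB dB id (Z n) \<circ> phi) (Z (n-1)) ?W"
      by (rule tmap_tmap_apply[OF tmap_lin[OF lin_Z lin_Z'] lin_Z lin_psi lin_id W]) (simp_all add: psi_Z_Z'm1)
    also have "\<dots> = tmap (dH*dB) dB dB (tmap dH dB dB id (Z n)) (Z (n-1)) (tmap (dB*dH) dB dB phi id ?W)"
      by (rule tmap_tmap_apply[OF lphi lin_id tmap_lin[OF lin_id lin_Z] lin_Z W, symmetric]) simp_all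
    also have "\<dots> = M1_twist n (M1L ?c ?k)"
      unfolding M1_twist_def M1_twist2_def M1L_def
      using tmap_assoc_apply[OF lin_id lin_Z lin_Z] lin_vsp[OF tmap_lin[OF lphi lin_id] W] by (simp add: mult.assoc)
    finally show ?thesis .
  qed
  show ?thesis using s2 s3 by (simp add: deltaB_rhs_def)
qed

definition "M1 \<longleftrightarrow> (\<forall>b\<in>vsp dB. \<forall>h\<in>vsp dH. M1L b h = M1R b h)"

lemma M1R_vsp: "c \<in> vsp dB \<Longrightarrow> k \<in> vsp dH \<Longrightarrow> M1R c k \<in> vsp (dH*(dB*dB))"
  unfolding M1R_def using lin_vsp[OF tmap_lin[OF lin_aH lin_comulB] phi_tv_vsp] by blast

lemma M1L_vsp: "c \<in> vsp dB \<Longrightarrow> k \<in> vsp dH \<Longrightarrow> M1L c k \<in> vsp (dH*(dB*dB))"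
proof -
  assume c: "c \<in> vsp dB" and k: "k \<in> vsp dH"
  have "tv dH (hcomul B c) (aH k) \<in> vsp (dB*(dB*dH))" using tv_vsp[OF lin_vsp[OF lin_comulB c] aH_vsp[OF k]] by (simp add: mult.assoc)
  then have "tmap dB (dB*dH) (dH*dB) id phi (tv dH (hcomul B c) (aH k)) \<in> vsp (dB*dH*dB)"
    using lin_vsp[OF tmap_lin[OF lin_id lphi]] by (simp add: mult.assoc)
  then show ?thesis unfolding M1L_def using lin_vsp[OF tmap_lin[OF lphi lin_id]] by (simp add: mult.assoc)
qed

lemma deltaB_component_iff_M1: "mapeq (dB*dH) (deltaB_lhs n) (deltaB_rhs n) \<longleftrightarrow> M1"
proof
  assume P: "mapeq (dB*dH) (deltaB_lhs n) (deltaB_rhs n)"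
  show M1 unfolding M1_def
  proof (intro ballI)
    fix c k :: "'k vect" assume c: "c \<in> vsp dB" and k: "k \<in> vsp dH"
    let ?b = "Z (n+1) c" and ?h = "iv dH aH k"
    have "deltaB_lhs n (tv dH ?b ?h) = deltaB_rhs n (tv dH ?b ?h)" using mapeqD[OF P tv_vsp[OF Z_vsp[OF c] ivH_vsp[OF k]]] .
    then have "M1_twist n (M1R c k) = M1_twist n (M1L c k)"
      using deltaB_lhs_tv[OF Z_vsp[OF c] ivH_vsp[OF k], of n] deltaB_rhs_tv[OF Z_vsp[OF c] ivH_vsp[OF k], of n]
      by (simp add: Z_add c aH_iv k)
    then show "M1L c k = M1R c k" using iv_left[OF blin_M1_twist M1L_vsp[OF c k]] iv_left[OF blin_M1_twist M1R_vsp[OF c k]] by metis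
  qed
next
  assume M: M1
  show "mapeq (dB*dH) (deltaB_lhs n) (deltaB_rhs n)"
  proof (rule tensor_ext[OF lin_deltaB_lhs lin_deltaB_rhs])
    fix b h :: "'k vect" assume b: "b \<in> vsp dB" and h: "h \<in> vsp dH"
    show "deltaB_lhs n (tv dH b h) = deltaB_rhs n (tv dH b h)"
      using M Z_vsp[OF b] aH_vsp[OF h] by (simp add: deltaB_lhs_tv deltaB_rhs_tv b h M1_def)
  qed
qed

lemma deltaB_law_iff_M1:
  "(\<forall>X. obj X \<longrightarrow> mapeq (fst (fobj H (fobj B X))) (cdelta B (fobj H X) \<circ> ddphi n B H phi X)
     (fmor B (fst (fobj H (fobj B X))) (ddphi n B H phi X) \<circ> ddphi n B H phi (fobj B X) \<circ> fmor H (fst (fobj B X)) (cdelta B X)))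
   \<longleftrightarrow> M1"
  unfolding deltaB_component_iff_M1[of n, symmetric]
  by (rule mapeq_all_objects_iff[where D="dB*dH" and E="dH*(dB*dB)" and \<gamma>="\<lambda>X. snd X"])
     (fact lin_deltaB_law deltaB_law_lhs_tv deltaB_law_rhs_tv
        lin_deltaB_lhs lin_deltaB_rhs | simp add: fobj_def mult.assoc)+

end

section \<open>Compatibility with the comultiplication of H: condition (M2)\<close>

context hom_twist
begin

definition "deltaH_lhs n = tmap dH dB dB deltaH id \<circ> psi n"

definition "deltaH_rhs n = tmap dH (dB*dH) (dH*dB) id (psi n) \<circ> tmap (dB*dH) dH dH (psi n) id \<circ> tmap dB dH (dH*dH) aB deltaH"

lemma deltaH_law_lhs_tv:
  assumes X: "obj X" and w: "w \<in> vsp (fst X)" and U: "U \<in> vsp (dB*dH)"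
  shows "(fmor B (fst (fobj H X)) (cdelta H X) \<circ> ddphi n B H phi X) (tv (dB*dH) w U) = tv (dH*(dH*dB)) (snd X w) (deltaH_lhs n U)"
  using tmap_assoc_tv[OF blin_lin[OF obj_blin[OF X]] lin_deltaH lin_id w psi_vsp[OF U], of n]
  by (simp add: ddphi_tv[OF w U] fmor_def fobj_def cdelta_def deltaH_def[symmetric] deltaH_lhs_def mult.assoc)

lemma deltaH_law_rhs_tv:
  assumes X: "obj X" and w: "w \<in> vsp (fst X)" and U: "U \<in> vsp (dB*dH)"
  shows "(ddphi n B H phi (fobj H X) \<circ> fmor H (fst (fobj H (fobj B X))) (ddphi n B H phi X) \<circ> cdelta H (fobj B X)) (tv (dB*dH) w U)
     = tv (dH*(dH*dB)) (snd X w) (deltaH_rhs n U)"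
proof -
  let ?x = "fst X" and ?a = "snd X"
  note aX = blin_lin[OF obj_blin[OF X]]
  have aw: "?a w \<in> vsp ?x" using lin_vsp[OF aX w] .
  let ?W = "tmap dB dH (dH*dH) aB deltaH U"
  have W: "?W \<in> vsp (dB*dH*dH)" using lin_vsp[OF tmap_lin[OF lin_aB lin_deltaH] U] by (simp add: mult.assoc)
  let ?W2 = "tmap (dB*dH) dH dH (psi n) id ?W"
  have W2: "?W2 \<in> vsp (dH*(dB*dH))" using lin_vsp[OF tmap_lin[OF lin_psi lin_id] W] by (simp add: mult.assoc)
  have s1: "cdelta H (fobj B X) (tv (dB*dH) w U) = tv (dB*(dH*dH)) (?a w) ?W"
    unfolding fobj_def cdelta_def deltaH_def[symmetric] fst_conv snd_conv
    by (rule tmap_assoc_tv[OF aX lin_aB lin_deltaH w U])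
  have s2: "tmap (?x*(dB*dH)) dH dH (tmap ?x (dB*dH) (dH*dB) id (psi n)) id (tv ((dB*dH)*dH) (?a w) ?W)
      = tv ((dH*dB)*dH) (?a w) ?W2"
    using tmap_assoc_tv[OF lin_id lin_psi lin_id aw W] by simp
  have s3: "ddphi n B H phi (fobj H X) (tv (dH*(dB*dH)) (?a w) ?W2) = tv (dH*(dH*dB)) (?a w) (tmap dH (dB*dH) (dH*dB) id (psi n) ?W2)"
    unfolding ddphi_eq fobj_def fst_conv by (rule tmap_id_assoc_tv[OF lin_psi aw W2])
  show ?thesis
    using s1 s2 s3 unfolding deltaH_rhs_def fmor_def ddphi_eq fobj_def fst_conv comp_def
    by (simp add: mult.assoc)
qed

lemma lin_deltaH_law:
  assumes X: "obj X"
  shows "lin (fst X * (dB*dH)) (fst X * (dH * (dH * dB))) (fmor B (fst (fobj H X)) (cdelta H X) \<circ> ddphi n B H phi X)"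
      (is ?lhs)
    and "lin (fst X * (dB*dH)) (fst X * (dH * (dH * dB)))
      (ddphi n B H phi (fobj H X) \<circ> fmor H (fst (fobj H (fobj B X))) (ddphi n B H phi X) \<circ> cdelta H (fobj B X))"
      (is ?rhs)
proof -
  note aX = blin_lin[OF obj_blin[OF X]]
  have "lin (fst X * dH * dB) (fst X * (dH * dH) * dB) (fmor B (fst (fobj H X)) (cdelta H X))"
    unfolding fmor_def fobj_def cdelta_def deltaH_def[symmetric] fst_conv snd_conv
    by (rule tmap_lin[OF tmap_lin[OF aX lin_deltaH] lin_id])
  then show ?lhs by (rule lin_dims[OF lin_compI[OF lin_ddphi]]) (simp_all add: ac_simps)
  have c: "lin (fst X * dB * dH) (fst X * dB * (dH * dH)) (cdelta H (fobj B X))"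
    unfolding fobj_def cdelta_def deltaH_def[symmetric] fst_conv snd_conv
    by (rule tmap_lin[OF tmap_lin[OF aX lin_aB] lin_deltaH])
  have p1: "lin (fst X * dB * dH * dH) (fst X * (dH * dB) * dH) (fmor H (fst (fobj H (fobj B X))) (ddphi n B H phi X))"
    unfolding fmor_def fobj_def fst_conv using tmap_lin[OF lin_ddphi[of X n] lin_id[of dH]] by (simp add: mult.assoc)
  have p2: "lin (fst X * dH * (dB * dH)) (fst X * dH * (dH * dB)) (ddphi n B H phi (fobj H X))"
    using lin_ddphi[of "fobj H X" n] by (simp add: fobj_def)
  show ?rhs by (rule lin_dims[OF lin_compI[OF c lin_compI[OF p1 p2]]]) (simp_all add: ac_simps)
qed

lemma lin_deltaH_lhs: "lin (dB*dH) (dH*(dH*dB)) (deltaH_lhs n)"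
  unfolding deltaH_lhs_def by (rule lin_dims[OF lin_compI[OF lin_psi tmap_lin[OF lin_deltaH lin_id]]]) (simp_all add: ac_simps)

lemma lin_deltaH_rhs: "lin (dB*dH) (dH*(dH*dB)) (deltaH_rhs n)"
  unfolding deltaH_rhs_def
  by (rule lin_dims[OF lin_compI[OF tmap_lin[OF lin_aB lin_deltaH] lin_compI[OF tmap_lin[OF lin_psi lin_id] tmap_lin[OF lin_id lin_psi]]]]) (simp_all add: ac_simps)

lemma deltaH_zpow:
  assumes v: "v \<in> vsp dH"
  shows "deltaH (Z' k v) = tmap dH dH dH (Z' k) (Z' (k-1)) (hcomul H v)"
proof -
  have e: "mapeq dH (iv dH aH \<circ> Z' k) (Z' (k-1))" by (simp add: mapeq_def zpow_pred(1)[OF blin_alphaH] zpow_m1)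
  have "deltaH (Z' k v) = tmap dH dH dH id (iv dH aH) (tmap dH dH dH (Z' k) (Z' k) (hcomul H v))"
    by (simp add: deltaH_def hom_bialgebra_zpow(3)[OF hH v])
  also have "\<dots> = tmap dH dH dH (Z' k) (Z' (k-1)) (hcomul H v)"
    by (rule tmap_tmap_apply[OF lin_Z' lin_Z' lin_id lin_ivH lin_vsp[OF lin_comulH v]]) (simp_all add: e)
  finally show ?thesis .
qed

definition "M2_twist n = tmap dH (dH*dB) (dH*dB) id (tmap dH dB dB (Z' (-1)) (Z (n-1)))"

definition "M2L c k = tmap dH (dB*dH) (dH*dB) id phi (tmap (dB*dH) dH dH phi id (tv (dH*dH) (aB c) (hcomul H k)))"

definition "M2R c k = tmap dH dB dB (hcomul H) aB (phi (tv dH c k))"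

definition "M2 \<longleftrightarrow> (\<forall>b\<in>vsp dB. \<forall>h\<in>vsp dH. M2L b h = M2R b h)"

lemma blin_M2_twist: "blin (dH*(dH*dB)) (M2_twist n)"
  unfolding M2_twist_def by (rule blin_tmap(1)[OF blin_id blin_tmap(1)[OF zpow_blin[OF blin_alphaH] zpow_blin[OF blin_alphaB]]])

lemma M2R_vsp: "c \<in> vsp dB \<Longrightarrow> k \<in> vsp dH \<Longrightarrow> M2R c k \<in> vsp (dH*(dH*dB))"
  unfolding M2R_def using lin_vsp[OF tmap_lin[OF lin_comulH lin_aB] phi_tv_vsp] by (simp add: mult.assoc)

lemma M2L_vsp: "c \<in> vsp dB \<Longrightarrow> k \<in> vsp dH \<Longrightarrow> M2L c k \<in> vsp (dH*(dH*dB))"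
proof -
  assume c: "c \<in> vsp dB" and k: "k \<in> vsp dH"
  have "tv (dH*dH) (aB c) (hcomul H k) \<in> vsp (dB*dH*dH)" using tv_vsp[OF lin_vsp[OF lin_aB c] lin_vsp[OF lin_comulH k]] by (simp add: mult.assoc)
  then have "tmap (dB*dH) dH dH phi id (tv (dH*dH) (aB c) (hcomul H k)) \<in> vsp (dH*(dB*dH))"
    using lin_vsp[OF tmap_lin[OF lphi lin_id]] by (simp add: mult.assoc)
  then show ?thesis unfolding M2L_def using lin_vsp[OF tmap_lin[OF lin_id lphi]] by (simp add: mult.assoc)
qed

lemma deltaH_lhs_tv:
  assumes b: "b \<in> vsp dB" and h: "h \<in> vsp dH"
  shows "deltaH_lhs n (tv dH b h) = M2_twist n (M2R (Z (-n-1) b) (aH h))"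
proof -
  let ?Y = "phi (tv dH (Z (-n-1) b) (aH h))"
  have Y: "?Y \<in> vsp (dH*dB)" using phi_tv_vsp[OF Z_vsp[OF b] aH_vsp[OF h]] .
  have e1: "mapeq dH (tmap dH dH dH id (Z' (-1)) \<circ> hcomul H) deltaH" by (simp add: mapeq_def deltaH_def zpow_m1)
  have e2: "mapeq dB (Z (n-1) \<circ> aB) (Z n)" by (simp add: mapeq_def Z_aB)
  have "deltaH_lhs n (tv dH b h) = tmap dH dB dB deltaH id (tmap dH dB dB id (Z n) ?Y)"
    by (simp add: deltaH_lhs_def psi_tv b h)
  also have "\<dots> = tmap dH dB dB deltaH (Z n) ?Y"
    by (rule tmap_tmap_apply[OF lin_id lin_Z lin_deltaH lin_id Y]) simp_all
  also have "\<dots> = tmap (dH*dH) dB dB (tmap dH dH dH id (Z' (-1))) (Z (n-1)) (tmap dH dB dB (hcomul H) aB ?Y)"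
    by (rule tmap_tmap_apply[OF lin_comulH lin_aB tmap_lin[OF lin_id lin_Z'] lin_Z Y, symmetric]) (simp_all add: e1 e2)
  also have "\<dots> = M2_twist n (M2R (Z (-n-1) b) (aH h))"
    unfolding M2_twist_def M2R_def
    using tmap_assoc_apply[OF lin_id lin_Z' lin_Z] lin_vsp[OF tmap_lin[OF lin_comulH lin_aB] Y] by (simp add: mult.assoc)
  finally show ?thesis .
qed

lemma psi_Z_Z'm2:
  "mapeq (dB*dH) (psi n \<circ> tmap dB dH dH (Z n) (Z' (-2))) (tmap dH dB dB (Z' (-1)) (Z (n-1)) \<circ> phi)"
proof (rule tensor_ext)
  show "lin (dB*dH) (dH*dB) (psi n \<circ> tmap dB dH dH (Z n) (Z' (-2)))"
    by (rule lin_comp[OF tmap_lin[OF lin_Z lin_Z'] lin_psi])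
  show "lin (dB*dH) (dH*dB) (tmap dH dB dB (Z' (-1)) (Z (n-1)) \<circ> phi)"
    by (rule lin_comp[OF lphi tmap_lin[OF lin_Z' lin_Z]])
  fix x y :: "'k vect" assume x: "x \<in> vsp dB" and y: "y \<in> vsp dH"
  have Y: "phi (tv dH x y) \<in> vsp (dH*dB)" using phi_tv_vsp[OF x y] .
  have "(psi n \<circ> tmap dB dH dH (Z n) (Z' (-2))) (tv dH x y) = tmap dH dB dB id (Z n) (phi (tv dH (Z (-1) x) (Z' (-1) y)))"
    by (simp add: tmap_tv[OF lin_Z lin_Z' x y] psi_tv Z_vsp x Z'_vsp y Z_add aH_Z')
  also have "\<dots> = tmap dH dB dB id (Z n) (tmap dH dB dB (Z' (-1)) (Z (-1)) (phi (tv dH x y)))"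
    by (simp only: phi_zpow_tv[OF x y])
  also have "\<dots> = tmap dH dB dB (Z' (-1)) (Z (n-1)) (phi (tv dH x y))"
    by (rule tmap_tmap_apply[OF lin_Z' lin_Z lin_id lin_Z Y]) (simp_all add: mapeq_def Z_add)
  finally show "(psi n \<circ> tmap dB dH dH (Z n) (Z' (-2))) (tv dH x y) = (tmap dH dB dB (Z' (-1)) (Z (n-1)) \<circ> phi) (tv dH x y)"
    by simp
qed

lemma deltaH_rhs_tv:
  assumes b: "b \<in> vsp dB" and h: "h \<in> vsp dH"
  shows "deltaH_rhs n (tv dH b h) = M2_twist n (M2L (Z (-n-1) b) (aH h))"
proof -
  let ?c = "Z (-n-1) b" and ?k = "aH h"
  have c: "?c \<in> vsp dB" using Z_vsp[OF b] .
  have k: "?k \<in> vsp dH" using aH_vsp[OF h] .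
  have bc: "b = Z (n+1) ?c" using b by (simp add: Z_add)
  have hk: "h = Z' (-1) ?k" using h by simp
  have ck: "hcomul H ?k \<in> vsp (dH*dH)" using lin_vsp[OF lin_comulH k] .
  have ac: "aB ?c \<in> vsp dB" using lin_vsp[OF lin_aB c] .
  let ?V = "tv (dH*dH) (aB ?c) (hcomul H ?k)"
  have V: "?V \<in> vsp (dB*dH*dH)" using tv_vsp[OF ac ck] by (simp add: mult.assoc)
  let ?W = "tmap (dB*dH) dH dH phi id ?V"
  have W: "?W \<in> vsp (dH*dB*dH)" using lin_vsp[OF tmap_lin[OF lphi lin_id] V] by simp
  have s1: "tmap dB dH (dH*dH) aB deltaH (tv dH b h) = tmap (dB*dH) dH dH (tmap dB dH dH (Z (n+1)) (Z' (-1))) (Z' (-2)) ?V"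
  proof -
    have "tmap dB dH (dH*dH) aB deltaH (tv dH b h) = tv (dH*dH) (aB b) (deltaH h)" by (rule tmap_tv[OF lin_aB lin_deltaH b h])
    also have "\<dots> = tv (dH*dH) (Z (n+1) (aB ?c)) (tmap dH dH dH (Z' (-1)) (Z' (-2)) (hcomul H ?k))"
    proof -
      have "aB b = Z (n+1) (aB ?c)" using Z_aB_comm[OF c, of "n+1"] bc by metis
      moreover have "deltaH h = tmap dH dH dH (Z' (-1)) (Z' (-2)) (hcomul H ?k)" using deltaH_zpow[OF k, of "-1"] hk by simp
      ultimately show ?thesis by simp
    qed
    also have "\<dots> = tmap dB (dH*dH) (dH*dH) (Z (n+1)) (tmap dH dH dH (Z' (-1)) (Z' (-2))) ?V"
      by (rule tmap_tv[OF lin_Z tmap_lin[OF lin_Z' lin_Z'] ac ck, symmetric])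
    also have "\<dots> = tmap (dB*dH) dH dH (tmap dB dH dH (Z (n+1)) (Z' (-1))) (Z' (-2)) ?V"
      using tmap_assoc_apply[OF lin_Z lin_Z' lin_Z' V] by simp
    finally show ?thesis .
  qed
  have s2: "tmap (dB*dH) dH dH (psi n) id (tmap (dB*dH) dH dH (tmap dB dH dH (Z (n+1)) (Z' (-1))) (Z' (-2)) ?V)
      = tmap dH (dB*dH) (dB*dH) id (tmap dB dH dH (Z n) (Z' (-2))) ?W"
  proof -
    have "tmap (dB*dH) dH dH (psi n) id (tmap (dB*dH) dH dH (tmap dB dH dH (Z (n+1)) (Z' (-1))) (Z' (-2)) ?V)
        = tmap (dB*dH) dH dH (tmap dH dB dB id (Z n) \<circ> phi) (Z' (-2)) ?V"
      by (rule tmap_tmap_apply[OF tmap_lin[OF lin_Z lin_Z'] lin_Z' lin_psi lin_id V]) (simp_all add: psi_Z_Z'm1)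
    also have "\<dots> = tmap (dH*dB) dH dH (tmap dH dB dB id (Z n)) (Z' (-2)) ?W"
      by (rule tmap_tmap_apply[OF lphi lin_id tmap_lin[OF lin_id lin_Z] lin_Z' V, symmetric]) simp_all
    also have "\<dots> = tmap dH (dB*dH) (dB*dH) id (tmap dB dH dH (Z n) (Z' (-2))) ?W"
      using tmap_assoc_apply[OF lin_id lin_Z lin_Z' W] by simp
    finally show ?thesis .
  qed
  have s3: "tmap dH (dB*dH) (dH*dB) id (psi n) (tmap dH (dB*dH) (dB*dH) id (tmap dB dH dH (Z n) (Z' (-2))) ?W)
      = M2_twist n (M2L ?c ?k)"
  proof -
    have W': "?W \<in> vsp (dH*(dB*dH))" using W by (simp add: mult.assoc)
    have "tmap dH (dB*dH) (dH*dB) id (psi n) (tmap dH (dB*dH) (dB*dH) id (tmap dB dH dH (Z n) (Z' (-2))) ?W)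
        = tmap dH (dB*dH) (dH*dB) id (tmap dH dB dB (Z' (-1)) (Z (n-1)) \<circ> phi) ?W"
      by (rule tmap_tmap_apply[OF lin_id tmap_lin[OF lin_Z lin_Z'] lin_id lin_psi W']) (simp_all add: psi_Z_Z'm2)
    also have "\<dots> = tmap dH (dH*dB) (dH*dB) id (tmap dH dB dB (Z' (-1)) (Z (n-1))) (tmap dH (dB*dH) (dH*dB) id phi ?W)"
      by (rule tmap_tmap_apply[OF lin_id lphi lin_id tmap_lin[OF lin_Z' lin_Z] W', symmetric]) simp_all
    also have "\<dots> = M2_twist n (M2L ?c ?k)" by (simp add: M2_twist_def M2L_def)
    finally show ?thesis .
  qed
  show ?thesis using s1 s2 s3 by (simp add: deltaH_rhs_def)
qed

lemma deltaH_component_iff_M2: "mapeq (dB*dH) (deltaH_lhs n) (deltaH_rhs n) \<longleftrightarrow> M2"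
proof
  assume P: "mapeq (dB*dH) (deltaH_lhs n) (deltaH_rhs n)"
  show M2 unfolding M2_def
  proof (intro ballI)
    fix c k :: "'k vect" assume c: "c \<in> vsp dB" and k: "k \<in> vsp dH"
    let ?b = "Z (n+1) c" and ?h = "Z' (-1) k"
    have "deltaH_lhs n (tv dH ?b ?h) = deltaH_rhs n (tv dH ?b ?h)" using mapeqD[OF P tv_vsp[OF Z_vsp[OF c] Z'_vsp[OF k]]] .
    then have "M2_twist n (M2R c k) = M2_twist n (M2L c k)"
      using deltaH_lhs_tv[OF Z_vsp[OF c] Z'_vsp[OF k], of n] deltaH_rhs_tv[OF Z_vsp[OF c] Z'_vsp[OF k], of n]
      by (simp add: Z_add c k)
    then show "M2L c k = M2R c k" using iv_left[OF blin_M2_twist M2L_vsp[OF c k]] iv_left[OF blin_M2_twist M2R_vsp[OF c k]] by metis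
  qed
next
  assume M: M2
  show "mapeq (dB*dH) (deltaH_lhs n) (deltaH_rhs n)"
  proof (rule tensor_ext[OF lin_deltaH_lhs lin_deltaH_rhs])
    fix b h :: "'k vect" assume b: "b \<in> vsp dB" and h: "h \<in> vsp dH"
    show "deltaH_lhs n (tv dH b h) = deltaH_rhs n (tv dH b h)"
      using M Z_vsp[OF b] aH_vsp[OF h] by (simp add: deltaH_lhs_tv deltaH_rhs_tv b h M2_def)
  qed
qed

lemma deltaH_law_iff_M2:
  "(\<forall>X. obj X \<longrightarrow> mapeq (fst (fobj H (fobj B X))) (fmor B (fst (fobj H X)) (cdelta H X) \<circ> ddphi n B H phi X)
     (ddphi n B H phi (fobj H X) \<circ> fmor H (fst (fobj H (fobj B X))) (ddphi n B H phi X) \<circ> cdelta H (fobj B X)))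
   \<longleftrightarrow> M2"
  unfolding deltaH_component_iff_M2[of n, symmetric]
  by (rule mapeq_all_objects_iff[where D="dB*dH" and E="dH*(dH*dB)" and \<gamma>="\<lambda>X. snd X"])
     (fact lin_deltaH_law deltaH_law_lhs_tv deltaH_law_rhs_tv lin_deltaH_lhs lin_deltaH_rhs
      | simp add: fobj_def mult.assoc)+

end

section \<open>Compatibility with the counits: conditions (M3) and (M4)\<close>

context hom_twist
begin

abbreviation "eH \<equiv> eps1 (hcounit H)"

abbreviation "eB \<equiv> eps1 (hcounit B)"

definition "counitH_lhs n = tmap dH dB dB eH id \<circ> psi n"

definition "counitH_rhs = tmap dB dH 1 (iv dB aB) eH"

definition "counitB_lhs n = tmap dH dB 1 (iv dH aH) eB \<circ> psi n"

definition "counitB_rhs = tmap dB dH dH eB id"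

lemma lin_iv_obj: "obj X \<Longrightarrow> lin (fst X) (fst X) (iv (fst X) (snd X))" using blin_lin[OF iv_blin[OF obj_blin]] .

lemma cepsilon_H_fobj_B: "obj X \<Longrightarrow> cepsilon H (fobj B X) = tmap (fst X * dB) dH 1 (tmap (fst X) dB dB (iv (fst X) (snd X)) (iv dB aB)) eH"
  unfolding cepsilon_def fobj_def fst_conv snd_conv
  by (rule tmap_cong[OF blin_tmap(2)[OF obj_blin blin_alphaB] mapeq_refl])

lemma cepsilon_B_fobj_H: "obj X \<Longrightarrow> cepsilon B (fobj H X) = tmap (fst X * dH) dB 1 (tmap (fst X) dH dH (iv (fst X) (snd X)) (iv dH aH)) eB"
  unfolding cepsilon_def fobj_def fst_conv snd_conv
  by (rule tmap_cong[OF blin_tmap(2)[OF obj_blin blin_alphaH] mapeq_refl])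

lemma counitH_law_lhs_tv:
  assumes X: "obj X" and w: "w \<in> vsp (fst X)" and U: "U \<in> vsp (dB*dH)"
  shows "(fmor B (fst (fobj H X)) (cepsilon H X) \<circ> ddphi n B H phi X) (tv (dB*dH) w U) = tv dB (iv (fst X) (snd X) w) (counitH_lhs n U)"
  using tmap_assoc_tv[OF lin_iv_obj[OF X] lin_counitH lin_id w psi_vsp[OF U], of n]
  by (simp add: ddphi_tv[OF w U] fmor_def fobj_def cepsilon_def counitH_lhs_def)

lemma counitH_law_rhs_tv:
  assumes X: "obj X" and w: "w \<in> vsp (fst X)" and U: "U \<in> vsp (dB*dH)"
  shows "cepsilon H (fobj B X) (tv (dB*dH) w U) = tv dB (iv (fst X) (snd X) w) (counitH_rhs U)"
  using tmap_assoc_tv[OF lin_iv_obj[OF X] lin_ivB lin_counitH w U]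
  by (simp add: cepsilon_H_fobj_B[OF X] counitH_rhs_def)

lemma counitB_law_lhs_tv:
  assumes X: "obj X" and w: "w \<in> vsp (fst X)" and U: "U \<in> vsp (dB*dH)"
  shows "(cepsilon B (fobj H X) \<circ> ddphi n B H phi X) (tv (dB*dH) w U) = tv dH (iv (fst X) (snd X) w) (counitB_lhs n U)"
  using tmap_assoc_tv[OF lin_iv_obj[OF X] lin_ivH lin_counitB w psi_vsp[OF U], of n]
  by (simp add: ddphi_tv[OF w U] cepsilon_B_fobj_H[OF X] counitB_lhs_def)

lemma counitB_law_rhs_tv:
  assumes X: "obj X" and w: "w \<in> vsp (fst X)" and U: "U \<in> vsp (dB*dH)"
  shows "fmor H (fst (fobj B X)) (cepsilon B X) (tv (dB*dH) w U) = tv dH (iv (fst X) (snd X) w) (counitB_rhs U)"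
  using tmap_assoc_tv[OF lin_iv_obj[OF X] lin_counitB lin_id w U]
  by (simp add: fmor_def fobj_def cepsilon_def counitB_rhs_def)

lemma lin_counitH_lhs: "lin (dB*dH) dB (counitH_lhs n)"
  unfolding counitH_lhs_def by (rule lin_dims[OF lin_compI[OF lin_psi tmap_lin[OF lin_counitH lin_id]]]) simp_all

lemma lin_counitH_rhs: "lin (dB*dH) dB counitH_rhs"
  unfolding counitH_rhs_def by (rule lin_dims[OF tmap_lin[OF lin_ivB lin_counitH]]) simp_all

lemma lin_counitB_lhs: "lin (dB*dH) dH (counitB_lhs n)"
  unfolding counitB_lhs_def by (rule lin_dims[OF lin_compI[OF lin_psi tmap_lin[OF lin_ivH lin_counitB]]]) simp_all

lemma lin_counitB_rhs: "lin (dB*dH) dH counitB_rhs"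
  unfolding counitB_rhs_def by (rule lin_dims[OF tmap_lin[OF lin_counitB lin_id]]) simp_all

lemma lin_counitH_law:
  assumes X: "obj X"
  shows "lin (fst X * (dB*dH)) (fst X * dB) (fmor B (fst (fobj H X)) (cepsilon H X) \<circ> ddphi n B H phi X)"
    and "lin (fst X * (dB*dH)) (fst X * dB) (cepsilon H (fobj B X))"
proof -
  have "lin (fst X * dH * dB) (fst X * 1 * dB) (fmor B (fst (fobj H X)) (cepsilon H X))"
    unfolding fmor_def fobj_def cepsilon_def fst_conv snd_conv
    by (rule tmap_lin[OF tmap_lin[OF lin_iv_obj[OF X] lin_counitH] lin_id])
  then show "lin (fst X * (dB*dH)) (fst X * dB) (fmor B (fst (fobj H X)) (cepsilon H X) \<circ> ddphi n B H phi X)"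
    by (rule lin_dims[OF lin_compI[OF lin_ddphi]]) (simp_all add: ac_simps)
  show "lin (fst X * (dB*dH)) (fst X * dB) (cepsilon H (fobj B X))"
    unfolding cepsilon_H_fobj_B[OF X]
    by (rule lin_dims[OF tmap_lin[OF tmap_lin[OF lin_iv_obj[OF X] lin_ivB] lin_counitH]]) (simp_all add: ac_simps)
qed

lemma lin_counitB_law:
  assumes X: "obj X"
  shows "lin (fst X * (dB*dH)) (fst X * dH) (cepsilon B (fobj H X) \<circ> ddphi n B H phi X)"
    and "lin (fst X * (dB*dH)) (fst X * dH) (fmor H (fst (fobj B X)) (cepsilon B X))"
proof -
  have "lin (fst X * dH * dB) (fst X * dH * 1) (cepsilon B (fobj H X))"
    unfolding cepsilon_B_fobj_H[OF X] by (rule tmap_lin[OF tmap_lin[OF lin_iv_obj[OF X] lin_ivH] lin_counitB])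
  then show "lin (fst X * (dB*dH)) (fst X * dH) (cepsilon B (fobj H X) \<circ> ddphi n B H phi X)"
    by (rule lin_dims[OF lin_compI[OF lin_ddphi]]) (simp_all add: ac_simps)
  show "lin (fst X * (dB*dH)) (fst X * dH) (fmor H (fst (fobj B X)) (cepsilon B X))"
    unfolding fmor_def fobj_def cepsilon_def fst_conv snd_conv
    by (rule lin_dims[OF tmap_lin[OF tmap_lin[OF lin_iv_obj[OF X] lin_counitB] lin_id]]) (simp_all add: ac_simps)
qed

definition "M3 \<longleftrightarrow> (\<forall>b\<in>vsp dB. \<forall>h\<in>vsp dH.
        tmap dH dB dB (eps1 (hcounit H)) id (phi (tv dH b h)) = (\<lambda>p. hcounit H h * b p))"

definition "M4 \<longleftrightarrow> (\<forall>b\<in>vsp dB. \<forall>h\<in>vsp dH.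
        tmap dH dB 1 id (eps1 (hcounit B)) (phi (tv dH b h)) = (\<lambda>p. hcounit B b * h p))"

lemma counitH_lhs_tv:
  assumes b: "b \<in> vsp dB" and h: "h \<in> vsp dH"
  shows "counitH_lhs n (tv dH b h) = Z n (tmap dH dB dB eH id (phi (tv dH (Z (-n-1) b) (aH h))))"
proof -
  let ?Y = "phi (tv dH (Z (-n-1) b) (aH h))"
  have Y: "?Y \<in> vsp (dH*dB)" using phi_tv_vsp[OF Z_vsp[OF b] aH_vsp[OF h]] .
  have "counitH_lhs n (tv dH b h) = tmap dH dB dB eH id (tmap dH dB dB id (Z n) ?Y)"
    by (simp add: counitH_lhs_def psi_tv b h)
  also have "\<dots> = tmap dH dB dB eH (Z n) ?Y" by (rule tmap_tmap_apply[OF lin_id lin_Z lin_counitH lin_id Y]) simp_all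
  also have "\<dots> = tmap 1 dB dB id (Z n) (tmap dH dB dB eH id ?Y)" by (rule tmap_tmap_apply[OF lin_counitH lin_id lin_id lin_Z Y, symmetric]) simp_all
  also have "\<dots> = Z n (tmap dH dB dB eH id ?Y)"
    using mapeqD[OF tmap_unitL[OF lin_Z]] lin_vsp[OF tmap_lin[OF lin_counitH lin_id] Y] by simp
  finally show ?thesis .
qed

lemma counitH_rhs_tv: "b \<in> vsp dB \<Longrightarrow> h \<in> vsp dH \<Longrightarrow> counitH_rhs (tv dH b h) = (\<lambda>p. hcounit H h * iv dB aB b p)"
proof -
  assume b: "b \<in> vsp dB" and h: "h \<in> vsp dH"
  have "counitH_rhs (tv dH b h) = tv 1 (iv dB aB b) (eH h)" unfolding counitH_rhs_def by (rule tmap_tv[OF lin_ivB lin_counitH b h])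
  then show ?thesis by (simp only: tv_eps_R)
qed

lemma counitH_component_iff_M3: "mapeq (dB*dH) (counitH_lhs n) counitH_rhs \<longleftrightarrow> M3"
proof
  assume P: "mapeq (dB*dH) (counitH_lhs n) counitH_rhs"
  show M3 unfolding M3_def
  proof (intro ballI)
    fix b h :: "'k vect" assume b: "b \<in> vsp dB" and h: "h \<in> vsp dH"
    let ?b = "Z (n+1) b" and ?h = "iv dH aH h"
    have T: "tmap dH dB dB eH id (phi (tv dH b h)) \<in> vsp dB" using lin_vsp[OF tmap_lin[OF lin_counitH lin_id] phi_tv_vsp[OF b h]] by simp
    have "counitH_lhs n (tv dH ?b ?h) = counitH_rhs (tv dH ?b ?h)" using mapeqD[OF P tv_vsp[OF Z_vsp[OF b] ivH_vsp[OF h]]] .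
    then have "Z n (tmap dH dB dB eH id (phi (tv dH b h))) = (\<lambda>p. hcounit H ?h * iv dB aB ?b p)"
      by (simp add: counitH_lhs_tv Z_vsp b ivH_vsp h Z_add aH_iv counitH_rhs_tv)
    also have "\<dots> = Z n (\<lambda>p. hcounit H h * b p)"
    proof -
      have "iv dB aB ?b = Z n b" using zpow_pred(1)[OF blin_alphaB b, of "n+1"] by simp
      moreover have "hcounit H ?h = hcounit H h" using hom_bialgebra_alphaD(4)[OF hH ivH_vsp[OF h]] aH_iv[OF h] by simp
      ultimately show ?thesis by (simp add: Z_smult b)
    qed
    finally show "tmap dH dB dB eH id (phi (tv dH b h)) = (\<lambda>p. hcounit H h * b p)"
      by (rule Z_inj[OF T vsp_smult[OF b]])
  qed
next
  assume M: M3
  show "mapeq (dB*dH) (counitH_lhs n) counitH_rhs"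
  proof (rule tensor_ext[OF lin_counitH_lhs lin_counitH_rhs])
    fix b h :: "'k vect" assume b: "b \<in> vsp dB" and h: "h \<in> vsp dH"
    have "counitH_lhs n (tv dH b h) = Z n (\<lambda>p. hcounit H (aH h) * Z (-n-1) b p)"
      using M Z_vsp[OF b] aH_vsp[OF h] by (simp add: counitH_lhs_tv b h M3_def)
    also have "\<dots> = (\<lambda>p. hcounit H h * iv dB aB b p)"
      by (simp add: zpow_m1 Z_smult Z_vsp b Z_add hom_bialgebra_alphaD(4)[OF hH h])
    also have "\<dots> = counitH_rhs (tv dH b h)" by (simp add: counitH_rhs_tv b h)
    finally show "counitH_lhs n (tv dH b h) = counitH_rhs (tv dH b h)" .
  qed
qed

lemma counitH_law_iff_M3:
  "(\<forall>X. obj X \<longrightarrow> mapeq (fst (fobj H (fobj B X))) (fmor B (fst (fobj H X)) (cepsilon H X) \<circ> ddphi n B H phi X) (cepsilon H (fobj B X))) \<longleftrightarrow> M3"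
  unfolding counitH_component_iff_M3[of n, symmetric]
  by (rule mapeq_all_objects_iff[where D="dB*dH" and E="dB" and \<gamma>="\<lambda>X. iv (fst X) (snd X)"])
     (fact lin_counitH_law counitH_law_lhs_tv counitH_law_rhs_tv lin_counitH_lhs lin_counitH_rhs
      | simp add: fobj_def mult.assoc)+

lemma counitB_lhs_tv:
  assumes b: "b \<in> vsp dB" and h: "h \<in> vsp dH"
  shows "counitB_lhs n (tv dH b h) = iv dH aH (tmap dH dB 1 id eB (phi (tv dH (Z (-n-1) b) (aH h))))"
proof -
  let ?Y = "phi (tv dH (Z (-n-1) b) (aH h))"
  have Y: "?Y \<in> vsp (dH*dB)" using phi_tv_vsp[OF Z_vsp[OF b] aH_vsp[OF h]] .
  have e: "mapeq dB (eB \<circ> Z n) eB"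
    by (simp add: mapeq_def eps1_def hom_bialgebra_zpow(4)[OF hB] fun_eq_iff)
  have "counitB_lhs n (tv dH b h) = tmap dH dB 1 (iv dH aH) eB (tmap dH dB dB id (Z n) ?Y)"
    by (simp add: counitB_lhs_def psi_tv b h)
  also have "\<dots> = tmap dH dB 1 (iv dH aH) eB ?Y" by (rule tmap_tmap_apply[OF lin_id lin_Z lin_ivH lin_counitB Y]) (simp_all add: e)
  also have "\<dots> = tmap dH 1 1 (iv dH aH) id (tmap dH dB 1 id eB ?Y)" by (rule tmap_tmap_apply[OF lin_id lin_counitB lin_ivH lin_id Y, symmetric]) simp_all
  also have "\<dots> = iv dH aH (tmap dH dB 1 id eB ?Y)"
    using mapeqD[OF tmap_unitR[OF lin_ivH]] lin_vsp[OF tmap_lin[OF lin_id lin_counitB] Y] by simp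
  finally show ?thesis .
qed

lemma counitB_rhs_tv: "b \<in> vsp dB \<Longrightarrow> h \<in> vsp dH \<Longrightarrow> counitB_rhs (tv dH b h) = (\<lambda>p. hcounit B b * h p)"
proof -
  assume b: "b \<in> vsp dB" and h: "h \<in> vsp dH"
  have "counitB_rhs (tv dH b h) = tv dH (eB b) (id h)" unfolding counitB_rhs_def by (rule tmap_tv[OF lin_counitB lin_id b h])
  then show ?thesis using tv_eps_L[OF h] by simp
qed

lemma counitB_component_iff_M4: "mapeq (dB*dH) (counitB_lhs n) counitB_rhs \<longleftrightarrow> M4"
proof
  assume P: "mapeq (dB*dH) (counitB_lhs n) counitB_rhs"
  show M4 unfolding M4_def
  proof (intro ballI)
    fix b h :: "'k vect" assume b: "b \<in> vsp dB" and h: "h \<in> vsp dH"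
    let ?b = "Z (n+1) b" and ?h = "iv dH aH h"
    have T: "tmap dH dB 1 id eB (phi (tv dH b h)) \<in> vsp dH" using lin_vsp[OF tmap_lin[OF lin_id lin_counitB] phi_tv_vsp[OF b h]] by simp
    have "counitB_lhs n (tv dH ?b ?h) = counitB_rhs (tv dH ?b ?h)" using mapeqD[OF P tv_vsp[OF Z_vsp[OF b] ivH_vsp[OF h]]] .
    then have "iv dH aH (tmap dH dB 1 id eB (phi (tv dH b h))) = (\<lambda>p. hcounit B ?b * ?h p)"
      by (simp add: counitB_lhs_tv Z_vsp b ivH_vsp h Z_add aH_iv counitB_rhs_tv)
    also have "\<dots> = iv dH aH (\<lambda>p. hcounit B b * h p)"
      by (simp add: hom_bialgebra_zpow(4)[OF hB b] ivH_smult h)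
    finally show "tmap dH dB 1 id eB (phi (tv dH b h)) = (\<lambda>p. hcounit B b * h p)"
      by (rule ivH_inj[OF T vsp_smult[OF h]])
  qed
next
  assume M: M4
  show "mapeq (dB*dH) (counitB_lhs n) counitB_rhs"
  proof (rule tensor_ext[OF lin_counitB_lhs lin_counitB_rhs])
    fix b h :: "'k vect" assume b: "b \<in> vsp dB" and h: "h \<in> vsp dH"
    have "counitB_lhs n (tv dH b h) = iv dH aH (\<lambda>p. hcounit B (Z (-n-1) b) * aH h p)"
      using M Z_vsp[OF b] aH_vsp[OF h] by (simp add: counitB_lhs_tv b h M4_def)
    also have "\<dots> = (\<lambda>p. hcounit B b * h p)"
      by (simp add: ivH_smult aH_vsp h iv_aH hom_bialgebra_zpow(4)[OF hB b])
    also have "\<dots> = counitB_rhs (tv dH b h)" by (simp add: counitB_rhs_tv b h)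
    finally show "counitB_lhs n (tv dH b h) = counitB_rhs (tv dH b h)" .
  qed
qed

lemma counitB_law_iff_M4:
  "(\<forall>X. obj X \<longrightarrow> mapeq (fst (fobj H (fobj B X))) (cepsilon B (fobj H X) \<circ> ddphi n B H phi X) (fmor H (fst (fobj B X)) (cepsilon B X))) \<longleftrightarrow> M4"
  unfolding counitB_component_iff_M4[of n, symmetric]
  by (rule mapeq_all_objects_iff[where D="dB*dH" and E="dH" and \<gamma>="\<lambda>X. iv (fst X) (snd X)"])
     (fact lin_counitB_law counitB_law_lhs_tv counitB_law_rhs_tv lin_counitB_lhs lin_counitB_rhs
      | simp add: fobj_def mult.assoc)+

end

section \<open>Monoidality: conditions (M5) and (M6)\<close>

context hom_twist
begin

definition "twisted_tprod i j U V = tprod dH (hmul H) dB (hmul B) (tmap dH dB dB (Z' i) (Z i) U) (tmap dH dB dB (Z' j) (Z j) V)"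

lemma lin_twisted_tprod_left: "V \<in> vsp (dH*dB) \<Longrightarrow> lin (dH*dB) (dH*dB) (\<lambda>U. twisted_tprod i j U V)"
  unfolding twisted_tprod_def using lin_comp[OF tmap_lin[OF lin_Z' lin_Z] tprod_linL[OF lin_mulH lin_mulB]] by (simp add: comp_def)

lemma lin_twisted_tprod_right: "U \<in> vsp (dH*dB) \<Longrightarrow> lin (dH*dB) (dH*dB) (twisted_tprod i j U)"
  unfolding twisted_tprod_def using lin_comp[OF tmap_lin[OF lin_Z' lin_Z] tprod_linR[OF lin_mulH lin_mulB]] by (simp add: comp_def)

lemma twisted_tprod_tv:
  assumes "u1 \<in> vsp dH" "u2 \<in> vsp dB" "v1 \<in> vsp dH" "v2 \<in> vsp dB"
  shows "twisted_tprod i j (tv dB u1 u2) (tv dB v1 v2) = tv dB (hmul H (tv dH (Z' i u1) (Z' j v1))) (hmul B (tv dB (Z i u2) (Z j v2)))"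
  unfolding twisted_tprod_def using assms
  by (simp add: tmap_tv[OF lin_Z' lin_Z] tprod_tv[OF lin_mulH lin_mulB] Z_vsp Z'_vsp)

lemma monoidal_law_lhs_tv:
  assumes M: "obj M" and N: "obj N" and m1: "m1 \<in> vsp (fst M)" and n1: "n1 \<in> vsp (fst N)"
    and b: "b \<in> vsp dB" and c: "c \<in> vsp dB" and h: "h \<in> vsp dH" and g: "g \<in> vsp dH"
  shows "(ddphi n B H phi (otens M N) \<circ> fmor H (fst (otens (fobj B M) (fobj B N))) (mon2 i j B M N) \<circ> mon2 i j H (fobj B M) (fobj B N))
     (tv (fst N*dB*dH) (tv dH (tv dB m1 b) h) (tv dH (tv dB n1 c) g))
   = tv (dH*dB) (tv (fst N) m1 n1) (psi n (tv dH (hmul B (tv dB (Z i b) (Z j c))) (hmul H (tv dH (Z' i h) (Z' j g)))))"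
proof -
  have X: "tv dB m1 b \<in> vsp (fst (fobj B M))" using tv_vsp[OF m1 b] by (simp add: fobj_def)
  have Y: "tv dB n1 c \<in> vsp (fst (fobj B N))" using tv_vsp[OF n1 c] by (simp add: fobj_def)
  have s1: "mon2 i j H (fobj B M) (fobj B N) (tv (fst N*dB*dH) (tv dH (tv dB m1 b) h) (tv dH (tv dB n1 c) g))
     = tv dH (tv (fst N*dB) (tv dB m1 b) (tv dB n1 c)) (hmul H (tv dH (Z' i h) (Z' j g)))"
    using mon2_tv[OF hH X Y h g, of i j] by (simp add: fobj_def)
  have XY: "tv (fst N*dB) (tv dB m1 b) (tv dB n1 c) \<in> vsp (fst M*dB*(fst N*dB))" using tv_vsp[OF tv_vsp[OF m1 b] tv_vsp[OF n1 c]] .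
  have hg: "hmul H (tv dH (Z' i h) (Z' j g)) \<in> vsp dH" using lin_vsp[OF lin_mulH tv_vsp[OF Z'_vsp[OF h] Z'_vsp[OF g]]] .
  have bc: "hmul B (tv dB (Z i b) (Z j c)) \<in> vsp dB" using lin_vsp[OF lin_mulB tv_vsp[OF Z_vsp[OF b] Z_vsp[OF c]]] .
  have s2: "fmor H (fst (otens (fobj B M) (fobj B N))) (mon2 i j B M N) (tv dH (tv (fst N*dB) (tv dB m1 b) (tv dB n1 c)) (hmul H (tv dH (Z' i h) (Z' j g))))
     = tv dH (tv dB (tv (fst N) m1 n1) (hmul B (tv dB (Z i b) (Z j c)))) (hmul H (tv dH (Z' i h) (Z' j g)))"
    unfolding fmor_def
    using tmap_tv[OF lin_mon2[OF hB, of M N i j] lin_id XY hg] mon2_tv[OF hB m1 n1 b c, of i j]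
    by (simp add: otens_def fobj_def)
  have mn: "tv (fst N) m1 n1 \<in> vsp (fst (otens M N))" using tv_vsp[OF m1 n1] by (simp add: otens_def)
  have s3: "ddphi n B H phi (otens M N) (tv dH (tv dB (tv (fst N) m1 n1) (hmul B (tv dB (Z i b) (Z j c)))) (hmul H (tv dH (Z' i h) (Z' j g))))
     = tv (dH*dB) (tv (fst N) m1 n1) (psi n (tv dH (hmul B (tv dB (Z i b) (Z j c))) (hmul H (tv dH (Z' i h) (Z' j g)))))"
    using ddphi_tv[OF mn tv_vsp[OF bc hg], of n] tv_assoc[OF bc hg, of "tv (fst N) m1 n1"] by simp
  show ?thesis using s1 s2 s3 by simp
qed

lemma monoidal_rhs_tail_tv:
  assumes M: "obj M" and N: "obj N" and m1: "m1 \<in> vsp (fst M)" and n1: "n1 \<in> vsp (fst N)"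
    and u1: "u1 \<in> vsp dH" and u2: "u2 \<in> vsp dB" and v1: "v1 \<in> vsp dH" and v2: "v2 \<in> vsp dB"
  shows "(fmor B (fst (otens (fobj H M) (fobj H N))) (mon2 i j H M N) \<circ> mon2 i j B (fobj H M) (fobj H N))
      (tv (fst N*dH*dB) (tv (dH*dB) m1 (tv dB u1 u2)) (tv (dH*dB) n1 (tv dB v1 v2)))
    = tv (dH*dB) (tv (fst N) m1 n1) (twisted_tprod i j (tv dB u1 u2) (tv dB v1 v2))"
proof -
  have X: "tv dH m1 u1 \<in> vsp (fst (fobj H M))" using tv_vsp[OF m1 u1] by (simp add: fobj_def)
  have Y: "tv dH n1 v1 \<in> vsp (fst (fobj H N))" using tv_vsp[OF n1 v1] by (simp add: fobj_def)
  have e1: "tv (dH*dB) m1 (tv dB u1 u2) = tv dB (tv dH m1 u1) u2" using tv_assoc[OF u1 u2] by simp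
  have e2: "tv (dH*dB) n1 (tv dB v1 v2) = tv dB (tv dH n1 v1) v2" using tv_assoc[OF v1 v2] by simp
  have s1: "mon2 i j B (fobj H M) (fobj H N) (tv (fst N*dH*dB) (tv dB (tv dH m1 u1) u2) (tv dB (tv dH n1 v1) v2))
     = tv dB (tv (fst N*dH) (tv dH m1 u1) (tv dH n1 v1)) (hmul B (tv dB (Z i u2) (Z j v2)))"
    using mon2_tv[OF hB X Y u2 v2, of i j] by (simp add: fobj_def)
  have XY: "tv (fst N*dH) (tv dH m1 u1) (tv dH n1 v1) \<in> vsp (fst M*dH*(fst N*dH))" using tv_vsp[OF tv_vsp[OF m1 u1] tv_vsp[OF n1 v1]] .
  have bc: "hmul B (tv dB (Z i u2) (Z j v2)) \<in> vsp dB" using lin_vsp[OF lin_mulB tv_vsp[OF Z_vsp[OF u2] Z_vsp[OF v2]]] .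
  have hg: "hmul H (tv dH (Z' i u1) (Z' j v1)) \<in> vsp dH" using lin_vsp[OF lin_mulH tv_vsp[OF Z'_vsp[OF u1] Z'_vsp[OF v1]]] .
  have s2: "fmor B (fst (otens (fobj H M) (fobj H N))) (mon2 i j H M N) (tv dB (tv (fst N*dH) (tv dH m1 u1) (tv dH n1 v1)) (hmul B (tv dB (Z i u2) (Z j v2))))
     = tv dB (tv dH (tv (fst N) m1 n1) (hmul H (tv dH (Z' i u1) (Z' j v1)))) (hmul B (tv dB (Z i u2) (Z j v2)))"
    unfolding fmor_def
    using tmap_tv[OF lin_mon2[OF hH, of M N i j] lin_id XY bc] mon2_tv[OF hH m1 n1 u1 v1, of i j]
    by (simp add: otens_def fobj_def)
  show ?thesis
    using s1 s2 e1 e2 twisted_tprod_tv[OF u1 u2 v1 v2, of i j] tv_assoc[OF hg bc, of "tv (fst N) m1 n1"] by simp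
qed

lemma lin_monoidal_rhs_tail:
  assumes M: "obj M" and N: "obj N"
  shows "lin (fst M*dH*dB*(fst N*dH*dB)) (fst M*fst N*dH*dB)
     (fmor B (fst (otens (fobj H M) (fobj H N))) (mon2 i j H M N) \<circ> mon2 i j B (fobj H M) (fobj H N))"
proof -
  have l1: "lin (fst M*dH*dB*(fst N*dH*dB)) (fst M*dH*(fst N*dH)*dB) (mon2 i j B (fobj H M) (fobj H N))"
    using lin_mon2[OF hB, of "fobj H M" "fobj H N" i j] by (simp add: fobj_def)
  have l2: "lin (fst M*dH*(fst N*dH)*dB) (fst M*fst N*dH*dB) (fmor B (fst (otens (fobj H M) (fobj H N))) (mon2 i j H M N))"
    unfolding fmor_def using tmap_lin[OF lin_mon2[OF hH, of M N i j] lin_id[of dB]] by (simp add: otens_def fobj_def)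
  show ?thesis by (rule lin_comp[OF l1 l2])
qed

lemma monoidal_rhs_tail_apply:
  assumes M: "obj M" and N: "obj N" and m1: "m1 \<in> vsp (fst M)" and n1: "n1 \<in> vsp (fst N)"
    and U: "U \<in> vsp (dH*dB)" and V: "V \<in> vsp (dH*dB)"
  shows "(fmor B (fst (otens (fobj H M) (fobj H N))) (mon2 i j H M N) \<circ> mon2 i j B (fobj H M) (fobj H N))
      (tv (fst N*dH*dB) (tv (dH*dB) m1 U) (tv (dH*dB) n1 V))
    = tv (dH*dB) (tv (fst N) m1 n1) (twisted_tprod i j U V)"
proof -
  let ?Op = "fmor B (fst (otens (fobj H M) (fobj H N))) (mon2 i j H M N) \<circ> mon2 i j B (fobj H M) (fobj H N)"
  note lO = lin_monoidal_rhs_tail[OF M N, of i j]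
  have FL: "lin (dH*dB) (fst M*fst N*dH*dB) (\<lambda>U. ?Op (tv (fst N*dH*dB) (tv (dH*dB) m1 U) (tv (dH*dB) n1 V)))"
    if V: "V \<in> vsp (dH*dB)" for V
  proof -
    have Y: "tv (dH*dB) n1 V \<in> vsp (fst N*dH*dB)" using tv_vsp[OF n1 V] by (simp add: mult.assoc)
    show ?thesis
      using lin_compI[OF lin_compI[OF lin_tvR[OF m1] lin_tvL[OF Y]] lO] by (simp add: comp_def ac_simps)
  qed
  have FR: "lin (dH*dB) (fst M*fst N*dH*dB) (\<lambda>V. ?Op (tv (fst N*dH*dB) (tv (dH*dB) m1 U) (tv (dH*dB) n1 V)))"
    if U: "U \<in> vsp (dH*dB)" for U
  proof -
    have X: "tv (dH*dB) m1 U \<in> vsp (fst M*dH*dB)" using tv_vsp[OF m1 U] by (simp add: mult.assoc)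
    have "lin (dH*dB) (fst N*dH*dB) (\<lambda>V. tv (dH*dB) n1 V)" using lin_tvR[OF n1] by (simp add: mult.assoc)
    then show ?thesis
      using lin_compI[OF lin_compI[OF _ lin_tvR[OF X]] lO] by (simp add: comp_def ac_simps)
  qed
  have mn: "tv (fst N) m1 n1 \<in> vsp (fst M * fst N)" using tv_vsp[OF m1 n1] .
  have GL: "lin (dH*dB) (fst M*fst N*(dH*dB)) (\<lambda>U. tv (dH*dB) (tv (fst N) m1 n1) (twisted_tprod i j U V))"
    if V: "V \<in> vsp (dH*dB)" for V
    using lin_comp[OF lin_twisted_tprod_left[OF V] lin_tvR[OF mn]] by (simp add: comp_def)
  have GR: "lin (dH*dB) (fst M*fst N*(dH*dB)) (\<lambda>V. tv (dH*dB) (tv (fst N) m1 n1) (twisted_tprod i j U V))"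
    if U: "U \<in> vsp (dH*dB)" for U
    using lin_comp[OF lin_twisted_tprod_right[OF U] lin_tvR[OF mn]] by (simp add: comp_def)
  show ?thesis
    apply (rule bilin_ext[where F="\<lambda>U V. ?Op (tv (fst N*dH*dB) (tv (dH*dB) m1 U) (tv (dH*dB) n1 V))"
          and G="\<lambda>U V. tv (dH*dB) (tv (fst N) m1 n1) (twisted_tprod i j U V)", OF FL FR GL GR _ U V])
    apply assumption+
    apply (rule monoidal_rhs_tail_tv[OF M N m1 n1])
    apply assumption+
    done
qed

lemma monoidal_law_rhs_tv:
  assumes M: "obj M" and N: "obj N" and m1: "m1 \<in> vsp (fst M)" and n1: "n1 \<in> vsp (fst N)"
    and b: "b \<in> vsp dB" and c: "c \<in> vsp dB" and h: "h \<in> vsp dH" and g: "g \<in> vsp dH"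
  shows "(fmor B (fst (otens (fobj H M) (fobj H N))) (mon2 i j H M N) \<circ> mon2 i j B (fobj H M) (fobj H N)
           \<circ> tmap (fst (fobj H (fobj B M))) (fst (fobj H (fobj B N))) (fst (fobj B (fobj H N))) (ddphi n B H phi M) (ddphi n B H phi N))
     (tv (fst N*dB*dH) (tv dH (tv dB m1 b) h) (tv dH (tv dB n1 c) g))
   = tv (dH*dB) (tv (fst N) m1 n1) (twisted_tprod i j (psi n (tv dH b h)) (psi n (tv dH c g)))"
proof -
  have lM: "lin (fst M*dB*dH) (fst M*dH*dB) (ddphi n B H phi M)" using lin_ddphi[of M n] by (simp add: mult.assoc)
  have lN: "lin (fst N*dB*dH) (fst N*dH*dB) (ddphi n B H phi N)" using lin_ddphi[of N n] by (simp add: mult.assoc)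
  have x: "tv dH (tv dB m1 b) h \<in> vsp (fst M*dB*dH)" by (intro tv_vsp m1 b h)
  have y: "tv dH (tv dB n1 c) g \<in> vsp (fst N*dB*dH)" by (intro tv_vsp n1 c g)
  have pM: "ddphi n B H phi M (tv dH (tv dB m1 b) h) = tv (dH*dB) m1 (psi n (tv dH b h))"
    using tv_assoc[OF b h, of m1] ddphi_tv[OF m1 tv_vsp[OF b h], of n] by simp
  have pN: "ddphi n B H phi N (tv dH (tv dB n1 c) g) = tv (dH*dB) n1 (psi n (tv dH c g))"
    using tv_assoc[OF c g, of n1] ddphi_tv[OF n1 tv_vsp[OF c g], of n] by simp
  have "tmap (fst (fobj H (fobj B M))) (fst (fobj H (fobj B N))) (fst (fobj B (fobj H N))) (ddphi n B H phi M) (ddphi n B H phi N)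
      (tv (fst N*dB*dH) (tv dH (tv dB m1 b) h) (tv dH (tv dB n1 c) g))
      = tv (fst N*dH*dB) (tv (dH*dB) m1 (psi n (tv dH b h))) (tv (dH*dB) n1 (psi n (tv dH c g)))"
    using tmap_tv[OF lM lN x y] pM pN by (simp add: fobj_def)
  then show ?thesis
    using monoidal_rhs_tail_apply[OF M N m1 n1 psi_vsp[OF tv_vsp[OF b h]] psi_vsp[OF tv_vsp[OF c g]], of i j] by simp
qed

definition "psi_multiplicative n i j \<longleftrightarrow> (\<forall>b\<in>vsp dB. \<forall>c\<in>vsp dB. \<forall>h\<in>vsp dH. \<forall>g\<in>vsp dH.
   psi n (tv dH (hmul B (tv dB (Z i b) (Z j c))) (hmul H (tv dH (Z' i h) (Z' j g))))
   = twisted_tprod i j (psi n (tv dH b h)) (psi n (tv dH c g)))"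

lemma lin_monoidal_law_lhs:
  assumes M: "obj M" and N: "obj N"
  shows "lin (fst M*dB*dH*(fst N*dB*dH)) (fst M*fst N*(dH*dB))
    (ddphi n B H phi (otens M N) \<circ> fmor H (fst (otens (fobj B M) (fobj B N))) (mon2 i j B M N) \<circ> mon2 i j H (fobj B M) (fobj B N))"
proof -
  have l1: "lin (fst M*dB*dH*(fst N*dB*dH)) (fst M*dB*(fst N*dB)*dH) (mon2 i j H (fobj B M) (fobj B N))"
    using lin_mon2[OF hH, of "fobj B M" "fobj B N" i j] by (simp add: fobj_def)
  have l2: "lin (fst M*dB*(fst N*dB)*dH) (fst M*fst N*dB*dH) (fmor H (fst (otens (fobj B M) (fobj B N))) (mon2 i j B M N))"
    unfolding fmor_def using tmap_lin[OF lin_mon2[OF hB, of M N i j] lin_id[of dH]] by (simp add: otens_def fobj_def)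
  have l3: "lin (fst M*fst N*(dB*dH)) (fst M*fst N*(dH*dB)) (ddphi n B H phi (otens M N))"
    using lin_ddphi[of "otens M N" n] by (simp add: otens_def)
  show ?thesis by (rule lin_dims[OF lin_compI[OF l1 lin_compI[OF l2 l3]]]) (simp_all add: ac_simps)
qed

lemma lin_monoidal_law_rhs:
  assumes M: "obj M" and N: "obj N"
  shows "lin (fst M*dB*dH*(fst N*dB*dH)) (fst M*fst N*dH*dB)
    (fmor B (fst (otens (fobj H M) (fobj H N))) (mon2 i j H M N) \<circ> mon2 i j B (fobj H M) (fobj H N)
           \<circ> tmap (fst (fobj H (fobj B M))) (fst (fobj H (fobj B N))) (fst (fobj B (fobj H N))) (ddphi n B H phi M) (ddphi n B H phi N))"
proof -
  have lM: "lin (fst M*dB*dH) (fst M*dH*dB) (ddphi n B H phi M)" using lin_ddphi[of M n] by (simp add: mult.assoc)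
  have lN: "lin (fst N*dB*dH) (fst N*dH*dB) (ddphi n B H phi N)" using lin_ddphi[of N n] by (simp add: mult.assoc)
  have l0: "lin (fst M*dB*dH*(fst N*dB*dH)) (fst M*dH*dB*(fst N*dH*dB))
     (tmap (fst (fobj H (fobj B M))) (fst (fobj H (fobj B N))) (fst (fobj B (fobj H N))) (ddphi n B H phi M) (ddphi n B H phi N))"
    using tmap_lin[OF lM lN] by (simp add: fobj_def)
  show ?thesis by (rule lin_comp[OF l0 lin_monoidal_rhs_tail[OF M N]])
qed

lemma monoidal_law_if:
  assumes M: "obj M" and N: "obj N" and G: "psi_multiplicative n i j"
  shows "mapeq (fst (otens (fobj H (fobj B M)) (fobj H (fobj B N))))
            (ddphi n B H phi (otens M N) \<circ> fmor H (fst (otens (fobj B M) (fobj B N))) (mon2 i j B M N) \<circ> mon2 i j H (fobj B M) (fobj B N))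
            (fmor B (fst (otens (fobj H M) (fobj H N))) (mon2 i j H M N) \<circ> mon2 i j B (fobj H M) (fobj H N)
           \<circ> tmap (fst (fobj H (fobj B M))) (fst (fobj H (fobj B N))) (fst (fobj B (fobj H N))) (ddphi n B H phi M) (ddphi n B H phi N))"
proof -
  have "mapeq (fst M*dB*dH*(fst N*dB*dH))
            (ddphi n B H phi (otens M N) \<circ> fmor H (fst (otens (fobj B M) (fobj B N))) (mon2 i j B M N) \<circ> mon2 i j H (fobj B M) (fobj B N))
            (fmor B (fst (otens (fobj H M) (fobj H N))) (mon2 i j H M N) \<circ> mon2 i j B (fobj H M) (fobj H N)
           \<circ> tmap (fst (fobj H (fobj B M))) (fst (fobj H (fobj B N))) (fst (fobj B (fobj H N))) (ddphi n B H phi M) (ddphi n B H phi N))"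
  proof (rule tensor_ext_pair3[OF lin_monoidal_law_lhs[OF M N] lin_monoidal_law_rhs[OF M N]])
    fix m1 b h n1 c g :: "'k vect"
    assume m1: "m1 \<in> vsp (fst M)" and b: "b \<in> vsp dB" and h: "h \<in> vsp dH"
      and n1: "n1 \<in> vsp (fst N)" and c: "c \<in> vsp dB" and g: "g \<in> vsp dH"
    show "(ddphi n B H phi (otens M N) \<circ> fmor H (fst (otens (fobj B M) (fobj B N))) (mon2 i j B M N) \<circ> mon2 i j H (fobj B M) (fobj B N))
            (tv (fst N*dB*dH) (tv dH (tv dB m1 b) h) (tv dH (tv dB n1 c) g)) =
          (fmor B (fst (otens (fobj H M) (fobj H N))) (mon2 i j H M N) \<circ> mon2 i j B (fobj H M) (fobj H N)
           \<circ> tmap (fst (fobj H (fobj B M))) (fst (fobj H (fobj B N))) (fst (fobj B (fobj H N))) (ddphi n B H phi M) (ddphi n B H phi N))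
            (tv (fst N*dB*dH) (tv dH (tv dB m1 b) h) (tv dH (tv dB n1 c) g))"
      unfolding monoidal_law_lhs_tv[OF M N m1 n1 b c h g] monoidal_law_rhs_tv[OF M N m1 n1 b c h g]
      using G b c h g by (simp add: psi_multiplicative_def)
  qed
  then show ?thesis by (simp add: otens_def fobj_def)
qed

lemma monoidal_law_only_if:
  assumes C: "mapeq (fst (otens (fobj H (fobj B unit_obj)) (fobj H (fobj B (unit_obj::'k::field object)))))
            (ddphi n B H phi (otens unit_obj unit_obj) \<circ> fmor H (fst (otens (fobj B unit_obj) (fobj B unit_obj))) (mon2 i j B unit_obj unit_obj) \<circ> mon2 i j H (fobj B unit_obj) (fobj B unit_obj))
            (fmor B (fst (otens (fobj H unit_obj) (fobj H unit_obj))) (mon2 i j H unit_obj unit_obj) \<circ> mon2 i j B (fobj H unit_obj) (fobj H unit_obj)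
           \<circ> tmap (fst (fobj H (fobj B unit_obj))) (fst (fobj H (fobj B unit_obj))) (fst (fobj B (fobj H unit_obj))) (ddphi n B H phi unit_obj) (ddphi n B H phi (unit_obj::'k::field object)))"
  shows "psi_multiplicative n i j"
  unfolding psi_multiplicative_def
proof (intro ballI)
  fix b c h g :: "'k vect" assume b: "b \<in> vsp dB" and c: "c \<in> vsp dB" and h: "h \<in> vsp dH" and g: "g \<in> vsp dH"
  have e0: "(ebasis 0 :: 'k vect) \<in> vsp (fst (unit_obj::'k object))" by simp
  have x: "tv (fst (unit_obj::'k object)*dB*dH) (tv dH (tv dB (ebasis 0) b) h) (tv dH (tv dB (ebasis 0) c) g)
      \<in> vsp (fst (otens (fobj H (fobj B unit_obj)) (fobj H (fobj B (unit_obj::'k object)))))"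
    using tv_vsp[OF tv_vsp[OF tv_vsp[OF e0 b] h] tv_vsp[OF tv_vsp[OF e0 c] g]] by (simp add: otens_def fobj_def)
  have E: "tv (dH*dB) (tv (fst (unit_obj::'k object)) (ebasis 0) (ebasis 0)) X = X" if "X \<in> vsp (dH*dB)" for X :: "'k vect"
    using tv_unitL[OF that] tv_unitR[of "ebasis 0 :: 'k vect"] by simp
  have bc: "tv dH (hmul B (tv dB (Z i b) (Z j c))) (hmul H (tv dH (Z' i h) (Z' j g))) \<in> vsp (dB*dH)"
    using tv_vsp[OF lin_vsp[OF lin_mulB tv_vsp[OF Z_vsp[OF b] Z_vsp[OF c]]] lin_vsp[OF lin_mulH tv_vsp[OF Z'_vsp[OF h] Z'_vsp[OF g]]]] .
  have TTv: "twisted_tprod i j (psi n (tv dH b h)) (psi n (tv dH c g)) \<in> vsp (dH*dB)"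
    using lin_vsp[OF lin_twisted_tprod_left[OF psi_vsp[OF tv_vsp[OF c g]]] psi_vsp[OF tv_vsp[OF b h]]] .
  show "psi n (tv dH (hmul B (tv dB (Z i b) (Z j c))) (hmul H (tv dH (Z' i h) (Z' j g)))) = twisted_tprod i j (psi n (tv dH b h)) (psi n (tv dH c g))"
    using mapeqD[OF C x] monoidal_law_lhs_tv[OF obj_unit obj_unit e0 e0 b c h g, of n i j] monoidal_law_rhs_tv[OF obj_unit obj_unit e0 e0 b c h g, of i j n]
      E[OF psi_vsp[OF bc]] E[OF TTv] by simp
qed

lemma tprod_id_Z:
  assumes X: "X \<in> vsp (dH*dB)" and Y: "Y \<in> vsp (dH*dB)"
  shows "tprod dH (hmul H) dB (hmul B) (tmap dH dB dB id (Z n) X) (tmap dH dB dB id (Z n) Y)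
       = tmap dH dB dB id (Z n) (tprod dH (hmul H) dB (hmul B) X Y)"
proof (rule bilin_ext[where F="\<lambda>X Y. tprod dH (hmul H) dB (hmul B) (tmap dH dB dB id (Z n) X) (tmap dH dB dB id (Z n) Y)"
      and G="\<lambda>X Y. tmap dH dB dB id (Z n) (tprod dH (hmul H) dB (hmul B) X Y)", OF _ _ _ _ _ X Y])
  note T = tmap_lin[OF lin_id[of dH] lin_Z[of n]]
  show "lin (dH*dB) (dH*dB) (\<lambda>X. tprod dH (hmul H) dB (hmul B) (tmap dH dB dB id (Z n) X) (tmap dH dB dB id (Z n) V))" for V
    using lin_comp[OF T tprod_linL[OF lin_mulH lin_mulB]] by (simp add: comp_def)
  show "lin (dH*dB) (dH*dB) (\<lambda>V. tprod dH (hmul H) dB (hmul B) (tmap dH dB dB id (Z n) U) (tmap dH dB dB id (Z n) V))" for U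
    using lin_comp[OF T tprod_linR[OF lin_mulH lin_mulB]] by (simp add: comp_def)
  show "lin (dH*dB) (dH*dB) (\<lambda>X. tmap dH dB dB id (Z n) (tprod dH (hmul H) dB (hmul B) X V))" for V
    using lin_comp[OF tprod_linL[OF lin_mulH lin_mulB] T] by (simp add: comp_def)
  show "lin (dH*dB) (dH*dB) (\<lambda>V. tmap dH dB dB id (Z n) (tprod dH (hmul H) dB (hmul B) U V))" for U
    using lin_comp[OF tprod_linR[OF lin_mulH lin_mulB] T] by (simp add: comp_def)
  fix u1 u2 v1 v2 :: "'k vect" assume u1: "u1 \<in> vsp dH" and u2: "u2 \<in> vsp dB" and v1: "v1 \<in> vsp dH" and v2: "v2 \<in> vsp dB"
  show "tprod dH (hmul H) dB (hmul B) (tmap dH dB dB id (Z n) (tv dB u1 u2)) (tmap dH dB dB id (Z n) (tv dB v1 v2))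
       = tmap dH dB dB id (Z n) (tprod dH (hmul H) dB (hmul B) (tv dB u1 u2) (tv dB v1 v2))"
    by (simp add: tmap_tv[OF lin_id lin_Z] u1 u2 v1 v2 Z_vsp tprod_tv[OF lin_mulH lin_mulB] lin_vsp[OF lin_mulH] lin_vsp[OF lin_mulB] tv_vsp Z_mul)
qed

lemma tmap_Z_commute:
  assumes Y: "Y \<in> vsp (dH*dB)"
  shows "tmap dH dB dB (Z' i) (Z i) (tmap dH dB dB id (Z n) Y) = tmap dH dB dB id (Z n) (tmap dH dB dB (Z' i) (Z i) Y)"
proof -
  have "tmap dH dB dB (Z' i) (Z i) (tmap dH dB dB id (Z n) Y) = tmap dH dB dB (Z' i) (Z (i+n)) Y"
    by (rule tmap_tmap_apply[OF lin_id lin_Z lin_Z' lin_Z Y]) (simp_all add: mapeq_def Z_add)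
  also have "\<dots> = tmap dH dB dB id (Z n) (tmap dH dB dB (Z' i) (Z i) Y)"
    by (rule tmap_tmap_apply[OF lin_Z' lin_Z lin_id lin_Z Y, symmetric]) (simp_all add: mapeq_def Z_add add.commute)
  finally show ?thesis .
qed

lemma psi_multiplicative_tv:
  assumes b: "b \<in> vsp dB" and c: "c \<in> vsp dB" and h: "h \<in> vsp dH" and g: "g \<in> vsp dH"
  shows "psi n (tv dH (hmul B (tv dB (Z i b) (Z j c))) (hmul H (tv dH (Z' i h) (Z' j g))))
      = tmap dH dB dB id (Z n) (phi (tv dH (hmul B (tv dB (Z (i-n-1) b) (Z (j-n-1) c))) (hmul H (tv dH (Z' (i+1) h) (Z' (j+1) g)))))"
    "twisted_tprod i j (psi n (tv dH b h)) (psi n (tv dH c g))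
      = tmap dH dB dB id (Z n) (tprod dH (hmul H) dB (hmul B) (phi (tv dH (Z (i-n-1) b) (Z' (i+1) h))) (phi (tv dH (Z (j-n-1) c) (Z' (j+1) g))))"
proof -
  have m1: "hmul B (tv dB (Z i b) (Z j c)) \<in> vsp dB" using lin_vsp[OF lin_mulB tv_vsp[OF Z_vsp[OF b] Z_vsp[OF c]]] .
  have m2: "hmul H (tv dH (Z' i h) (Z' j g)) \<in> vsp dH" using lin_vsp[OF lin_mulH tv_vsp[OF Z'_vsp[OF h] Z'_vsp[OF g]]] .
  have z1: "Z (-n-1) (hmul B (tv dB (Z i b) (Z j c))) = hmul B (tv dB (Z (i-n-1) b) (Z (j-n-1) c))"
    using Z_mul[OF Z_vsp[OF b] Z_vsp[OF c], of "-n-1" i j] Z_Z[OF b, of "-n-1" i "i-n-1"] Z_Z[OF c, of "-n-1" j "j-n-1"] by simp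
  have z2: "aH (hmul H (tv dH (Z' i h) (Z' j g))) = hmul H (tv dH (Z' (i+1) h) (Z' (j+1) g))"
    using aH_mul[OF Z'_vsp[OF h] Z'_vsp[OF g]] aH_Z'[OF h] aH_Z'[OF g] by simp
  show "psi n (tv dH (hmul B (tv dB (Z i b) (Z j c))) (hmul H (tv dH (Z' i h) (Z' j g))))
      = tmap dH dB dB id (Z n) (phi (tv dH (hmul B (tv dB (Z (i-n-1) b) (Z (j-n-1) c))) (hmul H (tv dH (Z' (i+1) h) (Z' (j+1) g)))))"
    using psi_tv[OF m1 m2, of n] z1 z2 by simp
  have P: "tmap dH dB dB (Z' k) (Z k) (psi n (tv dH x y)) = tmap dH dB dB id (Z n) (phi (tv dH (Z (k-n-1) x) (Z' (k+1) y)))"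
    if x: "x \<in> vsp dB" and y: "y \<in> vsp dH" for k x y
  proof -
    have Y: "phi (tv dH (Z (-n-1) x) (aH y)) \<in> vsp (dH*dB)" using phi_tv_vsp[OF Z_vsp[OF x] aH_vsp[OF y]] .
    have "tmap dH dB dB (Z' k) (Z k) (psi n (tv dH x y)) = tmap dH dB dB id (Z n) (tmap dH dB dB (Z' k) (Z k) (phi (tv dH (Z (-n-1) x) (aH y))))"
      by (simp add: psi_tv x y tmap_Z_commute[OF Y])
    also have "\<dots> = tmap dH dB dB id (Z n) (phi (tv dH (Z k (Z (-n-1) x)) (Z' k (aH y))))"
      by (simp add: phi_zpow_tv Z_vsp x aH_vsp y)
    also have "\<dots> = tmap dH dB dB id (Z n) (phi (tv dH (Z (k-n-1) x) (Z' (k+1) y)))"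
    proof -
      have "Z k (Z (-n-1) x) = Z (k-n-1) x" by (rule Z_Z[OF x]) simp
      moreover have "Z' k (aH y) = Z' (k+1) y" using Z'_aH_comm[OF y, of k] aH_Z'[OF y] by simp
      ultimately show ?thesis by simp
    qed
    finally show ?thesis .
  qed
  show "twisted_tprod i j (psi n (tv dH b h)) (psi n (tv dH c g))
      = tmap dH dB dB id (Z n) (tprod dH (hmul H) dB (hmul B) (phi (tv dH (Z (i-n-1) b) (Z' (i+1) h))) (phi (tv dH (Z (j-n-1) c) (Z' (j+1) g))))"
    unfolding twisted_tprod_def P[OF b h] P[OF c g]
    by (rule tprod_id_Z[OF phi_tv_vsp[OF Z_vsp[OF b] Z'_vsp[OF h]] phi_tv_vsp[OF Z_vsp[OF c] Z'_vsp[OF g]]])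
qed

lemma psi_multiplicative_iff_M5: "psi_multiplicative n i j \<longleftrightarrow> cond_M5 B H phi"
proof
  have T: "blin (dH*dB) (tmap dH dB dB id (Z n))" by (rule blin_tmap(1)[OF blin_id zpow_blin[OF blin_alphaB]])
  assume G: "psi_multiplicative n i j"
  show "cond_M5 B H phi" unfolding cond_M5_def Let_def
  proof (intro ballI)
    fix a b h g :: "'k vect" assume a: "a \<in> vsp dB" and b: "b \<in> vsp dB" and h: "h \<in> vsp dH" and g: "g \<in> vsp dH"
    let ?b = "Z (n+1-i) a" and ?c = "Z (n+1-j) b" and ?h = "Z' (-i-1) h" and ?g = "Z' (-j-1) g"
    have e: "Z (i-n-1) ?b = a" "Z (j-n-1) ?c = b" "Z' (i+1) ?h = h" "Z' (j+1) ?g = g"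
      using Z_Z[OF a, of "i-n-1" "n+1-i" 0] Z_Z[OF b, of "j-n-1" "n+1-j" 0] Z'_Z'[OF h, of "i+1" "-i-1" 0] Z'_Z'[OF g, of "j+1" "-j-1" 0]
      by simp_all
    have "psi n (tv dH (hmul B (tv dB (Z i ?b) (Z j ?c))) (hmul H (tv dH (Z' i ?h) (Z' j ?g))))
        = twisted_tprod i j (psi n (tv dH ?b ?h)) (psi n (tv dH ?c ?g))"
      using G Z_vsp[OF a] Z_vsp[OF b] Z'_vsp[OF h] Z'_vsp[OF g] by (simp add: psi_multiplicative_def)
    then have "tmap dH dB dB id (Z n) (phi (tv dH (hmul B (tv dB a b)) (hmul H (tv dH h g))))
       = tmap dH dB dB id (Z n) (tprod dH (hmul H) dB (hmul B) (phi (tv dH a h)) (phi (tv dH b g)))"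
      using psi_multiplicative_tv[OF Z_vsp[OF a, of "n+1-i"] Z_vsp[OF b, of "n+1-j"] Z'_vsp[OF h, of "-i-1"] Z'_vsp[OF g, of "-j-1"], where n=n and i=i and j=j] e by simp
    moreover have "phi (tv dH (hmul B (tv dB a b)) (hmul H (tv dH h g))) \<in> vsp (dH*dB)"
      using phi_tv_vsp[OF lin_vsp[OF lin_mulB tv_vsp[OF a b]] lin_vsp[OF lin_mulH tv_vsp[OF h g]]] .
    moreover have "tprod dH (hmul H) dB (hmul B) (phi (tv dH a h)) (phi (tv dH b g)) \<in> vsp (dH*dB)"
      by (rule tprod_vsp[OF lin_mulH lin_mulB])
    ultimately show "tprod dH (hmul H) dB (hmul B) (phi (tv dH a h)) (phi (tv dH b g))
       = phi (tv dH (hmul B (tv dB a b)) (hmul H (tv dH h g)))"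
      using iv_left[OF T] by metis
  qed
next
  assume "cond_M5 B H phi"
  then have M: "\<forall>a\<in>vsp dB. \<forall>b\<in>vsp dB. \<forall>h\<in>vsp dH. \<forall>g\<in>vsp dH.
      tprod dH (hmul H) dB (hmul B) (phi (tv dH a h)) (phi (tv dH b g))
      = phi (tv dH (hmul B (tv dB a b)) (hmul H (tv dH h g)))"
    by (simp add: cond_M5_def Let_def)
  show "psi_multiplicative n i j" unfolding psi_multiplicative_def
  proof (intro ballI)
    fix b c h g :: "'k vect" assume b: "b \<in> vsp dB" and c: "c \<in> vsp dB" and h: "h \<in> vsp dH" and g: "g \<in> vsp dH"
    show "psi n (tv dH (hmul B (tv dB (Z i b) (Z j c))) (hmul H (tv dH (Z' i h) (Z' j g))))
      = twisted_tprod i j (psi n (tv dH b h)) (psi n (tv dH c g))"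
      unfolding psi_multiplicative_tv[OF b c h g] using M Z_vsp[OF b] Z_vsp[OF c] Z'_vsp[OF h] Z'_vsp[OF g] by simp
  qed
qed

lemma monoidal_law_iff_M5:
  "(\<forall>M N. obj M \<longrightarrow> obj N \<longrightarrow> mapeq (fst (otens (fobj H (fobj B M)) (fobj H (fobj B N))))
       (ddphi n B H phi (otens M N) \<circ> fmor H (fst (otens (fobj B M) (fobj B N))) (mon2 i j B M N) \<circ> mon2 i j H (fobj B M) (fobj B N))
       (fmor B (fst (otens (fobj H M) (fobj H N))) (mon2 i j H M N) \<circ> mon2 i j B (fobj H M) (fobj H N)
        \<circ> tmap (fst (fobj H (fobj B M))) (fst (fobj H (fobj B N))) (fst (fobj B (fobj H N))) (ddphi n B H phi M) (ddphi n B H phi N)))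
   \<longleftrightarrow> cond_M5 B H phi"
  using monoidal_law_if monoidal_law_only_if obj_unit psi_multiplicative_iff_M5 by blast

lemma unit_law_lhs: "(ddphi n B H phi unit_obj \<circ> fmor H (fst (unit_obj::'k::field object)) (mon0 B) \<circ> mon0 H) (ebasis 0) = psi n (tv dH (hone B) (hone H))"
proof -
  have "fmor H 1 (mon0 B) (hone H) = fmor H 1 (mon0 B) (tv dH (ebasis 0) (hone H))" using tv_unitL[OF one_vspH] by simp
  also have "\<dots> = tv dH (mon0 B (ebasis 0)) (id (hone H))"
    unfolding fmor_def by (rule tmap_tv[OF lin_mon0[OF hB] lin_id _ one_vspH]) simp
  also have "\<dots> = tv dH (hone B) (hone H)" by (simp add: mon0_unit[OF hB])
  finally have 1: "fmor H 1 (mon0 B) (hone H) = tv dH (hone B) (hone H)" .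
  have 2: "ddphi n B H phi unit_obj (tv dH (hone B) (hone H)) = psi n (tv dH (hone B) (hone H))"
    using mapeqD[OF tmap_unitL[OF lin_psi] tv_vsp[OF one_vspB one_vspH]] by (simp add: ddphi_eq)
  show ?thesis using 1 2 by (simp add: mon0_unit[OF hH])
qed

lemma unit_law_rhs: "(fmor B (fst (unit_obj::'k::field object)) (mon0 H) \<circ> mon0 B) (ebasis 0) = tv dB (hone H) (hone B)"
proof -
  have "fmor B 1 (mon0 H) (hone B) = fmor B 1 (mon0 H) (tv dB (ebasis 0) (hone B))" using tv_unitL[OF one_vspB] by simp
  also have "\<dots> = tv dB (mon0 H (ebasis 0)) (id (hone B))"
    unfolding fmor_def by (rule tmap_tv[OF lin_mon0[OF hH] lin_id _ one_vspB]) simp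
  also have "\<dots> = tv dB (hone H) (hone B)" by (simp add: mon0_unit[OF hH])
  finally show ?thesis by (simp add: mon0_unit[OF hB])
qed

lemma psi_unit_iff_M6: "psi n (tv dH (hone B) (hone H)) = tv dB (hone H) (hone B) \<longleftrightarrow> cond_M6 B H phi"
proof -
  have T: "blin (dH*dB) (tmap dH dB dB id (Z n))" by (rule blin_tmap(1)[OF blin_id zpow_blin[OF blin_alphaB]])
  have "psi n (tv dH (hone B) (hone H)) = tmap dH dB dB id (Z n) (phi (tv dH (hone B) (hone H)))"
    using psi_tv[OF one_vspB one_vspH] by (simp add: hom_bialgebra_zpow(2)[OF hB] hom_bialgebra_alphaD(2)[OF hH])
  moreover have "tv dB (hone H) (hone B) = tmap dH dB dB id (Z n) (tv dB (hone H) (hone B))"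
    using tmap_tv[OF lin_id lin_Z one_vspH one_vspB, of n] by (simp add: hom_bialgebra_zpow(2)[OF hB])
  ultimately show ?thesis
    unfolding cond_M6_def
    using iv_left[OF T phi_tv_vsp[OF one_vspB one_vspH]] iv_left[OF T tv_vsp[OF one_vspH one_vspB]] by metis
qed

lemma unit_law_iff_M6:
  "mapeq 1 (ddphi n B H phi unit_obj \<circ> fmor H (fst (unit_obj::'k object)) (mon0 B) \<circ> mon0 H)
     (fmor B (fst (unit_obj::'k object)) (mon0 H) \<circ> mon0 B)
   \<longleftrightarrow> cond_M6 B H phi"
proof -
  have "lin (1*dH) (1*dB*dH) (fmor H (fst (unit_obj::'k object)) (mon0 B))"
    unfolding fmor_def unit_obj_simps by (rule tmap_lin[OF lin_mon0[OF hB] lin_id])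
  moreover have "lin (1*(dB*dH)) (1*(dH*dB)) (ddphi n B H phi (unit_obj::'k object))"
    using lin_ddphi[of unit_obj n] by simp
  ultimately have L: "lin 1 (1*(dH*dB)) (ddphi n B H phi unit_obj \<circ> fmor H (fst (unit_obj::'k object)) (mon0 B) \<circ> mon0 H)"
    by (intro lin_dims[OF lin_compI[OF lin_mon0[OF hH] lin_compI]]) simp_all
  have R: "lin 1 (1*dH*dB) (fmor B (fst (unit_obj::'k object)) (mon0 H) \<circ> mon0 B)"
    unfolding fmor_def unit_obj_simps
    by (rule lin_dims[OF lin_compI[OF lin_mon0[OF hB] tmap_lin[OF lin_mon0[OF hH] lin_id]]]) simp_all
  show ?thesis
    unfolding mapeq_1_iff[OF L R] unit_law_lhs unit_law_rhs by (rule psi_unit_iff_M6)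
qed

end

theorem proposition4p8:
  fixes B H :: "('k::field_char_0) hbialg"
    and phi :: "'k lmap"
    and i j n :: int
  assumes "hom_bialgebra B" and "hom_bialgebra H"
    and "lin (hdim B * hdim H) (hdim H * hdim B) phi"
    and "\<forall>u\<in>vsp (hdim B * hdim H).
           phi (tmap (hdim B) (hdim H) (hdim H) (halpha B) (halpha H) u)
           = tmap (hdim H) (hdim B) (hdim B) (halpha H) (halpha B) (phi u)"
  shows "mon_comonad_distr_law i j B H (ddphi n B H phi)
         \<longleftrightarrow> hom_cotwistor B H phi \<and> cond_M5 B H phi \<and> cond_M6 B H phi"
proof -
  interpret hom_twist B H phi by (rule hom_twist.intro) (fact assms)+
  have "hom_cotwistor B H phi \<longleftrightarrow> M1 \<and> M2 \<and> M3 \<and> M4"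
    unfolding hom_cotwistor_def Let_def M1_def M1L_def M1R_def M2_def M2L_def M2R_def M3_def M4_def ..
  then show ?thesis
    unfolding mon_comonad_distr_law_def Let_def deltaB_law_iff_M1 deltaH_law_iff_M2 counitH_law_iff_M3
      counitB_law_iff_M4 monoidal_law_iff_M5 unit_law_iff_M6
    using ddphi_mor ddphi_natural by blast
qed

end
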